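(* Let $n\ge2$. The isolated subsemigroups of $\mathcal{I}^{\ast}_n$ are exactly $\mathcal{I}^{\ast}_n$, $\mathcal{S}_n$, $\mathcal{I}^{\ast}_n\setminus\mathcal{S}_n$, and the maximal subgroups $G(e)$ where $e$ is an idempotent of rank $n-1$.
   Context: Let $X=\{1,\dots,n\}$, $X'=\{1',\dots,n'\}$. $\mathcal{I}^{\ast}_n$ is the set of partitions of $X\cup X'$ all of whose blocks meet both $X$ and $X'$, with product: regard $\alpha$ as a partition of $X\cup X''$ and $\beta$ as a partition of $X''\cup X'$ ($X''$ a third copy of $X$), and let $\alpha\beta$ be the partition of $X\cup X'$ induced by the equivalence on $X\cup X''\cup X'$ generated by the blocks of both. Rank = number of blocks. $\mathcal{S}_n$ is the group of units (elements all of whose blocks are $\{x,\pi(x)'\}$ for a permutation $\pi$). $G(e)$ is the $\mathcal{H}$-class of the idempotent $e$. A subsemigroup $T$ of a semigroup $S$ is isolated if for all $a\in S$ and $k\ge1$, $a^k\in T$ implies $a\in T$. *)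

theory Defs
  imports "HOL-Library.Disjoint_Sets" "HOL-Combinatorics.Permutations"
begin

text \<open>Points of X \<union> X' \<union> X'' are encoded as pairs (tag, i): tag 0 = X (unprimed),
  tag 1 = X' (primed), tag 2 = X'' (the auxiliary middle copy); i ranges over 1..n.\<close>

type_synonym pt = "nat \<times> nat"
type_synonym dpart = "pt set set"

definition pts :: "nat \<Rightarrow> pt set" where
  "pts n = {0, 1} \<times> {1..n}"

definition dual_sym :: "nat \<Rightarrow> dpart set" where
  "dual_sym n = {P. partition_on (pts n) P \<and>
      (\<forall>B\<in>P. (\<exists>i. (0, i) \<in> B) \<and> (\<exists>i. (1, i) \<in> B))}"

text \<open>Product: alpha regarded on X \<union> X'' (primed points moved to tag 2), beta on
  X'' \<union> X' (unprimed points moved to tag 2); take the equivalence generated by all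
  blocks and restrict its classes to X \<union> X'.\<close>
definition lift_left :: "dpart \<Rightarrow> dpart" where
  "lift_left a = (\<lambda>B. (\<lambda>(t, i). (if t = 1 then 2 else t, i)) ` B) ` a"

definition lift_right :: "dpart \<Rightarrow> dpart" where
  "lift_right b = (\<lambda>B. (\<lambda>(t, i). (if t = 0 then 2 else t, i)) ` B) ` b"

definition dmult :: "dpart \<Rightarrow> dpart \<Rightarrow> dpart" where
  "dmult a b =
     (let Bs = lift_left a \<union> lift_right b;
          R = (\<Union>B\<in>Bs. B \<times> B)
      in (\<lambda>C. C \<inter> {p. fst p \<noteq> 2}) ` ((\<Union>Bs) // (R\<^sup>*)) - {{}})"

definition rank :: "dpart \<Rightarrow> nat" where
  "rank a = card a"

definition sym_units :: "nat \<Rightarrow> dpart set" where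
  "sym_units n = {{{(0, i), (1, \<pi> i)} | i. i \<in> {1..n}} | \<pi>. \<pi> permutes {1..n}}"

definition dpow :: "dpart \<Rightarrow> nat \<Rightarrow> dpart" where
  "dpow a k = ((\<lambda>x. dmult x a) ^^ (k - 1)) a"

definition idempotent :: "dpart \<Rightarrow> bool" where
  "idempotent e \<longleftrightarrow> dmult e e = e"

text \<open>Green's H-relation in I*_n (a monoid, so S^1 = S).\<close>
definition H_class :: "nat \<Rightarrow> dpart \<Rightarrow> dpart set" where
  "H_class n e = {a \<in> dual_sym n.
      insert a {dmult s a | s. s \<in> dual_sym n} = insert e {dmult s e | s. s \<in> dual_sym n} \<and>
      insert a {dmult a s | s. s \<in> dual_sym n} = insert e {dmult e s | s. s \<in> dual_sym n}}"

definition subsemigroup :: "nat \<Rightarrow> dpart set \<Rightarrow> bool" where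
  "subsemigroup n T \<longleftrightarrow> T \<noteq> {} \<and> T \<subseteq> dual_sym n \<and> (\<forall>a\<in>T. \<forall>b\<in>T. dmult a b \<in> T)"

definition isolated :: "nat \<Rightarrow> dpart set \<Rightarrow> bool" where
  "isolated n T \<longleftrightarrow> (\<forall>a\<in>dual_sym n. \<forall>k\<ge>1. dpow a k \<in> T \<longrightarrow> a \<in> T)"

end

(*
  An element of I*_n is handled through the equivalence relation of its blocks; the product
  a b is then read off from connectivity in the graph on the three rows X, X'', X', and
  associativity follows by gluing such graphs along a common row.  An element a has a
  kernel and a cokernel (the equivalences it induces on X and on X'); the idempotents are
  exactly the elements idem_of n K with blocks C union C' for the classes C of an
  equivalence K, and the H-class of idem_of n K consists of the elements with kernel and
  cokernel K.

  Some power of every element is idempotent, so an isolated subsemigroup T is governed by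
  the idempotents it contains.  If T contains a unit it contains all units.  If T contains
  idem_of n P where P is neither the identity nor an atom (one class of size two), then
  square roots of the form uniform n R sigma, for involutions sigma, and products with
  elements that swap two classes let T climb to the idempotent of the full relation and
  from there to every idempotent except the identity; hence T is I*_n or I*_n minus S_n.
  Otherwise all non-identity idempotents of T are one and the same atom idem_of n K,
  conjugation by units would produce a second atom, and T is the H-class of idem_of n K,
  an idempotent of rank n - 1.
*)
theory Submission
  imports Defs
begin

section \<open>Block relations\<close>

definition block_rel :: "dpart \<Rightarrow> (pt \<times> pt) set" where
  "block_rel a = {(p, q). \<exists>B\<in>a. p \<in> B \<and> q \<in> B}"

lemma mem_pts_iff: "(t, i) \<in> pts n \<longleftrightarrow> (t = 0 \<or> t = 1) \<and> i \<in> {1..n}"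
  by (auto simp: pts_def)

lemma pts_cases:
  assumes "p \<in> pts n"
  obtains i where "p = (0, i)" "i \<in> {1..n}" | i where "p = (1, i)" "i \<in> {1..n}"
  using assms by (auto simp: pts_def)

lemma equiv_block_rel: "a \<in> dual_sym n \<Longrightarrow> equiv (pts n) (block_rel a)"
  unfolding block_rel_def dual_sym_def by (auto intro: equiv_partition_on)

lemma quotient_block_rel: "a \<in> dual_sym n \<Longrightarrow> pts n // block_rel a = a"
  unfolding block_rel_def dual_sym_def by (simp add: partition_on_eq_quotient)

lemma dual_sym_eqI:
  "a \<in> dual_sym n \<Longrightarrow> b \<in> dual_sym n \<Longrightarrow> block_rel a = block_rel b \<Longrightarrow> a = b"
  using quotient_block_rel by metis

lemma block_rel_sym: "(p, q) \<in> block_rel a \<Longrightarrow> (q, p) \<in> block_rel a"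
  by (auto simp: block_rel_def)

lemma block_rel_trans:
  "a \<in> dual_sym n \<Longrightarrow> (p, q) \<in> block_rel a \<Longrightarrow> (q, r) \<in> block_rel a \<Longrightarrow> (p, r) \<in> block_rel a"
  using equiv_block_rel[of a n] unfolding equiv_def trans_def by blast

lemma block_rel_refl: "a \<in> dual_sym n \<Longrightarrow> p \<in> pts n \<Longrightarrow> (p, p) \<in> block_rel a"
  using equiv_block_rel[of a n] unfolding equiv_def refl_on_def by blast

lemma block_rel_subset: "a \<in> dual_sym n \<Longrightarrow> block_rel a \<subseteq> pts n \<times> pts n"
  using equiv_block_rel[of a n] unfolding equiv_def by blast

lemma block_rel_in_pts:
  "a \<in> dual_sym n \<Longrightarrow> (p, q) \<in> block_rel a \<Longrightarrow> p \<in> pts n \<and> q \<in> pts n"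
  using block_rel_subset by blast

lemma block_rel_meets_tag:
  assumes a: "a \<in> dual_sym n" and p: "p \<in> pts n" and t: "t = 0 \<or> t = 1"
  shows "\<exists>i\<in>{1..n}. (p, (t, i)) \<in> block_rel a"
proof -
  obtain B where "B \<in> a" "p \<in> B"
    using a p by (auto simp: dual_sym_def partition_on_def)
  moreover obtain i where "(t, i) \<in> B"
    using a \<open>B \<in> a\<close> t by (auto simp: dual_sym_def)
  ultimately have "(p, (t, i)) \<in> block_rel a" by (auto simp: block_rel_def)
  moreover have "i \<in> {1..n}"
    using block_rel_in_pts[OF a calculation] by (simp add: mem_pts_iff)
  ultimately show ?thesis by blast
qed

lemma same_class_rel_quotient: "equiv A E \<Longrightarrow> {(p, q). \<exists>B\<in>A // E. p \<in> B \<and> q \<in> B} = E"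
proof safe
  fix p q B assume E: "equiv A E" and B: "B \<in> A // E" "p \<in> B" "q \<in> B"
  then show "(p, q) \<in> E" by (auto elim!: quotientE) (meson E equivE symD transD)
next
  fix p q assume E: "equiv A E" and pq: "(p, q) \<in> E"
  then have "p \<in> A" "q \<in> E `` {p}" "p \<in> E `` {p}"
    using equiv_class_self[OF E] equiv_type[OF E] by auto
  then show "\<exists>B\<in>A // E. p \<in> B \<and> q \<in> B" by (blast intro: quotientI)
qed

lemma quotient_in_dual_sym:
  assumes E: "equiv (pts n) E"
    and meets: "\<And>p t. p \<in> pts n \<Longrightarrow> t = 0 \<or> t = 1 \<Longrightarrow> \<exists>i. (p, (t, i)) \<in> E"
  shows "pts n // E \<in> dual_sym n" "block_rel (pts n // E) = E"
proof -
  show "block_rel (pts n // E) = E"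
    unfolding block_rel_def by (rule same_class_rel_quotient[OF E])
  have "(\<exists>i. (0, i) \<in> B) \<and> (\<exists>i. (1, i) \<in> B)" if "B \<in> pts n // E" for B
    using that meets by (auto elim!: quotientE)
  then show "pts n // E \<in> dual_sym n"
    using partition_on_quotient[OF E] by (simp add: dual_sym_def)
qed

definition fibre_rel :: "nat \<Rightarrow> (pt \<Rightarrow> 'l) \<Rightarrow> (pt \<times> pt) set" where
  "fibre_rel n k = {(p, q). p \<in> pts n \<and> q \<in> pts n \<and> k p = k q}"

definition fibres :: "nat \<Rightarrow> (pt \<Rightarrow> 'l) \<Rightarrow> dpart" where
  "fibres n k = pts n // fibre_rel n k"

lemma equiv_fibre_rel: "equiv (pts n) (fibre_rel n k)"
  by (auto simp: fibre_rel_def equiv_def refl_on_def sym_def trans_def)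

lemma fibres:
  assumes "\<And>i. i \<in> {1..n} \<Longrightarrow> \<exists>j\<in>{1..n}. k (1, j) = k (0, i)"
    and "\<And>j. j \<in> {1..n} \<Longrightarrow> \<exists>i\<in>{1..n}. k (0, i) = k (1, j)"
  shows "fibres n k \<in> dual_sym n" "block_rel (fibres n k) = fibre_rel n k"
proof -
  have meets: "\<exists>i. (p, (t, i)) \<in> fibre_rel n k" if "p \<in> pts n" "t = 0 \<or> t = 1" for p t
    using that(1)
  proof (cases rule: pts_cases)
    case (1 i)
    then show ?thesis using that assms(1)[of i] by (force simp: fibre_rel_def mem_pts_iff)
  next
    case (2 i)
    then show ?thesis using that assms(2)[of i] by (force simp: fibre_rel_def mem_pts_iff)
  qed
  then show "fibres n k \<in> dual_sym n" "block_rel (fibres n k) = fibre_rel n k"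
    unfolding fibres_def using quotient_in_dual_sym[OF equiv_fibre_rel meets] by auto
qed

section \<open>The product as connectivity\<close>

definition rel_map :: "('a \<Rightarrow> 'b) \<Rightarrow> ('a \<times> 'a) set \<Rightarrow> ('b \<times> 'b) set" where
  "rel_map g R = map_prod g g ` R"

lemma rel_mapI: "(p, q) \<in> R \<Longrightarrow> (g p, g q) \<in> rel_map g R"
  unfolding rel_map_def by (rule image_eqI[of _ _ "(p, q)"]) simp_all

lemma rel_mapE:
  assumes "(u, v) \<in> rel_map g R"
  obtains p q where "(p, q) \<in> R" "u = g p" "v = g q"
  using assms by (auto simp: rel_map_def)

lemma sym_rel_map: "sym R \<Longrightarrow> sym (rel_map g R)"
  by (auto simp: rel_map_def sym_def)

lemma rel_map_Un: "rel_map g (A \<union> B) = rel_map g A \<union> rel_map g B"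
  by (auto simp: rel_map_def)

lemma rel_map_comp: "rel_map g (rel_map f R) = rel_map (g \<circ> f) R"
  unfolding rel_map_def by (simp add: image_comp map_prod.comp)

lemma rel_map_cong:
  "R \<subseteq> A \<times> A \<Longrightarrow> (\<And>p. p \<in> A \<Longrightarrow> g p = g' p) \<Longrightarrow> rel_map g R = rel_map g' R"
  unfolding rel_map_def by (intro image_cong refl) auto

lemma rel_map_subset: "R \<subseteq> A \<times> A \<Longrightarrow> g ` A \<subseteq> B \<Longrightarrow> rel_map g R \<subseteq> B \<times> B"
  by (force simp: rel_map_def)

lemma quotient_Int_restrict:
  assumes E: "equiv V E" and A: "A \<subseteq> V"
  shows "(\<lambda>C. C \<inter> A) ` (V // E) - {{}} = A // (E \<inter> A \<times> A)"
proof (intro equalityI subsetI)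
  fix D assume "D \<in> (\<lambda>C. C \<inter> A) ` (V // E) - {{}}"
  then obtain x y where "x \<in> V" "D = E `` {x} \<inter> A" "y \<in> D"
    by (auto elim!: quotientE)
  then have "D = (E \<inter> A \<times> A) `` {y}" "y \<in> A"
    using equiv_class_eq[OF E, of x y] by auto
  then show "D \<in> A // (E \<inter> A \<times> A)" by (auto intro: quotientI)
next
  fix D assume "D \<in> A // (E \<inter> A \<times> A)"
  then obtain y where y: "y \<in> A" "D = (E \<inter> A \<times> A) `` {y}" by (auto elim!: quotientE)
  then have "D = E `` {y} \<inter> A" "y \<in> D" "E `` {y} \<in> V // E"
    using A equiv_class_self[OF E] by (auto intro: quotientI)
  then show "D \<in> (\<lambda>C. C \<inter> A) ` (V // E) - {{}}" by blast
qed

lemma equiv_rtrancl_restrict: "sym G \<Longrightarrow> equiv V (G\<^sup>* \<inter> V \<times> V)"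
  by (rule equivI) (auto simp: refl_on_def trans_def sym_rtrancl[THEN symD] intro: symI rtrancl_trans)

lemma quotient_rtrancl_restrict:
  assumes "G \<subseteq> V \<times> V"
  shows "V // G\<^sup>* = V // (G\<^sup>* \<inter> V \<times> V)"
proof -
  have "G\<^sup>* `` {x} \<subseteq> V" if "x \<in> V" for x
  proof
    fix y assume "y \<in> G\<^sup>* `` {x}"
    then have "(x, y) \<in> G\<^sup>*" by simp
    then show "y \<in> V" by (induction rule: rtrancl_induct) (use that assms in auto)
  qed
  then show ?thesis unfolding quotient_def by auto
qed

text \<open>Besides the rows 0, 1, 2 of the definition of the product, the proof
  of associativity uses a second middle row 3.\<close>

definition retag :: "nat \<Rightarrow> nat \<Rightarrow> pt \<Rightarrow> pt" where
  "retag s t p = (if fst p = 0 then s else t, snd p)"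

lemma retag_simps [simp]:
  "retag s t (0, i) = (s, i)" "retag s t (1, i) = (t, i)" "retag s t (Suc 0, i) = (t, i)"
  by (simp_all add: retag_def)

lemma retag_01: "p \<in> pts n \<Longrightarrow> retag 0 1 p = p"
  by (auto elim: pts_cases)

definition prod_graph :: "dpart \<Rightarrow> dpart \<Rightarrow> (pt \<times> pt) set" where
  "prod_graph a b = rel_map (retag 0 2) (block_rel a) \<union> rel_map (retag 2 1) (block_rel b)"

definition pts3 :: "nat \<Rightarrow> pt set" where
  "pts3 n = {0, 1, 2} \<times> {1..n}"

lemma prod_graph_left:
  "(p, q) \<in> block_rel a \<Longrightarrow> (retag 0 2 p, retag 0 2 q) \<in> (prod_graph a b)\<^sup>*"
  unfolding prod_graph_def by (blast intro: rel_mapI)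

lemma prod_graph_right:
  "(p, q) \<in> block_rel b \<Longrightarrow> (retag 2 1 p, retag 2 1 q) \<in> (prod_graph a b)\<^sup>*"
  unfolding prod_graph_def by (blast intro: rel_mapI)

lemma sym_prod_graph: "sym (prod_graph a b)"
  unfolding prod_graph_def
  by (intro sym_Un sym_rel_map) (auto simp: sym_def block_rel_def)

lemma prod_graph_rtrancl_sym: "(p, q) \<in> (prod_graph a b)\<^sup>* \<Longrightarrow> (q, p) \<in> (prod_graph a b)\<^sup>*"
  using sym_rtrancl[OF sym_prod_graph] by (rule symD)

lemma prod_graph_subset:
  assumes "a \<in> dual_sym n" "b \<in> dual_sym n"
  shows "prod_graph a b \<subseteq> pts3 n \<times> pts3 n"
proof -
  have "retag s t ` pts n \<subseteq> pts3 n" if "s \<in> {0, 1, 2}" "t \<in> {0, 1, 2}" for s t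
    using that by (auto simp: pts3_def elim!: pts_cases)
  then show ?thesis
    unfolding prod_graph_def
    using rel_map_subset[OF block_rel_subset[OF assms(1)], of "retag 0 2"]
      rel_map_subset[OF block_rel_subset[OF assms(2)], of "retag 2 1"] by auto
qed

lemma UN_image_image_Times:
  "(\<Union>B\<in>(`) f ` P. B \<times> B) = rel_map f {(p, q). \<exists>B\<in>P. p \<in> B \<and> q \<in> B}"
  by (auto simp: rel_map_def image_iff)

lemma lift_graph:
  assumes a: "a \<in> dual_sym n" and b: "b \<in> dual_sym n"
  shows "\<Union>(lift_left a \<union> lift_right b) = pts3 n"
    and "(\<Union>B\<in>lift_left a \<union> lift_right b. B \<times> B) = prod_graph a b"
proof -
  have blocks: "\<Union> a = pts n" "\<Union> b = pts n"
    using a b by (auto simp: dual_sym_def partition_on_def)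
  have left: "lift_left a = (`) (retag 0 2) ` a"
    unfolding lift_left_def
  proof (intro image_cong refl)
    fix B p assume "B \<in> a" "p \<in> B"
    then have "p \<in> pts n" using blocks by blast
    then show "(\<lambda>(t, i). (if t = 1 then 2 else t, i)) p = retag 0 2 p" by (auto elim: pts_cases)
  qed
  have right: "lift_right b = (`) (retag 2 1) ` b"
    unfolding lift_right_def
  proof (intro image_cong refl)
    fix B p assume "B \<in> b" "p \<in> B"
    then have "p \<in> pts n" using blocks by blast
    then show "(\<lambda>(t, i). (if t = 0 then 2 else t, i)) p = retag 2 1 p" by (auto elim: pts_cases)
  qed
  have "retag 0 2 ` pts n \<union> retag 2 1 ` pts n = pts3 n"
    by (auto simp: pts3_def pts_def image_iff)
  then show "\<Union>(lift_left a \<union> lift_right b) = pts3 n"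
    "(\<Union>B\<in>lift_left a \<union> lift_right b. B \<times> B) = prod_graph a b"
    unfolding prod_graph_def block_rel_def left right UN_Un UN_image_image_Times Union_Un_distrib
    by (simp_all only: image_Union[symmetric] blocks)
qed

lemma prod_graph_meets_tag:
  assumes a: "a \<in> dual_sym n" and b: "b \<in> dual_sym n"
    and p: "p \<in> pts n" and t: "t = 0 \<or> t = 1"
  shows "\<exists>i. (p, (t, i)) \<in> (prod_graph a b)\<^sup>* \<inter> pts n \<times> pts n"
proof -
  have down: "\<exists>k. ((0, i), (1, k)) \<in> (prod_graph a b)\<^sup>* \<and> k \<in> {1..n}" if i: "i \<in> {1..n}" for i
  proof -
    obtain j where j: "((0, i), (1, j)) \<in> block_rel a" "j \<in> {1..n}"
      using block_rel_meets_tag[OF a, of "(0, i)" 1] i by (auto simp: mem_pts_iff)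
    obtain k where k: "((0, j), (1, k)) \<in> block_rel b" "k \<in> {1..n}"
      using block_rel_meets_tag[OF b, of "(0, j)" 1] j(2) by (auto simp: mem_pts_iff)
    show ?thesis
      using rtrancl_trans[OF prod_graph_left[OF j(1), simplified] prod_graph_right[OF k(1), simplified]] k(2) by auto
  qed
  have up: "\<exists>k. ((1, i), (0, k)) \<in> (prod_graph a b)\<^sup>* \<and> k \<in> {1..n}" if i: "i \<in> {1..n}" for i
  proof -
    obtain j where j: "((1, i), (0, j)) \<in> block_rel b" "j \<in> {1..n}"
      using block_rel_meets_tag[OF b, of "(1, i)" 0] i by (auto simp: mem_pts_iff)
    obtain k where k: "((1, j), (0, k)) \<in> block_rel a" "k \<in> {1..n}"
      using block_rel_meets_tag[OF a, of "(1, j)" 0] j(2) by (auto simp: mem_pts_iff)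
    show ?thesis
      using rtrancl_trans[OF prod_graph_right[OF j(1), simplified] prod_graph_left[OF k(1), simplified]] k(2) by auto
  qed
  from p show ?thesis
  proof (cases rule: pts_cases)
    case (1 i)
    then show ?thesis using t down by (cases "t = 0") (auto simp: mem_pts_iff)
  next
    case (2 i)
    then show ?thesis using t up by (cases "t = 0") (auto simp: mem_pts_iff)
  qed
qed

lemma dmult_eq_quotient:
  assumes a: "a \<in> dual_sym n" and b: "b \<in> dual_sym n"
  shows "dmult a b = pts n // ((prod_graph a b)\<^sup>* \<inter> pts n \<times> pts n)"
proof -
  let ?G = "prod_graph a b"
  let ?E = "?G\<^sup>* \<inter> pts3 n \<times> pts3 n"
  have sub: "?G \<subseteq> pts3 n \<times> pts3 n" by (rule prod_graph_subset[OF a b])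
  have E: "equiv (pts3 n) ?E" by (rule equiv_rtrancl_restrict[OF sym_prod_graph])
  have pts: "pts n \<subseteq> pts3 n" by (auto simp: pts_def pts3_def)
  have cut: "C \<inter> {p. fst p \<noteq> 2} = C \<inter> pts n" if "C \<in> pts3 n // ?E" for C
  proof -
    have "C \<subseteq> pts3 n" using that Union_quotient[OF E] by blast
    then show ?thesis by (auto simp: pts_def pts3_def)
  qed
  have "dmult a b = (\<lambda>C. C \<inter> {p. fst p \<noteq> 2}) ` (pts3 n // ?E) - {{}}"
    unfolding dmult_def Let_def lift_graph[OF a b] quotient_rtrancl_restrict[OF sub] ..
  also have "\<dots> = (\<lambda>C. C \<inter> pts n) ` (pts3 n // ?E) - {{}}"
    using cut by (simp cong: image_cong)
  also have "\<dots> = pts n // (?E \<inter> pts n \<times> pts n)"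
    by (rule quotient_Int_restrict[OF E pts])
  also have "?E \<inter> pts n \<times> pts n = ?G\<^sup>* \<inter> pts n \<times> pts n"
    using pts by blast
  finally show ?thesis .
qed

lemma
  assumes a: "a \<in> dual_sym n" and b: "b \<in> dual_sym n"
  shows dmult_in_dual_sym: "dmult a b \<in> dual_sym n"
    and block_rel_dmult: "block_rel (dmult a b) = (prod_graph a b)\<^sup>* \<inter> pts n \<times> pts n"
  unfolding dmult_eq_quotient[OF a b]
  using quotient_in_dual_sym[OF equiv_rtrancl_restrict[OF sym_prod_graph] prod_graph_meets_tag[OF a b]]
  by blast+

lemma block_rel_dmultI:
  "a \<in> dual_sym n \<Longrightarrow> b \<in> dual_sym n \<Longrightarrow> p \<in> pts n \<Longrightarrow> q \<in> pts n \<Longrightarrow>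
    (p, q) \<in> (prod_graph a b)\<^sup>* \<Longrightarrow> (p, q) \<in> block_rel (dmult a b)"
  by (simp add: block_rel_dmult)

lemma dmult_invariant:
  assumes a: "a \<in> dual_sym n" and b: "b \<in> dual_sym n"
    and left: "\<And>p q. (p, q) \<in> block_rel a \<Longrightarrow> h (retag 0 2 p) = h (retag 0 2 q)"
    and right: "\<And>p q. (p, q) \<in> block_rel b \<Longrightarrow> h (retag 2 1 p) = h (retag 2 1 q)"
    and pq: "(p, q) \<in> block_rel (dmult a b)"
  shows "h p = h q"
proof -
  have "(p, q) \<in> (prod_graph a b)\<^sup>*" using pq block_rel_dmult[OF a b] by auto
  then show ?thesis
  proof (induction rule: rtrancl_induct)
    case (step y z)
    from step(2) have "h y = h z"
      unfolding prod_graph_def by (elim UnE rel_mapE) (metis left, metis right)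
    with step(3) show ?case by simp
  qed simp
qed

section \<open>Associativity\<close>

lemma rtrancl_rel_map_inj:
  assumes "inj g"
  shows "(g p, g q) \<in> (rel_map g R)\<^sup>* \<longleftrightarrow> (p, q) \<in> R\<^sup>*"
proof
  assume "(p, q) \<in> R\<^sup>*"
  then show "(g p, g q) \<in> (rel_map g R)\<^sup>*"
    by (induction rule: rtrancl_induct) (auto intro: rtrancl_into_rtrancl rel_mapI)
next
  have "(u, v) \<in> (rel_map g R)\<^sup>* \<Longrightarrow> u = g p \<Longrightarrow> \<exists>q. v = g q \<and> (p, q) \<in> R\<^sup>*" for u v
  proof (induction rule: rtrancl_induct)
    case (step y z)
    then obtain q where q: "y = g q" "(p, q) \<in> R\<^sup>*" by auto
    from step(2) obtain r s where rs: "(r, s) \<in> R" "y = g r" "z = g s" by (auto elim: rel_mapE)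
    then have "r = q" using q assms by (auto dest: injD)
    then show ?case using rs q by (auto intro: rtrancl_into_rtrancl)
  qed blast
  moreover assume "(g p, g q) \<in> (rel_map g R)\<^sup>*"
  ultimately show "(p, q) \<in> R\<^sup>*" using assms by (auto dest: injD)
qed

lemma rel_map_rtrancl_restrict:
  assumes "inj g"
  shows "rel_map g (R\<^sup>* \<inter> A \<times> A) = (rel_map g R)\<^sup>* \<inter> g ` A \<times> g ` A"
  using rtrancl_rel_map_inj[OF assms] by (auto simp: rel_map_def)

text \<open>The source of associativity: a product computed on the rows \<open>V\<^sub>1\<close> of a larger
  diagram may be replaced by its blocks, which live on the rows \<open>W\<close> it shares with the rest.\<close>

lemma rtrancl_Un_glue:
  assumes G: "G \<subseteq> V\<^sub>1 \<times> V\<^sub>1" and H: "H \<subseteq> V\<^sub>2 \<times> V\<^sub>2" and W: "V\<^sub>1 \<inter> V\<^sub>2 \<subseteq> W"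
    and x: "x \<notin> V\<^sub>1 - W" and y: "y \<notin> V\<^sub>1 - W"
  shows "(x, y) \<in> (G \<union> H)\<^sup>* \<longleftrightarrow> (x, y) \<in> ((G\<^sup>* \<inter> W \<times> W) \<union> H)\<^sup>*"
proof
  define K where "K = (G\<^sup>* \<inter> W \<times> W) \<union> H"
  have G_field: "w = z \<or> z \<in> V\<^sub>1" if "(w, z) \<in> G\<^sup>*" for w z
    using that by (induction rule: rtrancl_induct) (use G in auto)
  have close: "(x, z) \<in> K\<^sup>*"
    if "(x, w) \<in> K\<^sup>*" "w \<in> W" "(w, z) \<in> G\<^sup>*" "z \<notin> V\<^sub>1 - W" for w z
  proof (cases "w = z")
    case False
    then have "z \<in> W" using G_field that(3,4) by blast
    then have "(w, z) \<in> K" using that(2,3) unfolding K_def by blast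
    with that(1) show ?thesis by (rule rtrancl_into_rtrancl)
  qed (use that in simp)
  have inv: "(\<exists>w. (x, w) \<in> K\<^sup>* \<and> w \<in> W \<and> (w, z) \<in> G\<^sup>*) \<or> ((x, z) \<in> K\<^sup>* \<and> z \<notin> V\<^sub>1 - W)"
    if "(x, z) \<in> (G \<union> H)\<^sup>*" for z
    using that
  proof (induction rule: rtrancl_induct)
    case (step y z)
    from step(2) show ?case
    proof
      assume yz: "(y, z) \<in> G"
      then have "y \<in> V\<^sub>1" using G by blast
      with step(3) show ?case
        using yz by (blast intro: rtrancl_into_rtrancl)
    next
      assume yz: "(y, z) \<in> H"
      then have "y \<notin> V\<^sub>1 - W" "z \<notin> V\<^sub>1 - W" using H W by blast+
      then have "(x, y) \<in> K\<^sup>*" using step(3) close by blast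
      moreover have "(y, z) \<in> K" using yz unfolding K_def by blast
      ultimately show ?case using \<open>z \<notin> V\<^sub>1 - W\<close> by (blast intro: rtrancl_into_rtrancl)
    qed
  qed (use x in blast)
  assume "(x, y) \<in> (G \<union> H)\<^sup>*"
  from inv[OF this] show "(x, y) \<in> K\<^sup>*" using close y by blast
next
  have "(G\<^sup>* \<inter> W \<times> W) \<union> H \<subseteq> (G \<union> H)\<^sup>*"
    using rtrancl_mono[of G "G \<union> H"] by blast
  then have "((G\<^sup>* \<inter> W \<times> W) \<union> H)\<^sup>* \<subseteq> (G \<union> H)\<^sup>*"
    using rtrancl_subset_rtrancl by blast
  then show "(x, y) \<in> ((G\<^sup>* \<inter> W \<times> W) \<union> H)\<^sup>* \<Longrightarrow> (x, y) \<in> (G \<union> H)\<^sup>*" by blast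
qed

definition map_tag :: "(nat \<Rightarrow> nat) \<Rightarrow> pt \<Rightarrow> pt" where
  "map_tag f p = (f (fst p), snd p)"

lemma inj_map_tag: "inj f \<Longrightarrow> inj (map_tag f)"
  by (auto simp: map_tag_def inj_def prod_eq_iff)

lemma map_tag_retag: "map_tag f \<circ> retag s t = retag (f s) (f t)"
  by (auto simp: map_tag_def retag_def)

lemma map_tag_pts: "p \<in> pts n \<Longrightarrow> map_tag f p = retag (f 0) (f 1) p"
  by (auto simp: map_tag_def elim: pts_cases)

lemma block_rel_dmult_retag:
  fixes f :: "nat \<Rightarrow> nat"
  assumes a: "a \<in> dual_sym n" and b: "b \<in> dual_sym n" and f: "inj f"
  shows "rel_map (retag (f 0) (f 1)) (block_rel (dmult a b)) =
    (rel_map (retag (f 0) (f 2)) (block_rel a) \<union> rel_map (retag (f 2) (f 1)) (block_rel b))\<^sup>*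
      \<inter> retag (f 0) (f 1) ` pts n \<times> retag (f 0) (f 1) ` pts n"
proof -
  have sub: "block_rel (dmult a b) \<subseteq> pts n \<times> pts n"
    by (rule block_rel_subset[OF dmult_in_dual_sym[OF a b]])
  have "rel_map (retag (f 0) (f 1)) (block_rel (dmult a b)) = rel_map (map_tag f) (block_rel (dmult a b))"
    using map_tag_pts by (intro rel_map_cong[OF sub]) simp
  also have "\<dots> = (rel_map (map_tag f) (prod_graph a b))\<^sup>* \<inter> map_tag f ` pts n \<times> map_tag f ` pts n"
    unfolding block_rel_dmult[OF a b] by (rule rel_map_rtrancl_restrict[OF inj_map_tag[OF f]])
  also have "map_tag f ` pts n = retag (f 0) (f 1) ` pts n"
    using map_tag_pts by (rule image_cong[OF refl])
  finally show ?thesis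
    unfolding prod_graph_def rel_map_Un rel_map_comp map_tag_retag .
qed

definition triple_graph :: "dpart \<Rightarrow> dpart \<Rightarrow> dpart \<Rightarrow> (pt \<times> pt) set" where
  "triple_graph a b c =
    rel_map (retag 0 2) (block_rel a) \<union> rel_map (retag 2 3) (block_rel b) \<union> rel_map (retag 3 1) (block_rel c)"

definition tagged :: "nat set \<Rightarrow> nat \<Rightarrow> pt set" where
  "tagged S n = S \<times> {1..n}"

lemma rel_map_retag_tagged:
  "a \<in> dual_sym n \<Longrightarrow> s \<in> S \<Longrightarrow> t \<in> S \<Longrightarrow> rel_map (retag s t) (block_rel a) \<subseteq> tagged S n \<times> tagged S n"
  by (rule rel_map_subset[OF block_rel_subset]) (auto simp: tagged_def elim: pts_cases)

lemma retag_image_pts: "retag s t ` pts n = tagged {s, t} n"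
  by (auto simp: tagged_def pts_def image_iff)

lemma tagged_01: "tagged {0, 1} n = pts n"
  by (simp add: tagged_def pts_def)

lemma block_rel_dmult_assoc_left:
  assumes a: "a \<in> dual_sym n" and b: "b \<in> dual_sym n" and c: "c \<in> dual_sym n"
  shows "block_rel (dmult (dmult a b) c) = (triple_graph a b c)\<^sup>* \<inter> pts n \<times> pts n"
proof -
  let ?AB = "rel_map (retag 0 2) (block_rel a) \<union> rel_map (retag 2 3) (block_rel b)"
  let ?C = "rel_map (retag 3 1) (block_rel c)"
  have ab: "dmult a b \<in> dual_sym n" by (rule dmult_in_dual_sym[OF a b])
  have abc: "dmult (dmult a b) c \<in> dual_sym n" by (rule dmult_in_dual_sym[OF ab c])
  have "Transposition.transpose 1 3 (0::nat) = 0" "Transposition.transpose 1 3 (1::nat) = 3"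
    "Transposition.transpose 1 3 (2::nat) = 2"
    by simp_all
  then have "rel_map (retag 0 3) (block_rel (dmult a b)) = ?AB\<^sup>* \<inter> tagged {0, 3} n \<times> tagged {0, 3} n"
    using block_rel_dmult_retag[OF a b inj_transpose[of 1 3]] by (simp only: retag_image_pts)
  moreover have "Transposition.transpose 2 3 (0::nat) = 0" "Transposition.transpose 2 3 (1::nat) = 1"
    "Transposition.transpose 2 3 (2::nat) = 3"
    by simp_all
  then have "block_rel (dmult (dmult a b) c) =
      (rel_map (retag 0 3) (block_rel (dmult a b)) \<union> ?C)\<^sup>* \<inter> pts n \<times> pts n"
    using block_rel_dmult_retag[OF ab c inj_transpose[of 2 3]]
      rel_map_cong[OF block_rel_subset[OF abc] retag_01]
    by (simp only: retag_image_pts tagged_01) (simp add: rel_map_def)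
  moreover have AB: "?AB \<subseteq> tagged {0, 2, 3} n \<times> tagged {0, 2, 3} n"
    using a b by (intro Un_least rel_map_retag_tagged) simp_all
  moreover have C: "?C \<subseteq> tagged {3, 1} n \<times> tagged {3, 1} n"
    using c by (intro rel_map_retag_tagged) simp_all
  moreover have "(x, y) \<in> (?AB \<union> ?C)\<^sup>* \<longleftrightarrow> (x, y) \<in> ((?AB\<^sup>* \<inter> tagged {0, 3} n \<times> tagged {0, 3} n) \<union> ?C)\<^sup>*"
    if "x \<in> pts n" "y \<in> pts n" for x y
    by (rule rtrancl_Un_glue[OF AB C]) (use that in \<open>auto simp: tagged_def pts_def\<close>)
  ultimately show ?thesis
    unfolding triple_graph_def by auto
qed

lemma block_rel_dmult_assoc_right:
  assumes a: "a \<in> dual_sym n" and b: "b \<in> dual_sym n" and c: "c \<in> dual_sym n"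
  shows "block_rel (dmult a (dmult b c)) = (triple_graph a b c)\<^sup>* \<inter> pts n \<times> pts n"
proof -
  let ?A = "rel_map (retag 0 2) (block_rel a)"
  let ?BC = "rel_map (retag 2 3) (block_rel b) \<union> rel_map (retag 3 1) (block_rel c)"
  define f :: "nat \<Rightarrow> nat" where "f = Transposition.transpose 0 2 \<circ> Transposition.transpose 2 3"
  have "inj f" "f 0 = 2" "f 1 = 1" "f 2 = 3"
    by (simp_all add: f_def inj_compose)
  then have "rel_map (retag 2 1) (block_rel (dmult b c)) = ?BC\<^sup>* \<inter> tagged {2, 1} n \<times> tagged {2, 1} n"
    using block_rel_dmult_retag[OF b c, of f] by (simp only: retag_image_pts)
  moreover have "block_rel (dmult a (dmult b c)) =
      (?A \<union> rel_map (retag 2 1) (block_rel (dmult b c)))\<^sup>* \<inter> pts n \<times> pts n"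
    unfolding block_rel_dmult[OF a dmult_in_dual_sym[OF b c]] prod_graph_def ..
  moreover have BC: "?BC \<subseteq> tagged {2, 3, 1} n \<times> tagged {2, 3, 1} n"
    using b c by (intro Un_least rel_map_retag_tagged) simp_all
  moreover have A: "?A \<subseteq> tagged {0, 2} n \<times> tagged {0, 2} n"
    using a by (intro rel_map_retag_tagged) simp_all
  moreover have "(x, y) \<in> (?BC \<union> ?A)\<^sup>* \<longleftrightarrow> (x, y) \<in> ((?BC\<^sup>* \<inter> tagged {2, 1} n \<times> tagged {2, 1} n) \<union> ?A)\<^sup>*"
    if "x \<in> pts n" "y \<in> pts n" for x y
    by (rule rtrancl_Un_glue[OF BC A]) (use that in \<open>auto simp: tagged_def pts_def\<close>)
  ultimately show ?thesis
    unfolding triple_graph_def by (auto simp: Un_ac)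
qed

lemma dmult_assoc:
  assumes a: "a \<in> dual_sym n" and b: "b \<in> dual_sym n" and c: "c \<in> dual_sym n"
  shows "dmult (dmult a b) c = dmult a (dmult b c)"
  by (rule dual_sym_eqI[where n = n])
     (use a b c in \<open>simp_all add: dmult_in_dual_sym block_rel_dmult_assoc_left block_rel_dmult_assoc_right\<close>)

section \<open>Powers\<close>

lemma dpow_1 [simp]: "dpow a 1 = a" "dpow a (Suc 0) = a"
  by (simp_all add: dpow_def)

lemma dpow_Suc: "1 \<le> k \<Longrightarrow> dpow a (Suc k) = dmult (dpow a k) a"
  unfolding dpow_def by (cases k) auto

lemma dpow_2: "dpow a 2 = dmult a a"
  using dpow_Suc[of 1 a] by (simp add: numeral_2_eq_2)

lemma dpow_in_dual_sym:
  assumes "a \<in> dual_sym n" and "1 \<le> k"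
  shows "dpow a k \<in> dual_sym n"
  using assms(2) by (induction k rule: dec_induct) (simp_all add: assms(1) dpow_Suc dmult_in_dual_sym)

lemma dpow_add:
  assumes a: "a \<in> dual_sym n" and i: "1 \<le> i" and j: "1 \<le> j"
  shows "dpow a (i + j) = dmult (dpow a i) (dpow a j)"
  using j
proof (induction j rule: dec_induct)
  case (step k)
  have "dpow a (i + Suc k) = dmult (dpow a (i + k)) a"
    using dpow_Suc[of "i + k" a] i by simp
  also have "\<dots> = dmult (dmult (dpow a i) (dpow a k)) a"
    using step.IH by simp
  also have "\<dots> = dmult (dpow a i) (dpow a (Suc k))"
    using dmult_assoc[OF dpow_in_dual_sym[OF a i] dpow_in_dual_sym[OF a step.hyps(1)] a] step.hyps(1)
    by (simp add: dpow_Suc)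
  finally show ?case .
qed (use i in \<open>simp add: dpow_Suc\<close>)

lemma finite_dual_sym: "finite (dual_sym n)"
proof (rule finite_subset)
  show "dual_sym n \<subseteq> Pow (Pow (pts n))"
    unfolding dual_sym_def partition_on_def by auto
qed (simp add: pts_def)

text \<open>The usual argument for finite semigroups: the powers of \<open>a\<close> are eventually periodic,
  and a power whose exponent is a large multiple of the period is idempotent.\<close>

lemma ex_idempotent_dpow:
  assumes a: "a \<in> dual_sym n"
  obtains m where "m \<ge> 2" "idempotent (dpow a m)"
proof -
  let ?N = "card (dual_sym n)"
  have "card (dpow a ` {1..?N + 1}) \<le> ?N"
    by (rule card_mono[OF finite_dual_sym]) (use dpow_in_dual_sym[OF a] in auto)
  then have "\<not> inj_on (dpow a) {1..?N + 1}"
    by (auto dest: card_image)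
  then obtain x y where xy: "1 \<le> x" "1 \<le> y" "x \<noteq> y" "dpow a x = dpow a y"
    unfolding inj_on_def by (meson atLeastAtMost_iff)
  obtain i p where ip: "1 \<le> i" "1 \<le> p" "dpow a i = dpow a (i + p)"
  proof (cases "x < y")
    case True
    then show ?thesis using that[of x "y - x"] xy by simp
  next
    case False
    then show ?thesis using that[of y "x - y"] xy by simp
  qed
  have step: "dpow a (s + p) = dpow a s" if "i \<le> s" for s
  proof (cases "s = i")
    case False
    then have d: "1 \<le> s - i" using that by simp
    have "dpow a (s + p) = dmult (dpow a (i + p)) (dpow a (s - i))"
      using dpow_add[OF a _ d, of "i + p"] that ip(1) by (simp add: add.commute)
    also have "\<dots> = dpow a (i + (s - i))"
      using dpow_add[OF a ip(1) d] ip(3) by simp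
    finally show ?thesis using that by simp
  qed (use ip in simp)
  have period: "dpow a (s + k * p) = dpow a s" if "i \<le> s" for s k
  proof (induction k)
    case (Suc k)
    have "dpow a (s + Suc k * p) = dpow a ((s + k * p) + p)" by (simp add: algebra_simps)
    also have "\<dots> = dpow a s" using step[of "s + k * p"] Suc that by simp
    finally show ?case .
  qed simp
  define m where "m = 2 * i * p"
  have m: "i \<le> m" "2 \<le> m" using ip by (auto simp: m_def)
  have "dmult (dpow a m) (dpow a m) = dpow a (m + (2 * i) * p)"
    using dpow_add[OF a, of m m] m by (simp add: m_def)
  also have "\<dots> = dpow a m" by (rule period[OF m(1)])
  finally show ?thesis using that m by (auto simp: idempotent_def)
qed

section \<open>Kernels, cokernels and uniform elements\<close>

definition ker :: "dpart \<Rightarrow> (nat \<times> nat) set" where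
  "ker a = {(i, j). ((0, i), (0, j)) \<in> block_rel a}"

definition coker :: "dpart \<Rightarrow> (nat \<times> nat) set" where
  "coker a = {(i, j). ((1, i), (1, j)) \<in> block_rel a}"

lemma equiv_block_rel_row:
  assumes a: "a \<in> dual_sym n" and t: "t = 0 \<or> t = 1"
  shows "equiv {1..n} {(i, j). ((t, i), (t, j)) \<in> block_rel a}"
proof (rule equivI)
  show "{(i, j). ((t, i), (t, j)) \<in> block_rel a} \<subseteq> {1..n} \<times> {1..n}"
    using block_rel_in_pts[OF a] by (auto simp: mem_pts_iff)
  show "refl_on {1..n} {(i, j). ((t, i), (t, j)) \<in> block_rel a}"
    using block_rel_refl[OF a] t by (auto simp: refl_on_def mem_pts_iff)
  show "sym {(i, j). ((t, i), (t, j)) \<in> block_rel a}"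
    by (auto simp: sym_def intro: block_rel_sym)
  show "trans {(i, j). ((t, i), (t, j)) \<in> block_rel a}"
    using block_rel_trans[OF a] by (auto simp: trans_def)
qed

lemma equiv_ker: "a \<in> dual_sym n \<Longrightarrow> equiv {1..n} (ker a)"
  unfolding ker_def by (rule equiv_block_rel_row) simp_all

lemma equiv_coker: "a \<in> dual_sym n \<Longrightarrow> equiv {1..n} (coker a)"
  unfolding coker_def by (rule equiv_block_rel_row) simp_all

lemma ker_dmult_subset:
  assumes a: "a \<in> dual_sym n" and b: "b \<in> dual_sym n"
  shows "ker a \<subseteq> ker (dmult a b)"
proof
  fix x assume "x \<in> ker a"
  then obtain i j where "x = (i, j)" "((0, i), (0, j)) \<in> block_rel a" by (auto simp: ker_def)
  then show "x \<in> ker (dmult a b)"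
    using block_rel_dmultI[OF a b] prod_graph_left[of "(0, i)" "(0, j)" a b] block_rel_in_pts[OF a]
    by (auto simp: ker_def)
qed

lemma coker_dmult_subset:
  assumes a: "a \<in> dual_sym n" and b: "b \<in> dual_sym n"
  shows "coker b \<subseteq> coker (dmult a b)"
proof
  fix x assume "x \<in> coker b"
  then obtain i j where "x = (i, j)" "((1, i), (1, j)) \<in> block_rel b" by (auto simp: coker_def)
  then show "x \<in> coker (dmult a b)"
    using block_rel_dmultI[OF a b] prod_graph_right[of "(1, i)" "(1, j)" b a] block_rel_in_pts[OF b]
    by (auto simp: coker_def)
qed

lemma dmult_eqI:
  assumes a: "a \<in> dual_sym n" and b: "b \<in> dual_sym n" and c: "c \<in> dual_sym n"
    and left: "\<And>p q. (p, q) \<in> block_rel a \<Longrightarrow> h (retag 0 2 p) = h (retag 0 2 q)"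
    and right: "\<And>p q. (p, q) \<in> block_rel b \<Longrightarrow> h (retag 2 1 p) = h (retag 2 1 q)"
    and sound: "\<And>p q. p \<in> pts n \<Longrightarrow> q \<in> pts n \<Longrightarrow> h p = h q \<Longrightarrow> (p, q) \<in> block_rel c"
    and connected: "\<And>p q. (p, q) \<in> block_rel c \<Longrightarrow> (p, q) \<in> (prod_graph a b)\<^sup>*"
  shows "dmult a b = c"
proof (rule dual_sym_eqI[OF dmult_in_dual_sym[OF a b] c], intro equalityI subrelI)
  fix p q assume pq: "(p, q) \<in> block_rel (dmult a b)"
  then show "(p, q) \<in> block_rel c"
    using sound dmult_invariant[OF a b left right pq] block_rel_dmult[OF a b] by auto
next
  fix p q assume "(p, q) \<in> block_rel c"
  then show "(p, q) \<in> block_rel (dmult a b)"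
    using connected block_rel_in_pts[OF c] block_rel_dmultI[OF a b] by blast
qed

definition label :: "(nat \<Rightarrow> nat) \<Rightarrow> pt \<Rightarrow> nat" where
  "label \<sigma> p = (if fst p = 0 then snd p else \<sigma> (snd p))"

lemma label_simps [simp]: "label \<sigma> (0, i) = i" "label \<sigma> (1, i) = \<sigma> i" "label \<sigma> (Suc 0, i) = \<sigma> i"
  by (simp_all add: label_def)

lemma label_in:
  assumes p: "p \<in> pts n" and \<sigma>: "\<sigma> ` {1..n} = {1..n}"
  shows "label \<sigma> p \<in> {1..n}"
  using p by (cases rule: pts_cases) (use \<sigma> in \<open>auto intro: equalityD1[THEN subsetD]\<close>)

lemma equiv_pairD: "equiv A r \<Longrightarrow> (x, y) \<in> r \<Longrightarrow> x \<in> A \<and> y \<in> A"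
  using equiv_type by blast

text \<open>The block of \<open>uniform n A \<sigma>\<close> belonging to a class \<open>C\<close> of \<open>A\<close> is
  \<open>C \<union> {j'. \<sigma> j \<in> C}\<close>.\<close>

definition uniform :: "nat \<Rightarrow> (nat \<times> nat) set \<Rightarrow> (nat \<Rightarrow> nat) \<Rightarrow> dpart" where
  "uniform n A \<sigma> = fibres n (\<lambda>p. A `` {label \<sigma> p})"

definition idem_of :: "nat \<Rightarrow> (nat \<times> nat) set \<Rightarrow> dpart" where
  "idem_of n K = uniform n K id"

lemma
  assumes A: "equiv {1..n} A" and \<sigma>: "\<sigma> ` {1..n} = {1..n}"
  shows uniform_in_dual_sym: "uniform n A \<sigma> \<in> dual_sym n"
    and block_rel_uniform: "block_rel (uniform n A \<sigma>) =
      {(p, q). p \<in> pts n \<and> q \<in> pts n \<and> (label \<sigma> p, label \<sigma> q) \<in> A}"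
proof -
  have top: "\<exists>j\<in>{1..n}. A `` {label \<sigma> (1, j)} = A `` {label \<sigma> (0, i)}" if "i \<in> {1..n}" for i
    using that \<sigma> by (metis imageE label_simps(1,2))
  have bottom: "\<exists>i\<in>{1..n}. A `` {label \<sigma> (0, i)} = A `` {label \<sigma> (1, j)}" if "j \<in> {1..n}" for j
    using that \<sigma> by auto
  note fib = fibres[of n "\<lambda>p. A `` {label \<sigma> p}", OF top bottom]
  show "uniform n A \<sigma> \<in> dual_sym n"
    unfolding uniform_def by (rule fib(1))
  show "block_rel (uniform n A \<sigma>) = {(p, q). p \<in> pts n \<and> q \<in> pts n \<and> (label \<sigma> p, label \<sigma> q) \<in> A}"
  proof -
    have "A `` {label \<sigma> p} = A `` {label \<sigma> q} \<longleftrightarrow> (label \<sigma> p, label \<sigma> q) \<in> A"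
      if "p \<in> pts n" "q \<in> pts n" for p q
      using eq_equiv_class_iff[OF A label_in[OF that(1) \<sigma>] label_in[OF that(2) \<sigma>]] .
    moreover have "block_rel (uniform n A \<sigma>) = fibre_rel n (\<lambda>p. A `` {label \<sigma> p})"
      unfolding uniform_def by (rule fib(2))
    ultimately show ?thesis
      unfolding fibre_rel_def by blast
  qed
qed

lemma
  assumes K: "equiv {1..n} K"
  shows idem_of_in_dual_sym: "idem_of n K \<in> dual_sym n"
    and block_rel_idem_of: "block_rel (idem_of n K) =
      {(p, q). p \<in> pts n \<and> q \<in> pts n \<and> (snd p, snd q) \<in> K}"
proof -
  have "label id p = snd p" for p by (simp add: label_def)
  then show "idem_of n K \<in> dual_sym n"
    "block_rel (idem_of n K) = {(p, q). p \<in> pts n \<and> q \<in> pts n \<and> (snd p, snd q) \<in> K}"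
    unfolding idem_of_def using uniform_in_dual_sym[OF K] block_rel_uniform[OF K] by simp_all
qed

lemma ker_uniform: "equiv {1..n} A \<Longrightarrow> \<sigma> ` {1..n} = {1..n} \<Longrightarrow> ker (uniform n A \<sigma>) = A"
  unfolding ker_def block_rel_uniform by (auto simp: mem_pts_iff dest: equiv_pairD)

lemma ker_idem_of: "equiv {1..n} K \<Longrightarrow> ker (idem_of n K) = K"
  unfolding ker_def block_rel_idem_of by (auto simp: mem_pts_iff dest: equiv_pairD)

lemma coker_idem_of: "equiv {1..n} K \<Longrightarrow> coker (idem_of n K) = K"
  unfolding coker_def block_rel_idem_of by (auto simp: mem_pts_iff dest: equiv_pairD)

lemma equiv_trancl_Un:
  assumes A: "equiv N A" and X: "X \<subseteq> N \<times> N" "sym X"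
  shows "equiv N ((A \<union> X)\<^sup>+)"
proof (rule equivI)
  have "A \<union> X \<subseteq> N \<times> N" using A X by (auto dest: equiv_pairD)
  then show "(A \<union> X)\<^sup>+ \<subseteq> N \<times> N" by (rule trancl_subset_Sigma)
  show "refl_on N ((A \<union> X)\<^sup>+)" using A unfolding equiv_def refl_on_def by auto
  show "sym ((A \<union> X)\<^sup>+)" using A X by (intro sym_trancl sym_Un) (simp_all add: equiv_def)
qed (rule trans_trancl)

lemma rel_map_equiv_subset:
  "equiv N B \<Longrightarrow> \<sigma> ` N = N \<Longrightarrow> rel_map \<sigma> B \<subseteq> N \<times> N"
  by (auto simp: rel_map_def dest!: equiv_type)

lemma sym_rel_map_equiv: "equiv N B \<Longrightarrow> sym (rel_map \<sigma> B)"
  by (rule sym_rel_map) (simp add: equiv_def)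

lemma uniform_row0I:
  "equiv {1..n} A \<Longrightarrow> \<sigma> ` {1..n} = {1..n} \<Longrightarrow> (i, j) \<in> A \<Longrightarrow>
    ((0, i), (0, j)) \<in> block_rel (uniform n A \<sigma>)"
  using equiv_pairD[of "{1..n}" A i j] by (auto simp: block_rel_uniform mem_pts_iff)

lemma uniform_link:
  assumes A: "equiv {1..n} A" and \<sigma>: "\<sigma> ` {1..n} = {1..n}" and j: "j \<in> {1..n}"
  shows "((0, \<sigma> j), (1, j)) \<in> block_rel (uniform n A \<sigma>)"
proof -
  have "\<sigma> j \<in> {1..n}" using j \<sigma> by blast
  then show ?thesis
    using j equiv_class_self[OF A] by (auto simp: block_rel_uniform[OF A \<sigma>] mem_pts_iff)
qed

lemma
  assumes A: "equiv {1..n} A" and B: "equiv {1..n} B"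
    and \<sigma>: "\<sigma> ` {1..n} = {1..n}" and \<tau>: "\<tau> ` {1..n} = {1..n}"
  shows prod_graph_uniform_path: "(u, v) \<in> (A \<union> rel_map \<sigma> B)\<^sup>+ \<Longrightarrow>
      ((0, u), (0, v)) \<in> (prod_graph (uniform n A \<sigma>) (uniform n B \<tau>))\<^sup>*"
    and prod_graph_uniform_row0: "p \<in> pts n \<Longrightarrow>
      (p, (0, label (\<sigma> \<circ> \<tau>) p)) \<in> (prod_graph (uniform n A \<sigma>) (uniform n B \<tau>))\<^sup>*"
proof -
  let ?G = "prod_graph (uniform n A \<sigma>) (uniform n B \<tau>)"
  have edge: "((0, u), (0, v)) \<in> ?G\<^sup>*" if "(u, v) \<in> A \<union> rel_map \<sigma> B" for u v
    using that
  proof (elim UnE rel_mapE)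
    assume "(u, v) \<in> A"
    then show ?thesis using prod_graph_left[OF uniform_row0I[OF A \<sigma>]] by simp
  next
    fix u' v' assume uv: "(u', v') \<in> B" "u = \<sigma> u'" "v = \<sigma> v'"
    then have "u' \<in> {1..n}" "v' \<in> {1..n}" using equiv_pairD[OF B] by auto
    then have "((0, u), (2, u')) \<in> ?G\<^sup>*" "((0, v), (2, v')) \<in> ?G\<^sup>*"
      using prod_graph_left[OF uniform_link[OF A \<sigma>]] uv by simp_all
    moreover have "((2, u'), (2, v')) \<in> ?G\<^sup>*"
      using prod_graph_right[OF uniform_row0I[OF B \<tau> uv(1)]] by simp
    ultimately show ?thesis by (meson prod_graph_rtrancl_sym rtrancl_trans)
  qed
  show "((0, u), (0, v)) \<in> ?G\<^sup>*" if "(u, v) \<in> (A \<union> rel_map \<sigma> B)\<^sup>+"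
    using that by (induction rule: trancl_induct) (auto intro: edge rtrancl_trans)
  show "(p, (0, label (\<sigma> \<circ> \<tau>) p)) \<in> ?G\<^sup>*" if "p \<in> pts n"
    using that
  proof (cases rule: pts_cases)
    case (2 k)
    then have "\<tau> k \<in> {1..n}" using \<tau> by blast
    then have "((0, \<sigma> (\<tau> k)), (2, \<tau> k)) \<in> ?G\<^sup>*" "((2, \<tau> k), (1, k)) \<in> ?G\<^sup>*"
      using prod_graph_left[OF uniform_link[OF A \<sigma>]] prod_graph_right[OF uniform_link[OF B \<tau> 2(2)]]
      by simp_all
    then show ?thesis using 2 by (auto intro: prod_graph_rtrancl_sym rtrancl_trans)
  qed simp
qed

lemma uniform_dmult:
  assumes A: "equiv {1..n} A" and B: "equiv {1..n} B"
    and \<sigma>: "\<sigma> ` {1..n} = {1..n}" and \<tau>: "\<tau> ` {1..n} = {1..n}"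
  shows "dmult (uniform n A \<sigma>) (uniform n B \<tau>) = uniform n ((A \<union> rel_map \<sigma> B)\<^sup>+) (\<sigma> \<circ> \<tau>)"
proof -
  define J where "J = (A \<union> rel_map \<sigma> B)\<^sup>+"
  define l3 where "l3 p = (if fst p = 0 then snd p else if fst p = 2 then \<sigma> (snd p) else \<sigma> (\<tau> (snd p)))"
    for p :: pt
  have J: "equiv {1..n} J"
    unfolding J_def using A rel_map_equiv_subset[OF B \<sigma>] sym_rel_map_equiv[OF B]
    by (rule equiv_trancl_Un)
  have \<sigma>\<tau>: "(\<sigma> \<circ> \<tau>) ` {1..n} = {1..n}" using \<sigma> \<tau> by (metis image_comp)
  have AJ: "A \<subseteq> J" and BJ: "rel_map \<sigma> B \<subseteq> J" unfolding J_def by auto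
  have l3: "l3 (retag 0 2 p) = label \<sigma> p" "l3 (retag 2 1 p) = \<sigma> (label \<tau> p)"
    "l3 p = label (\<sigma> \<circ> \<tau>) p" if "p \<in> pts n" for p
    using that by (auto simp: l3_def elim: pts_cases)
  show ?thesis
    unfolding J_def[symmetric]
  proof (rule dmult_eqI[OF uniform_in_dual_sym[OF A \<sigma>] uniform_in_dual_sym[OF B \<tau>]
        uniform_in_dual_sym[OF J \<sigma>\<tau>], where h = "\<lambda>p. J `` {l3 p}"])
    fix p q assume "(p, q) \<in> block_rel (uniform n A \<sigma>)"
    then have "p \<in> pts n" "q \<in> pts n" "(label \<sigma> p, label \<sigma> q) \<in> J"
      using AJ by (auto simp: block_rel_uniform[OF A \<sigma>])
    then show "J `` {l3 (retag 0 2 p)} = J `` {l3 (retag 0 2 q)}"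
      using l3 equiv_class_eq[OF J] by simp
  next
    fix p q assume "(p, q) \<in> block_rel (uniform n B \<tau>)"
    then have "p \<in> pts n" "q \<in> pts n" "(\<sigma> (label \<tau> p), \<sigma> (label \<tau> q)) \<in> J"
      using BJ rel_mapI[of _ _ B \<sigma>] by (auto simp: block_rel_uniform[OF B \<tau>])
    then show "J `` {l3 (retag 2 1 p)} = J `` {l3 (retag 2 1 q)}"
      using l3 equiv_class_eq[OF J] by simp
  next
    fix p q assume "p \<in> pts n" "q \<in> pts n" "J `` {l3 p} = J `` {l3 q}"
    then show "(p, q) \<in> block_rel (uniform n J (\<sigma> \<circ> \<tau>))"
      using eq_equiv_class_iff[OF J label_in[OF _ \<sigma>\<tau>] label_in[OF _ \<sigma>\<tau>]] l3
      by (auto simp: block_rel_uniform[OF J \<sigma>\<tau>])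
  next
    fix p q assume "(p, q) \<in> block_rel (uniform n J (\<sigma> \<circ> \<tau>))"
    then have "p \<in> pts n" "q \<in> pts n" "(label (\<sigma> \<circ> \<tau>) p, label (\<sigma> \<circ> \<tau>) q) \<in> J"
      by (auto simp: block_rel_uniform[OF J \<sigma>\<tau>])
    then show "(p, q) \<in> (prod_graph (uniform n A \<sigma>) (uniform n B \<tau>))\<^sup>*"
      using prod_graph_uniform_row0[OF A B \<sigma> \<tau>] prod_graph_uniform_path[OF A B \<sigma> \<tau>]
      unfolding J_def by (meson prod_graph_rtrancl_sym rtrancl_trans)
  qed
qed

section \<open>Idempotents and inverses\<close>

lemma rel_map_id: "rel_map id R = R"
  by (simp add: rel_map_def map_prod.id)

lemma equiv_trancl_eq: "equiv A R \<Longrightarrow> R\<^sup>+ = R"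
  by (simp add: equiv_def trancl_id)

lemma
  assumes P: "equiv {1..n} P" and Q: "equiv {1..n} Q"
  shows idem_of_dmult_idem_of: "dmult (idem_of n P) (idem_of n Q) = idem_of n ((P \<union> Q)\<^sup>+)"
    and equiv_trancl_join: "equiv {1..n} ((P \<union> Q)\<^sup>+)"
proof -
  show "dmult (idem_of n P) (idem_of n Q) = idem_of n ((P \<union> Q)\<^sup>+)"
    unfolding idem_of_def using uniform_dmult[OF P Q] by (simp add: rel_map_id)
  show "equiv {1..n} ((P \<union> Q)\<^sup>+)"
    using equiv_trancl_Un[OF P, of Q] Q by (simp add: equiv_def)
qed

lemma idempotent_idem_of: "equiv {1..n} K \<Longrightarrow> idempotent (idem_of n K)"
  unfolding idempotent_def by (simp add: idem_of_dmult_idem_of equiv_trancl_eq)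

lemma idempotent_block_rel_diag:
  assumes e: "e \<in> dual_sym n" and idem: "idempotent e" and j: "j \<in> {1..n}"
  shows "((0, j), (1, j)) \<in> block_rel e"
proof -
  obtain i where i: "((1, j), (0, i)) \<in> block_rel e"
    using block_rel_meets_tag[OF e, of "(1, j)" 0] j by (auto simp: mem_pts_iff)
  obtain k where k: "((0, j), (1, k)) \<in> block_rel e"
    using block_rel_meets_tag[OF e, of "(0, j)" 1] j by (auto simp: mem_pts_iff)
  have "((0, i), (2, j)) \<in> (prod_graph e e)\<^sup>*" "((2, j), (1, k)) \<in> (prod_graph e e)\<^sup>*"
    using prod_graph_left[OF block_rel_sym[OF i], of e] prod_graph_right[OF k, of e] by simp_all
  then have "((0, i), (1, k)) \<in> block_rel (dmult e e)"
    using block_rel_dmultI[OF e e] block_rel_in_pts[OF e i] block_rel_in_pts[OF e k]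
    by (meson rtrancl_trans)
  then have "((0, i), (1, k)) \<in> block_rel e" using idem by (simp add: idempotent_def)
  then show ?thesis
    by (meson block_rel_sym block_rel_trans[OF e] i k)
qed

lemma idempotent_eq_idem_of:
  assumes e: "e \<in> dual_sym n" and idem: "idempotent e"
  shows "e = idem_of n (ker e)"
proof (rule dual_sym_eqI[OF e idem_of_in_dual_sym[OF equiv_ker[OF e]]])
  have to_row0: "(p, (0, snd p)) \<in> block_rel e" if "p \<in> pts n" for p
    using that
  proof (cases rule: pts_cases)
    case (1 i)
    then show ?thesis using block_rel_refl[OF e that] by simp
  next
    case (2 i)
    then show ?thesis using block_rel_sym[OF idempotent_block_rel_diag[OF e idem 2(2)]] by simp
  qed
  show "block_rel e = block_rel (idem_of n (ker e))"
    unfolding block_rel_idem_of[OF equiv_ker[OF e]]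
  proof (intro equalityI subsetI; clarify)
    fix p q assume pq: "(p, q) \<in> block_rel e"
    then have "p \<in> pts n" "q \<in> pts n" using block_rel_in_pts[OF e] by auto
    then show "p \<in> pts n \<and> q \<in> pts n \<and> (snd p, snd q) \<in> ker e"
      using block_rel_trans[OF e block_rel_trans[OF e block_rel_sym[OF to_row0] pq] to_row0]
      by (simp add: ker_def)
  next
    fix p q assume "p \<in> pts n" "q \<in> pts n" "(snd p, snd q) \<in> ker e"
    then show "(p, q) \<in> block_rel e"
      using block_rel_trans[OF e block_rel_trans[OF e to_row0] block_rel_sym[OF to_row0]]
      by (simp add: ker_def)
  qed
qed

text \<open>Label a point of \<open>X\<close> by the indices of its primed partners in \<open>a\<close>, and a point of
  \<open>X'\<close> by the indices of its unprimed partners in \<open>b\<close>; the matching condition makes the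
  labelling constant on the blocks of \<open>a b\<close>.\<close>

lemma ker_coker_dmult:
  assumes a: "a \<in> dual_sym n" and b: "b \<in> dual_sym n" and eq: "coker a = ker b"
  shows "ker (dmult a b) = ker a" "coker (dmult a b) = coker b"
proof -
  define h :: "pt \<Rightarrow> nat set" where "h p = (if fst p = 0 then {j. (p, (1, j)) \<in> block_rel a}
      else if fst p = 2 then coker a `` {snd p} else {j. ((0, j), p) \<in> block_rel b})" for p
  have left: "h (retag 0 2 p) = h (retag 0 2 q)" if "(p, q) \<in> block_rel a" for p q
  proof -
    have "h (retag 0 2 r) = {j. (r, (1, j)) \<in> block_rel a}" if "r \<in> pts n" for r
      using that by (cases rule: pts_cases) (auto simp: h_def coker_def)
    moreover have "{j. (p, (1, j)) \<in> block_rel a} = {j. (q, (1, j)) \<in> block_rel a}"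
      using that block_rel_trans[OF a] block_rel_sym by blast
    ultimately show ?thesis using block_rel_in_pts[OF a that] by simp
  qed
  have right: "h (retag 2 1 p) = h (retag 2 1 q)" if "(p, q) \<in> block_rel b" for p q
  proof -
    have "h (retag 2 1 r) = {j. ((0, j), r) \<in> block_rel b}" if "r \<in> pts n" for r
      using that eq by (cases rule: pts_cases) (auto simp: h_def ker_def intro: block_rel_sym)
    moreover have "{j. ((0, j), p) \<in> block_rel b} = {j. ((0, j), q) \<in> block_rel b}"
      using that block_rel_trans[OF b] block_rel_sym by blast
    ultimately show ?thesis using block_rel_in_pts[OF b that] by simp
  qed
  have invariant: "h p = h q" if "(p, q) \<in> block_rel (dmult a b)" for p q
    by (rule dmult_invariant[OF a b left right that])
  show "ker (dmult a b) = ker a"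
  proof (intro equalityI subsetI)
    fix x assume "x \<in> ker (dmult a b)"
    then obtain i i' where x: "x = (i, i')" "((0, i), (0, i')) \<in> block_rel (dmult a b)"
      by (auto simp: ker_def)
    obtain j where "((0, i), (1, j)) \<in> block_rel a"
      using block_rel_meets_tag[OF a, of "(0, i)" 1] block_rel_in_pts[OF dmult_in_dual_sym[OF a b] x(2)]
      by auto
    moreover have "h (0, i) = h (0, i')" by (rule invariant[OF x(2)])
    ultimately have "((0, i'), (1, j)) \<in> block_rel a" by (auto simp: h_def)
    then show "x \<in> ker a"
      using x \<open>((0, i), (1, j)) \<in> block_rel a\<close> by (auto simp: ker_def intro: block_rel_trans[OF a] block_rel_sym)
  qed (use ker_dmult_subset[OF a b] in blast)
  show "coker (dmult a b) = coker b"
  proof (intro equalityI subsetI)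
    fix x assume "x \<in> coker (dmult a b)"
    then obtain i i' where x: "x = (i, i')" "((1, i), (1, i')) \<in> block_rel (dmult a b)"
      by (auto simp: coker_def)
    obtain j where "((1, i), (0, j)) \<in> block_rel b"
      using block_rel_meets_tag[OF b, of "(1, i)" 0] block_rel_in_pts[OF dmult_in_dual_sym[OF a b] x(2)]
      by auto
    moreover have "h (1, i) = h (1, i')" by (rule invariant[OF x(2)])
    ultimately have "((0, j), (1, i')) \<in> block_rel b" by (auto simp: h_def intro: block_rel_sym)
    then show "x \<in> coker b"
      using x \<open>((1, i), (0, j)) \<in> block_rel b\<close> by (auto simp: coker_def intro: block_rel_trans[OF b])
  qed (use coker_dmult_subset[OF a b] in blast)
qed

definition flip :: "pt \<Rightarrow> pt" where
  "flip = retag 1 0"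

lemma flip_simps [simp]: "flip (0, i) = (1, i)" "flip (1, i) = (0, i)" "flip (Suc 0, i) = (0, i)"
  by (simp_all add: flip_def)

lemma flip_flip: "p \<in> pts n \<Longrightarrow> flip (flip p) = p"
  by (auto elim: pts_cases)

lemma flip_in_pts: "p \<in> pts n \<Longrightarrow> flip p \<in> pts n"
  by (auto simp: mem_pts_iff elim: pts_cases)

text \<open>The inverse of \<open>a\<close> in the inverse semigroup \<open>\<I>\<^sup>*\<^sub>n\<close>: its diagram upside down.\<close>

definition dinv :: "nat \<Rightarrow> dpart \<Rightarrow> dpart" where
  "dinv n a = pts n // rel_map flip (block_rel a)"

lemma mem_rel_map_involution:
  assumes R: "R \<subseteq> A \<times> A" and f: "\<And>x. x \<in> A \<Longrightarrow> f x \<in> A" "\<And>x. x \<in> A \<Longrightarrow> f (f x) = x"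
  shows "(p, q) \<in> rel_map f R \<longleftrightarrow> p \<in> A \<and> q \<in> A \<and> (f p, f q) \<in> R"
proof
  assume "(p, q) \<in> rel_map f R"
  then obtain u v where "(u, v) \<in> R" "p = f u" "q = f v" by (rule rel_mapE)
  moreover have "u \<in> A" "v \<in> A" using R calculation(1) by auto
  ultimately show "p \<in> A \<and> q \<in> A \<and> (f p, f q) \<in> R" using f by simp
next
  assume "p \<in> A \<and> q \<in> A \<and> (f p, f q) \<in> R"
  then show "(p, q) \<in> rel_map f R" using rel_mapI[of "f p" "f q" R f] f(2) by simp
qed

lemma equiv_rel_map_involution:
  assumes R: "equiv A R" and f: "\<And>x. x \<in> A \<Longrightarrow> f x \<in> A" "\<And>x. x \<in> A \<Longrightarrow> f (f x) = x"
  shows "equiv A (rel_map f R)"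
proof (rule equivI)
  note mem = mem_rel_map_involution[OF equiv_type[OF R] f]
  show "rel_map f R \<subseteq> A \<times> A" using mem by auto
  show "refl_on A (rel_map f R)"
    using mem f(1) equiv_class_self[OF R] by (auto simp: refl_on_def)
  show "sym (rel_map f R)"
    using mem R by (auto simp: sym_def elim: equivE dest: symD)
  show "trans (rel_map f R)"
    using mem R by (auto simp: trans_def elim: equivE dest: transD)
qed

lemma mem_rel_map_flip:
  "a \<in> dual_sym n \<Longrightarrow>
    (p, q) \<in> rel_map flip (block_rel a) \<longleftrightarrow> p \<in> pts n \<and> q \<in> pts n \<and> (flip p, flip q) \<in> block_rel a"
  by (rule mem_rel_map_involution[OF block_rel_subset flip_in_pts flip_flip])

lemma
  assumes a: "a \<in> dual_sym n"
  shows dinv_in_dual_sym: "dinv n a \<in> dual_sym n"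
    and block_rel_dinv: "block_rel (dinv n a) = rel_map flip (block_rel a)"
proof -
  note flip = flip_in_pts flip_flip
  have E: "equiv (pts n) (rel_map flip (block_rel a))"
    by (rule equiv_rel_map_involution[OF equiv_block_rel[OF a] flip])
  have "\<exists>i. (p, (t, i)) \<in> rel_map flip (block_rel a)" if p: "p \<in> pts n" and t: "t = 0 \<or> t = 1" for p t
  proof -
    obtain i where "(flip p, (1 - t, i)) \<in> block_rel a" "i \<in> {1..n}"
      using block_rel_meets_tag[OF a flip_in_pts[OF p], of "1 - t"] t by auto
    then show ?thesis
      using p t mem_rel_map_flip[OF a, of p "(t, i)"] by (auto simp: mem_pts_iff)
  qed
  then show "dinv n a \<in> dual_sym n" "block_rel (dinv n a) = rel_map flip (block_rel a)"
    unfolding dinv_def using quotient_in_dual_sym[OF E] by blast+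
qed

lemma mem_block_rel_dinv:
  "a \<in> dual_sym n \<Longrightarrow>
    (p, q) \<in> block_rel (dinv n a) \<longleftrightarrow> p \<in> pts n \<and> q \<in> pts n \<and> (flip p, flip q) \<in> block_rel a"
  unfolding block_rel_dinv by (rule mem_rel_map_flip)

lemma ker_dinv: "a \<in> dual_sym n \<Longrightarrow> ker (dinv n a) = coker a"
  unfolding ker_def coker_def by (auto simp: mem_block_rel_dinv mem_pts_iff dest: block_rel_in_pts)

lemma coker_dinv: "a \<in> dual_sym n \<Longrightarrow> coker (dinv n a) = ker a"
  unfolding ker_def coker_def by (auto simp: mem_block_rel_dinv mem_pts_iff dest: block_rel_in_pts)

lemma dinv_dinv:
  assumes a: "a \<in> dual_sym n"
  shows "dinv n (dinv n a) = a"
proof (rule dual_sym_eqI[OF dinv_in_dual_sym[OF dinv_in_dual_sym[OF a]] a])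
  have "rel_map flip (rel_map flip (block_rel a)) = rel_map id (block_rel a)"
    unfolding rel_map_comp using flip_flip by (intro rel_map_cong[OF block_rel_subset[OF a]]) simp
  then show "block_rel (dinv n (dinv n a)) = block_rel a"
    by (simp add: block_rel_dinv a dinv_in_dual_sym rel_map_id)
qed

lemma dmult_dinv:
  assumes x: "x \<in> dual_sym n"
  shows "dmult x (dinv n x) = idem_of n (ker x)"
proof (rule dmult_eqI[OF x dinv_in_dual_sym[OF x] idem_of_in_dual_sym[OF equiv_ker[OF x]],
      where h = "\<lambda>p. block_rel x `` {(if fst p = 2 then 1 else 0, snd p)}"])
  fix p q assume pq: "(p, q) \<in> block_rel x"
  have "(if fst (retag 0 2 r) = 2 then 1 else 0, snd (retag 0 2 r)) = r" if "r \<in> pts n" for r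
    using that by (auto elim: pts_cases)
  then show "block_rel x `` {(if fst (retag 0 2 p) = 2 then 1 else 0, snd (retag 0 2 p))} =
      block_rel x `` {(if fst (retag 0 2 q) = 2 then 1 else 0, snd (retag 0 2 q))}"
    using block_rel_in_pts[OF x pq] equiv_class_eq[OF equiv_block_rel[OF x] pq] by simp
next
  fix p q assume "(p, q) \<in> block_rel (dinv n x)"
  then have pq: "p \<in> pts n" "q \<in> pts n" "(flip p, flip q) \<in> block_rel x"
    by (simp_all add: mem_block_rel_dinv[OF x])
  have "(if fst (retag 2 1 r) = 2 then 1 else 0, snd (retag 2 1 r)) = flip r" if "r \<in> pts n" for r
    using that by (auto elim: pts_cases)
  then show "block_rel x `` {(if fst (retag 2 1 p) = 2 then 1 else 0, snd (retag 2 1 p))} =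
      block_rel x `` {(if fst (retag 2 1 q) = 2 then 1 else 0, snd (retag 2 1 q))}"
    using pq equiv_class_eq[OF equiv_block_rel[OF x] pq(3)] by simp
next
  fix p q assume p: "p \<in> pts n" and q: "q \<in> pts n"
    and eq: "block_rel x `` {(if fst p = 2 then 1 else 0, snd p)} = block_rel x `` {(if fst q = 2 then 1 else 0, snd q)}"
  have "(0, snd p) \<in> pts n" "(0, snd q) \<in> pts n" "fst p \<noteq> 2" "fst q \<noteq> 2"
    using p q by (auto simp: mem_pts_iff elim!: pts_cases)
  then have "((0, snd p), (0, snd q)) \<in> block_rel x"
    using eq eq_equiv_class_iff[OF equiv_block_rel[OF x]] by simp
  then show "(p, q) \<in> block_rel (idem_of n (ker x))"
    using p q by (simp add: block_rel_idem_of[OF equiv_ker[OF x]]) (simp add: ker_def)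
next
  fix p q assume "(p, q) \<in> block_rel (idem_of n (ker x))"
  then have pq: "p \<in> pts n" "q \<in> pts n" "((0, snd p), (0, snd q)) \<in> block_rel x"
    unfolding block_rel_idem_of[OF equiv_ker[OF x]] by (simp_all add: ker_def)
  have to_row0: "(r, (0, snd r)) \<in> (prod_graph x (dinv n x))\<^sup>*" if "r \<in> pts n" for r
    using that
  proof (cases rule: pts_cases)
    case (2 k)
    then obtain j where j: "((0, k), (1, j)) \<in> block_rel x"
      using block_rel_meets_tag[OF x, of "(0, k)" 1] by (auto simp: mem_pts_iff)
    then have "((0, j), (1, k)) \<in> block_rel (dinv n x)"
      using block_rel_in_pts[OF x j] by (simp add: mem_block_rel_dinv[OF x] block_rel_sym mem_pts_iff)
    then show ?thesis
      using 2 prod_graph_left[OF j, of "dinv n x"] prod_graph_right[of "(0, j)" "(1, k)" "dinv n x" x]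
      by (auto intro: prod_graph_rtrancl_sym rtrancl_trans)
  qed simp
  show "(p, q) \<in> (prod_graph x (dinv n x))\<^sup>*"
    using to_row0[OF pq(1)] prod_graph_left[OF pq(3), of "dinv n x"] to_row0[OF pq(2)]
    by (auto intro: prod_graph_rtrancl_sym rtrancl_trans)
qed

lemma dinv_dmult: "x \<in> dual_sym n \<Longrightarrow> dmult (dinv n x) x = idem_of n (coker x)"
  using dmult_dinv[OF dinv_in_dual_sym] by (simp add: dinv_dinv ker_dinv)

lemma idem_of_ker_dmult:
  assumes x: "x \<in> dual_sym n"
  shows "dmult (idem_of n (ker x)) x = x"
proof -
  define rep :: "pt \<Rightarrow> pt" where "rep p = (if fst p = 1 then 1 else 0, snd p)" for p
  have rep: "rep r = r" "rep (retag 0 2 r) = (0, snd r)" "rep (retag 2 1 r) = r" if "r \<in> pts n" for r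
    using that by (auto simp: rep_def elim: pts_cases)
  have to_right: "(r, retag 2 1 r) \<in> (prod_graph (idem_of n (ker x)) x)\<^sup>*" if "r \<in> pts n" for r
    using that
  proof (cases rule: pts_cases)
    case (1 i)
    then have "((0, i), (1, i)) \<in> block_rel (idem_of n (ker x))"
      using equiv_class_self[OF equiv_ker[OF x]]
      by (simp add: block_rel_idem_of[OF equiv_ker[OF x]] mem_pts_iff)
    then show ?thesis using 1 prod_graph_left by fastforce
  qed simp
  show ?thesis
  proof (rule dmult_eqI[OF idem_of_in_dual_sym[OF equiv_ker[OF x]] x x,
        where h = "\<lambda>p. block_rel x `` {rep p}"])
    fix p q assume "(p, q) \<in> block_rel (idem_of n (ker x))"
    then have "((0, snd p), (0, snd q)) \<in> block_rel x" "p \<in> pts n" "q \<in> pts n"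
      unfolding block_rel_idem_of[OF equiv_ker[OF x]] by (simp_all add: ker_def)
    then show "block_rel x `` {rep (retag 0 2 p)} = block_rel x `` {rep (retag 0 2 q)}"
      using equiv_class_eq[OF equiv_block_rel[OF x]] rep by simp
  next
    fix p q assume "(p, q) \<in> block_rel x"
    then show "block_rel x `` {rep (retag 2 1 p)} = block_rel x `` {rep (retag 2 1 q)}"
      using block_rel_in_pts[OF x] equiv_class_eq[OF equiv_block_rel[OF x]] rep by simp
  next
    fix p q assume "p \<in> pts n" "q \<in> pts n" "block_rel x `` {rep p} = block_rel x `` {rep q}"
    then show "(p, q) \<in> block_rel x"
      using eq_equiv_class_iff[OF equiv_block_rel[OF x]] rep by simp
  next
    fix p q assume pq: "(p, q) \<in> block_rel x"
    then show "(p, q) \<in> (prod_graph (idem_of n (ker x)) x)\<^sup>*"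
      using to_right block_rel_in_pts[OF x pq] prod_graph_right[OF pq]
      by (meson prod_graph_rtrancl_sym rtrancl_trans)
  qed
qed

lemma dmult_idem_of_coker:
  assumes x: "x \<in> dual_sym n"
  shows "dmult x (idem_of n (coker x)) = x"
proof -
  define rep :: "pt \<Rightarrow> pt" where "rep p = (if fst p = 0 then 0 else 1, snd p)" for p
  have rep: "rep r = r" "rep (retag 0 2 r) = r" "rep (retag 2 1 r) = (1, snd r)" if "r \<in> pts n" for r
    using that by (auto simp: rep_def elim: pts_cases)
  have to_left: "(r, retag 0 2 r) \<in> (prod_graph x (idem_of n (coker x)))\<^sup>*" if "r \<in> pts n" for r
    using that
  proof (cases rule: pts_cases)
    case (2 i)
    then have "((0, i), (1, i)) \<in> block_rel (idem_of n (coker x))"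
      using equiv_class_self[OF equiv_coker[OF x]]
      by (simp add: block_rel_idem_of[OF equiv_coker[OF x]] mem_pts_iff)
    then show ?thesis
      using 2 prod_graph_right[of "(0, i)" "(1, i)" _ x] by (auto intro: prod_graph_rtrancl_sym)
  qed simp
  show ?thesis
  proof (rule dmult_eqI[OF x idem_of_in_dual_sym[OF equiv_coker[OF x]] x,
        where h = "\<lambda>p. block_rel x `` {rep p}"])
    fix p q assume "(p, q) \<in> block_rel x"
    then show "block_rel x `` {rep (retag 0 2 p)} = block_rel x `` {rep (retag 0 2 q)}"
      using block_rel_in_pts[OF x] equiv_class_eq[OF equiv_block_rel[OF x]] rep by simp
  next
    fix p q assume "(p, q) \<in> block_rel (idem_of n (coker x))"
    then have "((1, snd p), (1, snd q)) \<in> block_rel x" "p \<in> pts n" "q \<in> pts n"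
      unfolding block_rel_idem_of[OF equiv_coker[OF x]] by (simp_all add: coker_def)
    then show "block_rel x `` {rep (retag 2 1 p)} = block_rel x `` {rep (retag 2 1 q)}"
      using equiv_class_eq[OF equiv_block_rel[OF x]] rep by simp
  next
    fix p q assume "p \<in> pts n" "q \<in> pts n" "block_rel x `` {rep p} = block_rel x `` {rep q}"
    then show "(p, q) \<in> block_rel x"
      using eq_equiv_class_iff[OF equiv_block_rel[OF x]] rep by simp
  next
    fix p q assume pq: "(p, q) \<in> block_rel x"
    then show "(p, q) \<in> (prod_graph x (idem_of n (coker x)))\<^sup>*"
      using to_left block_rel_in_pts[OF x pq] prod_graph_left[OF pq]
      by (meson prod_graph_rtrancl_sym rtrancl_trans)
  qed
qed

section \<open>Units\<close>

lemma blocks_eq_row_image: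
  assumes x: "x \<in> dual_sym n" and t: "t = 0 \<or> t = 1"
  shows "x = (\<lambda>i. block_rel x `` {(t, i)}) ` {1..n}"
proof -
  have "x = pts n // block_rel x" by (simp add: quotient_block_rel[OF x])
  also have "\<dots> = (\<lambda>i. block_rel x `` {(t, i)}) ` {1..n}"
  proof (intro equalityI subsetI)
    fix B assume "B \<in> pts n // block_rel x"
    then obtain p where p: "p \<in> pts n" "B = block_rel x `` {p}" by (auto elim: quotientE)
    then obtain i where "i \<in> {1..n}" "(p, (t, i)) \<in> block_rel x"
      using block_rel_meets_tag[OF x p(1) t] by blast
    then show "B \<in> (\<lambda>i. block_rel x `` {(t, i)}) ` {1..n}"
      using p equiv_class_eq[OF equiv_block_rel[OF x]] by blast
  next
    fix B assume "B \<in> (\<lambda>i. block_rel x `` {(t, i)}) ` {1..n}"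
    then show "B \<in> pts n // block_rel x" using t by (auto simp: mem_pts_iff intro: quotientI)
  qed
  finally show ?thesis .
qed

lemma inj_on_iff_equiv_Id:
  assumes R: "equiv A R" and f: "\<And>i j. i \<in> A \<Longrightarrow> j \<in> A \<Longrightarrow> f i = f j \<longleftrightarrow> (i, j) \<in> R"
  shows "inj_on f A \<longleftrightarrow> R = Id_on A"
proof
  assume inj: "inj_on f A"
  show "R = Id_on A"
  proof (intro equalityI subrelI)
    fix i j assume "(i, j) \<in> R"
    moreover from this have "i \<in> A" "j \<in> A" using equiv_pairD[OF R] by auto
    ultimately show "(i, j) \<in> Id_on A" using f inj by (auto dest: inj_onD)
  qed (use equiv_class_self[OF R] in auto)
qed (use f in \<open>auto simp: inj_on_def\<close>)

lemma inj_on_row_block_iff: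
  assumes x: "x \<in> dual_sym n" and t: "t = 0 \<or> t = 1"
  shows "inj_on (\<lambda>i. block_rel x `` {(t, i)}) {1..n} \<longleftrightarrow>
    {(i, j). ((t, i), (t, j)) \<in> block_rel x} = Id_on {1..n}"
proof (rule inj_on_iff_equiv_Id[OF equiv_block_rel_row[OF x t]])
  fix i j assume "i \<in> {1..n}" "j \<in> {1..n}"
  then show "block_rel x `` {(t, i)} = block_rel x `` {(t, j)} \<longleftrightarrow>
      (i, j) \<in> {(i, j). ((t, i), (t, j)) \<in> block_rel x}"
    using eq_equiv_class_iff[OF equiv_block_rel[OF x], of "(t, i)" "(t, j)"] t
    by (simp add: mem_pts_iff)
qed

text \<open>A trivial kernel gives \<open>n\<close> blocks, which forces a trivial cokernel.\<close>

lemma coker_eq_Id_if_ker_eq_Id: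
  assumes x: "x \<in> dual_sym n" and ker: "ker x = Id_on {1..n}"
  shows "coker x = Id_on {1..n}"
proof -
  have "inj_on (\<lambda>i. block_rel x `` {(0, i)}) {1..n}"
    using inj_on_row_block_iff[OF x] ker by (simp add: ker_def)
  then have "card x = n"
    using blocks_eq_row_image[OF x, of 0] card_image by fastforce
  then have "inj_on (\<lambda>i. block_rel x `` {(1, i)}) {1..n}"
    using blocks_eq_row_image[OF x, of 1] by (intro eq_card_imp_inj_on) auto
  then show ?thesis
    using inj_on_row_block_iff[OF x] by (simp add: coker_def)
qed

lemma ker_eq_Id_if_coker_eq_Id:
  "x \<in> dual_sym n \<Longrightarrow> coker x = Id_on {1..n} \<Longrightarrow> ker x = Id_on {1..n}"
  using coker_eq_Id_if_ker_eq_Id[OF dinv_in_dual_sym] by (simp add: ker_dinv coker_dinv)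

lemma uniform_Id_on_eq:
  assumes \<sigma>: "\<sigma> permutes {1..n}"
  shows "uniform n (Id_on {1..n}) \<sigma> = {{(0, i), (1, inv \<sigma> i)} | i. i \<in> {1..n}}"
proof -
  let ?E = "block_rel (uniform n (Id_on {1..n}) \<sigma>)"
  have img: "\<sigma> ` {1..n} = {1..n}" by (rule permutes_image[OF \<sigma>])
  have I: "equiv {1..n} (Id_on {1..n})" by (rule equivI) (auto simp: refl_on_def sym_def trans_def)
  have E: "?E = {(p, q). p \<in> pts n \<and> q \<in> pts n \<and> label \<sigma> p = label \<sigma> q}"
    unfolding block_rel_uniform[OF I img] using label_in[OF _ img] by auto
  have cls: "?E `` {p} = {(0, label \<sigma> p), (1, inv \<sigma> (label \<sigma> p))}" if p: "p \<in> pts n" for p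
  proof -
    let ?l = "label \<sigma> p"
    have l: "(0, ?l) \<in> pts n" "(1, inv \<sigma> ?l) \<in> pts n"
      using label_in[OF p img] permutes_in_image[OF permutes_inv[OF \<sigma>]] by (auto simp: mem_pts_iff)
    have iff: "q \<in> pts n \<and> label \<sigma> q = ?l \<longleftrightarrow> q = (0, ?l) \<or> q = (1, inv \<sigma> ?l)" for q
    proof
      assume q: "q \<in> pts n \<and> label \<sigma> q = ?l"
      then have "q \<in> pts n" by simp
      then show "q = (0, ?l) \<or> q = (1, inv \<sigma> ?l)"
      proof (cases rule: pts_cases)
        case (2 j)
        then have "\<sigma> j = ?l" using q by simp
        then have "j = inv \<sigma> ?l" using permutes_inverses(2)[OF \<sigma>, of j] by simp
        then show ?thesis using 2 by simp
      qed (use q in simp)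
    qed (use l permutes_inverses(1)[OF \<sigma>] in auto)
    have "?E `` {p} = {q. q \<in> pts n \<and> label \<sigma> q = ?l}"
      using p unfolding E by auto
    also have "\<dots> = {(0, ?l), (1, inv \<sigma> ?l)}"
      using iff by blast
    finally show ?thesis .
  qed
  have labels: "label \<sigma> ` pts n = {1..n}"
  proof
    show "{1..n} \<subseteq> label \<sigma> ` pts n"
    proof
      fix i assume "i \<in> {1..n}"
      then have "(0, i) \<in> pts n" by (simp add: mem_pts_iff)
      then show "i \<in> label \<sigma> ` pts n" by (metis image_eqI label_simps(1))
    qed
  qed (use label_in[OF _ img] in blast)
  have "uniform n (Id_on {1..n}) \<sigma> = pts n // ?E"
    by (rule quotient_block_rel[OF uniform_in_dual_sym[OF I img], symmetric])
  also have "\<dots> = (\<lambda>p. ?E `` {p}) ` pts n"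
    unfolding quotient_def by blast
  also have "\<dots> = (\<lambda>i. {(0, i), (1, inv \<sigma> i)}) ` label \<sigma> ` pts n"
    unfolding image_image using cls by (rule image_cong[OF refl])
  finally show ?thesis unfolding labels by blast
qed

lemma equiv_Id_on: "equiv A (Id_on A)"
  by (rule equivI) (auto simp: refl_on_def sym_def trans_def)

lemma sym_units_eq: "sym_units n = {uniform n (Id_on {1..n}) \<sigma> | \<sigma>. \<sigma> permutes {1..n}}"
proof -
  have eq: "{{(0, i), (1, \<pi> i)} | i. i \<in> {1..n}} = uniform n (Id_on {1..n}) (inv \<pi>)"
    if "\<pi> permutes {1..n}" for \<pi>
    using uniform_Id_on_eq[OF permutes_inv[OF that]] inv_inv_eq[OF permutes_bij[OF that]] by simp
  show ?thesis
  proof (intro equalityI subsetI)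
    fix x assume "x \<in> sym_units n"
    then obtain \<pi> where "\<pi> permutes {1..n}" "x = {{(0, i), (1, \<pi> i)} | i. i \<in> {1..n}}"
      unfolding sym_units_def by blast
    then show "x \<in> {uniform n (Id_on {1..n}) \<sigma> | \<sigma>. \<sigma> permutes {1..n}}"
      using eq permutes_inv by blast
  next
    fix x assume "x \<in> {uniform n (Id_on {1..n}) \<sigma> | \<sigma>. \<sigma> permutes {1..n}}"
    then obtain \<sigma> where \<sigma>: "\<sigma> permutes {1..n}" "x = uniform n (Id_on {1..n}) \<sigma>" by blast
    then have "x = {{(0, i), (1, inv \<sigma> i)} | i. i \<in> {1..n}}"
      using eq[OF permutes_inv[OF \<sigma>(1)]] inv_inv_eq[OF permutes_bij[OF \<sigma>(1)]] by simp
    then show "x \<in> sym_units n"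
      unfolding sym_units_def using permutes_inv[OF \<sigma>(1)] by blast
  qed
qed

text \<open>An element with trivial kernel (hence trivial cokernel) pairs each \<open>j'\<close> with exactly one
  \<open>i\<close>; this defines the permutation it is made of.\<close>

lemma ker_eq_Id_imp_uniform:
  assumes x: "x \<in> dual_sym n" and ker: "ker x = Id_on {1..n}"
  obtains \<sigma> where "\<sigma> permutes {1..n}" "x = uniform n (Id_on {1..n}) \<sigma>"
proof -
  have coker: "coker x = Id_on {1..n}" by (rule coker_eq_Id_if_ker_eq_Id[OF x ker])
  define \<sigma> where "\<sigma> j = (if j \<in> {1..n} then THE i. ((0, i), (1, j)) \<in> block_rel x else j)" for j
  have ex1: "\<exists>!i. ((0, i), (1, j)) \<in> block_rel x" if j: "j \<in> {1..n}" for j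
  proof -
    obtain i where "((0, i), (1, j)) \<in> block_rel x"
      using block_rel_meets_tag[OF x, of "(1, j)" 0] j by (auto simp: mem_pts_iff intro: block_rel_sym)
    moreover have "i' = i" if "((0, i'), (1, j)) \<in> block_rel x" "((0, i), (1, j)) \<in> block_rel x" for i'
    proof -
      have "(i', i) \<in> ker x"
        using block_rel_trans[OF x that(1) block_rel_sym[OF that(2)]] by (simp add: ker_def)
      then show ?thesis using ker by auto
    qed
    ultimately show ?thesis by blast
  qed
  have link: "((0, \<sigma> j), (1, j)) \<in> block_rel x" if "j \<in> {1..n}" for j
    using theI'[OF ex1[OF that]] that by (simp add: \<sigma>_def)
  have in_range: "\<sigma> j \<in> {1..n}" if "j \<in> {1..n}" for j
    using block_rel_in_pts[OF x link[OF that]] by (simp add: mem_pts_iff)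
  have "inj_on \<sigma> {1..n}"
  proof (rule inj_onI)
    fix j j' assume j: "j \<in> {1..n}" and j': "j' \<in> {1..n}" and eq: "\<sigma> j = \<sigma> j'"
    have "((1, j), (1, j')) \<in> block_rel x"
      using block_rel_trans[OF x block_rel_sym[OF link[OF j]]] link[OF j'] eq by simp
    then have "(j, j') \<in> coker x" by (simp add: coker_def)
    then show "j = j'" using coker by auto
  qed
  then have "\<sigma> ` {1..n} = {1..n}"
    using in_range by (intro endo_inj_surj) auto
  then have perm: "\<sigma> permutes {1..n}"
    using \<open>inj_on \<sigma> {1..n}\<close> by (intro bij_imp_permutes) (auto simp: bij_betw_def \<sigma>_def)
  have img: "\<sigma> ` {1..n} = {1..n}" by (rule permutes_image[OF perm])
  have to_row0: "(p, (0, label \<sigma> p)) \<in> block_rel x" if "p \<in> pts n" for p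
    using that
  proof (cases rule: pts_cases)
    case (1 i)
    then show ?thesis using block_rel_refl[OF x that] by simp
  next
    case (2 j)
    then show ?thesis using block_rel_sym[OF link[OF 2(2)]] by simp
  qed
  have "x = uniform n (Id_on {1..n}) \<sigma>"
  proof (rule dual_sym_eqI[OF x uniform_in_dual_sym[OF equiv_Id_on img]])
    have iff: "(p, q) \<in> block_rel x \<longleftrightarrow> (label \<sigma> p, label \<sigma> q) \<in> Id_on {1..n}"
      if p: "p \<in> pts n" and q: "q \<in> pts n" for p q
    proof
      assume "(p, q) \<in> block_rel x"
      from block_rel_trans[OF x block_rel_trans[OF x block_rel_sym[OF to_row0[OF p]] this] to_row0[OF q]]
      show "(label \<sigma> p, label \<sigma> q) \<in> Id_on {1..n}" unfolding ker[symmetric] ker_def by simp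
    next
      assume "(label \<sigma> p, label \<sigma> q) \<in> Id_on {1..n}"
      then have "((0, label \<sigma> p), (0, label \<sigma> q)) \<in> block_rel x" unfolding ker[symmetric] ker_def by simp
      from block_rel_trans[OF x block_rel_trans[OF x to_row0[OF p] this] block_rel_sym[OF to_row0[OF q]]]
      show "(p, q) \<in> block_rel x" .
    qed
    show "block_rel x = block_rel (uniform n (Id_on {1..n}) \<sigma>)"
      unfolding block_rel_uniform[OF equiv_Id_on img]
    proof (intro equalityI subrelI)
      fix p q assume pq: "(p, q) \<in> block_rel x"
      have p: "p \<in> pts n" and q: "q \<in> pts n" using block_rel_in_pts[OF x pq] by auto
      show "(p, q) \<in> {(p, q). p \<in> pts n \<and> q \<in> pts n \<and> (label \<sigma> p, label \<sigma> q) \<in> Id_on {1..n}}"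
        using p q pq iff[OF p q] by simp
    next
      fix p q
      assume "(p, q) \<in> {(p, q). p \<in> pts n \<and> q \<in> pts n \<and> (label \<sigma> p, label \<sigma> q) \<in> Id_on {1..n}}"
      then have p: "p \<in> pts n" and q: "q \<in> pts n" and l: "(label \<sigma> p, label \<sigma> q) \<in> Id_on {1..n}"
        by simp_all
      show "(p, q) \<in> block_rel x" using iff[OF p q] l by simp
    qed
  qed
  then show ?thesis by (rule that[OF perm])
qed

lemma sym_units_iff: "x \<in> sym_units n \<longleftrightarrow> x \<in> dual_sym n \<and> ker x = Id_on {1..n}"
proof
  assume "x \<in> sym_units n"
  then obtain \<sigma> where \<sigma>: "\<sigma> permutes {1..n}" "x = uniform n (Id_on {1..n}) \<sigma>"
    unfolding sym_units_eq by blast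
  have "\<sigma> ` {1..n} = {1..n}" by (rule permutes_image[OF \<sigma>(1)])
  then show "x \<in> dual_sym n \<and> ker x = Id_on {1..n}"
    using uniform_in_dual_sym[OF equiv_Id_on] ker_uniform[OF equiv_Id_on] \<sigma>(2) by simp
next
  assume "x \<in> dual_sym n \<and> ker x = Id_on {1..n}"
  then obtain \<sigma> where "\<sigma> permutes {1..n}" "x = uniform n (Id_on {1..n}) \<sigma>"
    using ker_eq_Id_imp_uniform by blast
  then show "x \<in> sym_units n"
    unfolding sym_units_eq by blast
qed

lemma sym_units_subset: "sym_units n \<subseteq> dual_sym n"
  using sym_units_iff by blast

lemma Id_on_subset_equiv: "equiv {1..n::nat} K \<Longrightarrow> Id_on {1..n} \<subseteq> K"
  unfolding equiv_def refl_on_def by auto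

lemma equiv_not_subset_Id_on: "equiv {1..n::nat} K \<Longrightarrow> K \<noteq> Id_on {1..n} \<Longrightarrow> \<not> K \<subseteq> Id_on {1..n}"
  using Id_on_subset_equiv by blast

lemma dmult_sym_units: "x \<in> sym_units n \<Longrightarrow> y \<in> sym_units n \<Longrightarrow> dmult x y \<in> sym_units n"
proof -
  assume x: "x \<in> sym_units n" and y: "y \<in> sym_units n"
  have xd: "x \<in> dual_sym n" "ker x = Id_on {1..n}" and yd: "y \<in> dual_sym n" "ker y = Id_on {1..n}" using x y sym_units_iff by auto
  have "coker x = ker y" using coker_eq_Id_if_ker_eq_Id[OF xd] yd by simp
  then have "ker (dmult x y) = Id_on {1..n}" using ker_coker_dmult(1)[OF xd(1) yd(1)] xd by simp
  then show ?thesis using sym_units_iff dmult_in_dual_sym[OF xd(1) yd(1)] by blast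
qed

lemma dmult_nonunit: "x \<in> dual_sym n - sym_units n \<Longrightarrow> y \<in> dual_sym n \<Longrightarrow> dmult x y \<in> dual_sym n - sym_units n"
proof -
  assume x: "x \<in> dual_sym n - sym_units n" and y: "y \<in> dual_sym n"
  have xd: "x \<in> dual_sym n" "ker x \<noteq> Id_on {1..n}" using x sym_units_iff by auto
  have "\<not> ker x \<subseteq> Id_on {1..n}" by (rule equiv_not_subset_Id_on[OF equiv_ker[OF xd(1)] xd(2)])
  then have "\<not> ker (dmult x y) \<subseteq> Id_on {1..n}" using ker_dmult_subset[OF xd(1) y] by blast
  then show ?thesis using sym_units_iff dmult_in_dual_sym[OF xd(1) y] by auto
qed

lemma dpow_Suc_left: "a \<in> dual_sym n \<Longrightarrow> 1 \<le> k \<Longrightarrow> dpow a (Suc k) = dmult a (dpow a k)"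
  using dpow_add[of a n 1 k] by simp

lemma ker_dpow_mono:
  assumes a: "a \<in> dual_sym n" and ij: "1 \<le> i" "i \<le> j"
  shows "ker (dpow a i) \<subseteq> ker (dpow a j)"
proof (cases "i = j")
  case False
  then have "dpow a j = dmult (dpow a i) (dpow a (j - i))"
    using dpow_add[OF a ij(1), of "j - i"] ij by simp
  then show ?thesis
    using ker_dmult_subset[OF dpow_in_dual_sym[OF a ij(1)] dpow_in_dual_sym[OF a]] False ij by simp
qed simp

lemma ker_dpow_subset: "a \<in> dual_sym n \<Longrightarrow> 1 \<le> k \<Longrightarrow> ker a \<subseteq> ker (dpow a k)"
proof (induction k)
  case 0 then show ?case by simp
next
  case (Suc k)
  show ?case
  proof (cases "k = 0")
    case True then show ?thesis by simp
  next
    case False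
    then have "dpow a (Suc k) = dmult a (dpow a k)" using dpow_Suc_left[OF Suc(2)] by simp
    then show ?thesis using ker_dmult_subset[OF Suc(2) dpow_in_dual_sym[OF Suc(2)]] False by simp
  qed
qed

lemma coker_dpow_subset: "a \<in> dual_sym n \<Longrightarrow> 1 \<le> k \<Longrightarrow> coker a \<subseteq> coker (dpow a k)"
proof (induction k)
  case 0 then show ?case by simp
next
  case (Suc k)
  show ?case
  proof (cases "k = 0")
    case True then show ?thesis by simp
  next
    case False
    then have "dpow a (Suc k) = dmult (dpow a k) a" using dpow_Suc by simp
    then show ?thesis using coker_dmult_subset[OF dpow_in_dual_sym[OF Suc(2)] Suc(2)] False by simp
  qed
qed

lemma dpow_sym_units: "a \<in> sym_units n \<Longrightarrow> 1 \<le> k \<Longrightarrow> dpow a k \<in> sym_units n"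
proof (induction k)
  case 0 then show ?case by simp
next
  case (Suc k)
  then show ?case by (cases "k = 0") (auto simp: dpow_Suc dmult_sym_units)
qed

lemma dpow_nonunit: "a \<in> dual_sym n - sym_units n \<Longrightarrow> 1 \<le> k \<Longrightarrow> dpow a k \<in> dual_sym n - sym_units n"
proof -
  assume a: "a \<in> dual_sym n - sym_units n" and k: "1 \<le> k"
  have ad: "a \<in> dual_sym n" "ker a \<noteq> Id_on {1..n}" using a sym_units_iff by auto
  have "\<not> ker a \<subseteq> Id_on {1..n}" by (rule equiv_not_subset_Id_on[OF equiv_ker[OF ad(1)] ad(2)])
  then have "\<not> ker (dpow a k) \<subseteq> Id_on {1..n}" using ker_dpow_subset[OF ad(1) k] by blast
  then show ?thesis using sym_units_iff dpow_in_dual_sym[OF ad(1) k] by auto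
qed

section \<open>Equivalences by number of classes\<close>

text \<open>The atoms of the lattice of equivalences on \<open>{1..n}\<close>: one class of size two, all others
  singletons. They are the kernels of the idempotents of rank \<open>n - 1\<close>.\<close>

definition atom :: "nat \<Rightarrow> (nat \<times> nat) set \<Rightarrow> bool" where
  "atom n K \<longleftrightarrow> (\<exists>a b. a \<in> {1..n} \<and> b \<in> {1..n} \<and> a \<noteq> b \<and> K = Id_on {1..n} \<union> {(a, b), (b, a)})"

text \<open>For an equivalence this says that it is neither the identity nor an atom.\<close>

definition two_pairs :: "(nat \<times> nat) set \<Rightarrow> bool" where
  "two_pairs K \<longleftrightarrow> (\<exists>a b c d. (a, b) \<in> K \<and> (c, d) \<in> K \<and> a \<noteq> b \<and> c \<noteq> d \<and> {a, b} \<noteq> {c, d})"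

lemma equiv_refl_onD: "equiv A r \<Longrightarrow> x \<in> A \<Longrightarrow> (x, x) \<in> r"
  using equiv_class_self by fastforce

lemma equiv_atom: "atom n K \<Longrightarrow> equiv {1..n} K"
  unfolding atom_def by (rule equivI) (auto simp: refl_on_def sym_def trans_def)

lemma atom_if_not_two_pairs:
  assumes K: "equiv {1..n} K" and nd: "K \<noteq> Id_on {1..n}" and nb: "\<not> two_pairs K"
  shows "atom n K"
proof -
  have sub: "K \<subseteq> {1..n} \<times> {1..n}" and rf: "Id_on {1..n} \<subseteq> K" using K unfolding equiv_def refl_on_def by auto
  obtain a b where ab: "(a, b) \<in> K" "a \<noteq> b"
  proof -
    have "\<not> K \<subseteq> Id_on {1..n}" using nd rf by blast
    then obtain x where "x \<in> K" "x \<notin> Id_on {1..n}" by blast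
    then show ?thesis using that sub by (cases x) auto
  qed
  have N: "a \<in> {1..n}" "b \<in> {1..n}" using ab sub by auto
  have ba: "(b, a) \<in> K" using K ab unfolding equiv_def sym_def by blast
  have "K = Id_on {1..n} \<union> {(a, b), (b, a)}"
  proof (intro equalityI subsetI)
    fix x assume x: "x \<in> K"
    obtain c d where cd: "x = (c, d)" by force
    show "x \<in> Id_on {1..n} \<union> {(a, b), (b, a)}"
    proof (cases "c = d")
      case True then show ?thesis using x sub cd by auto
    next
      case False
      then have "{a, b} = {c, d}" using nb ab x cd unfolding two_pairs_def by blast
      then show ?thesis using cd by (auto simp: doubleton_eq_iff)
    qed
  next
    fix x assume "x \<in> Id_on {1..n} \<union> {(a, b), (b, a)}"
    then show "x \<in> K" using rf ab ba by blast
  qed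
  then show ?thesis using N ab(2) unfolding atom_def by blast
qed

lemma atom_neq_Id_on: "atom n K \<Longrightarrow> K \<noteq> Id_on {1..n}"
  unfolding atom_def by auto

lemma two_pairs_mono: "two_pairs K \<Longrightarrow> K \<subseteq> K' \<Longrightarrow> two_pairs K'"
  unfolding two_pairs_def by blast

lemma finite_classes: "equiv {1..n::nat} K \<Longrightarrow> finite ({1..n} // K)"
  by (rule finite_quotient) (auto simp: equiv_def)

lemma finite_class: "equiv {1..n::nat} K \<Longrightarrow> C \<in> {1..n} // K \<Longrightarrow> finite C \<and> 1 \<le> card C"
proof -
  assume K: "equiv {1..n} K" and C: "C \<in> {1..n} // K"
  have "C \<subseteq> {1..n}" using C K unfolding quotient_def equiv_def by auto
  then have f: "finite C" by (rule finite_subset) simp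
  have "C \<noteq> {}" using in_quotient_imp_non_empty[OF K C] .
  then show ?thesis using f by (simp add: Suc_le_eq card_gt_0_iff)
qed

lemma sum_card_classes: "equiv {1..n::nat} K \<Longrightarrow> (\<Sum>C\<in>{1..n} // K. card C) = n"
  using product_partition[OF partition_on_quotient, of "{1..n}" K] finite_class by simp

lemma card_classes_add_excess:
  assumes K: "equiv {1..n::nat} K"
  shows "card ({1..n} // K) + (\<Sum>C\<in>{1..n} // K. card C - 1) = n"
proof -
  have fin: "finite ({1..n} // K)" by (rule finite_classes[OF K])
  have "(\<Sum>C\<in>{1..n} // K. card C) = (\<Sum>C\<in>{1..n} // K. (card C - 1) + 1)"
  proof (rule sum.cong)
    fix x assume "x \<in> {1..n} // K"
    then have "1 \<le> card x" using finite_class[OF K] by blast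
    then show "card x = card x - 1 + 1" by simp
  qed simp
  also have "\<dots> = (\<Sum>C\<in>{1..n} // K. card C - 1) + (\<Sum>C\<in>{1..n} // K. 1)"
    by (rule sum.distrib)
  also have "\<dots> = (\<Sum>C\<in>{1..n} // K. card C - 1) + card ({1..n} // K)"
    by simp
  finally show ?thesis using sum_card_classes[OF K] by simp
qed

lemma card_classes_le_if_two_pairs:
  assumes K: "equiv {1..n::nat} K" and b: "two_pairs K"
  shows "card ({1..n} // K) + 2 \<le> n"
proof -
  have fin: "finite ({1..n} // K)" by (rule finite_classes[OF K])
  obtain a b c d where abcd: "(a, b) \<in> K" "(c, d) \<in> K" "a \<noteq> b" "c \<noteq> d" "{a, b} \<noteq> {c, d}"
    using b unfolding two_pairs_def by blast
  have N: "a \<in> {1..n}" "c \<in> {1..n}" using abcd K unfolding equiv_def by auto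
  let ?f = "\<lambda>C. card C - 1"
  have cl: "K `` {a} \<in> {1..n} // K" "K `` {c} \<in> {1..n} // K" using N by (auto intro: quotientI)
  have mem: "b \<in> K `` {a}" "a \<in> K `` {a}" "d \<in> K `` {c}" "c \<in> K `` {c}"
    using abcd K N unfolding equiv_def refl_on_def by auto
  have "(\<Sum>C\<in>{1..n} // K. ?f C) \<ge> 2"
  proof (cases "K `` {a} = K `` {c}")
    case True
    then have "{a, b, c, d} \<subseteq> K `` {a}" using mem by auto
    moreover have "card {a, b, c, d} \<ge> 3"
    proof -
      have "c \<notin> {a, b} \<or> d \<notin> {a, b}" using abcd(4,5) by auto
      then show ?thesis using abcd(3,4)
        by (cases "c \<in> {a, b}"; cases "d \<in> {a, b}") (auto simp: card_insert_if)
    qed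
    ultimately have "card (K `` {a}) \<ge> 3"
      using finite_class[OF K cl(1)] card_mono by (meson le_trans)
    then have "?f (K `` {a}) \<ge> 2" by simp
    moreover have "?f (K `` {a}) \<le> (\<Sum>C\<in>{1..n} // K. ?f C)"
      by (rule member_le_sum[OF cl(1)]) (use fin in auto)
    ultimately show ?thesis by simp
  next
    case False
    have "card {a, b} \<le> card (K `` {a})" using mem finite_class[OF K cl(1)] by (intro card_mono) auto
    then have 1: "?f (K `` {a}) \<ge> 1" using abcd(3) by simp
    have "card {c, d} \<le> card (K `` {c})" using mem finite_class[OF K cl(2)] by (intro card_mono) auto
    then have 2: "?f (K `` {c}) \<ge> 1" using abcd(4) by simp
    have "(\<Sum>C\<in>{K `` {a}, K `` {c}}. ?f C) = ?f (K `` {a}) + ?f (K `` {c})" using False by simp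
    moreover have "(\<Sum>C\<in>{K `` {a}, K `` {c}}. ?f C) \<le> (\<Sum>C\<in>{1..n} // K. ?f C)"
      by (rule sum_mono2[OF fin]) (use cl in auto)
    ultimately show ?thesis using 1 2 by simp
  qed
  then show ?thesis using card_classes_add_excess[OF K] by simp
qed

lemma quotient_Id_on: "{1..n::nat} // Id_on {1..n} = (\<lambda>i. {i}) ` {1..n}"
  unfolding quotient_def by auto

lemma card_quotient_Id_on: "card ({1..n::nat} // Id_on {1..n}) = n"
  unfolding quotient_Id_on by (subst card_image) (auto simp: inj_on_def)

lemma card_classes_atom:
  assumes A: "atom n K"
  shows "card ({1..n} // K) = n - 1"
proof -
  obtain a b where ab: "a \<in> {1..n}" "b \<in> {1..n}" "a \<noteq> b" "K = Id_on {1..n} \<union> {(a, b), (b, a)}"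
    using A unfolding atom_def by blast
  have K: "equiv {1..n} K" by (rule equiv_atom[OF A])
  have fin: "finite ({1..n} // K)" by (rule finite_classes[OF K])
  let ?f = "\<lambda>C. card C - 1"
  have ca: "K `` {a} = {a, b}" using ab by auto
  have cl: "{a, b} \<in> {1..n} // K" using ca ab(1) quotientI[of a "{1..n}" K] by simp
  have other: "?f C = 0" if "C \<in> {1..n} // K - {{a, b}}" for C
  proof -
    have "C \<in> {1..n} // K" using that by blast
    then obtain i where i: "i \<in> {1..n}" "C = K `` {i}" unfolding quotient_def by blast
    have "i \<noteq> a" "i \<noteq> b" using i that ca ab by auto
    then have "C = {i}" using i ab by auto
    then show ?thesis by simp
  qed
  have "(\<Sum>C\<in>{1..n} // K. ?f C) = ?f {a, b} + (\<Sum>C\<in>{1..n} // K - {{a, b}}. ?f C)"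
    by (rule sum.remove[OF fin cl])
  also have "\<dots> = 1" using other ab(3) by simp
  finally show ?thesis using card_classes_add_excess[OF K] by simp
qed

lemma atom_if_card_classes:
  assumes K: "equiv {1..n} K" and n: "n \<ge> 2" and c: "card ({1..n} // K) = n - 1"
  shows "atom n K"
proof (rule atom_if_not_two_pairs[OF K])
  show "K \<noteq> Id_on {1..n}" using c card_quotient_Id_on[of n] n by auto
  show "\<not> two_pairs K" using card_classes_le_if_two_pairs[OF K] c n by fastforce
qed

lemma card_idem_of:
  assumes K: "equiv {1..n} K"
  shows "card (idem_of n K) = card ({1..n} // K)"
proof -
  have e: "idem_of n K \<in> dual_sym n" by (rule idem_of_in_dual_sym[OF K])
  have cls: "block_rel (idem_of n K) `` {p} = {0, 1} \<times> K `` {snd p}" if "p \<in> pts n" for p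
    using that K unfolding block_rel_idem_of[OF K] equiv_def by (auto simp: pts_def)
  have "idem_of n K = pts n // block_rel (idem_of n K)" using quotient_block_rel[OF e] by simp
  also have "\<dots> = (\<lambda>C. {0::nat, 1} \<times> C) ` ({1..n} // K)"
  proof (intro equalityI subsetI)
    fix X assume "X \<in> pts n // block_rel (idem_of n K)"
    then obtain p where p: "p \<in> pts n" "X = block_rel (idem_of n K) `` {p}" by (auto elim: quotientE)
    have "snd p \<in> {1..n}" using p(1) by (auto simp: pts_def)
    then have "K `` {snd p} \<in> {1..n} // K" by (rule quotientI)
    then show "X \<in> (\<lambda>C. {0::nat, 1} \<times> C) ` ({1..n} // K)" using cls[OF p(1)] p(2) by blast
  next
    fix X assume "X \<in> (\<lambda>C. {0::nat, 1} \<times> C) ` ({1..n} // K)"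
    then obtain i where i: "i \<in> {1..n}" "X = {0, 1} \<times> K `` {i}" by (auto elim: quotientE)
    have p: "(0, i) \<in> pts n" using i by (auto simp: pts_def)
    have "block_rel (idem_of n K) `` {(0, i)} \<in> pts n // block_rel (idem_of n K)" by (rule quotientI[OF p])
    then show "X \<in> pts n // block_rel (idem_of n K)" using cls[OF p] i(2) by simp
  qed
  finally have eq: "idem_of n K = (\<lambda>C. {0::nat, 1} \<times> C) ` ({1..n} // K)" .
  have "inj_on (\<lambda>C. {(0::nat), 1} \<times> C) ({1..n} // K)"
    by (rule inj_onI) (auto simp: times_eq_iff)
  then show ?thesis by (subst eq) (rule card_image)
qed

section \<open>Isolated subsemigroups\<close>

lemma subsemigroup_dpow: "subsemigroup n T \<Longrightarrow> a \<in> T \<Longrightarrow> 1 \<le> k \<Longrightarrow> dpow a k \<in> T"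
proof (induction k)
  case 0 then show ?case by simp
next
  case (Suc k)
  then show ?case by (cases "k = 0") (auto simp: dpow_Suc subsemigroup_def)
qed

lemma subsemigroup_subset: "subsemigroup n T \<Longrightarrow> T \<subseteq> dual_sym n"
  by (simp add: subsemigroup_def)

lemma subsemigroup_dmult: "subsemigroup n T \<Longrightarrow> a \<in> T \<Longrightarrow> b \<in> T \<Longrightarrow> dmult a b \<in> T"
  by (simp add: subsemigroup_def)

lemma isolatedD: "isolated n T \<Longrightarrow> a \<in> dual_sym n \<Longrightarrow> 1 \<le> k \<Longrightarrow> dpow a k \<in> T \<Longrightarrow> a \<in> T"
  by (simp add: isolated_def)

lemma isolated_square: "isolated n T \<Longrightarrow> a \<in> dual_sym n \<Longrightarrow> dmult a a \<in> T \<Longrightarrow> a \<in> T"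
  using isolatedD[of n T a 2] by (simp add: dpow_2)

lemma ex_dpow_eq_idem_of:
  assumes a: "a \<in> dual_sym n"
  obtains m where "m \<ge> 2" "dpow a m = idem_of n (ker (dpow a m))"
proof -
  obtain m where m: "m \<ge> 2" "idempotent (dpow a m)" using ex_idempotent_dpow[OF a] by blast
  have "dpow a m \<in> dual_sym n" using dpow_in_dual_sym[OF a] m by simp
  then show ?thesis using that m idempotent_eq_idem_of by blast
qed

lemma isolated_sym_units_subset:
  assumes ss: "subsemigroup n T" and iso: "isolated n T" and u: "u \<in> T" "u \<in> sym_units n"
  shows "sym_units n \<subseteq> T"
proof
  obtain m where m: "m \<ge> 2" "dpow u m = idem_of n (ker (dpow u m))" using ex_dpow_eq_idem_of[OF sym_units_subset[THEN subsetD, OF u(2)]] by blast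
  have "dpow u m \<in> sym_units n" using dpow_sym_units[OF u(2)] m by simp
  then have "dpow u m = idem_of n (Id_on {1..n})" using sym_units_iff m by auto
  moreover have "dpow u m \<in> T" using subsemigroup_dpow[OF ss u(1)] m by simp
  ultimately have idT: "idem_of n (Id_on {1..n}) \<in> T" by simp
  fix v assume v: "v \<in> sym_units n"
  obtain m' where m': "m' \<ge> 2" "dpow v m' = idem_of n (ker (dpow v m'))" using ex_dpow_eq_idem_of[OF sym_units_subset[THEN subsetD, OF v]] by blast
  have "dpow v m' \<in> sym_units n" using dpow_sym_units[OF v] m' by simp
  then have "dpow v m' = idem_of n (Id_on {1..n})" using sym_units_iff m' by auto
  then show "v \<in> T" using isolatedD[OF iso sym_units_subset[THEN subsetD, OF v], of m'] idT m' by simp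
qed

lemma ker_coker_dpow:
  assumes x: "x \<in> dual_sym n" and k: "ker x = K" and c: "coker x = K" and m: "1 \<le> m"
  shows "ker (dpow x m) = K \<and> coker (dpow x m) = K"
  using m
proof (induction m)
  case 0 then show ?case by simp
next
  case (Suc m)
  show ?case
  proof (cases "m = 0")
    case True then show ?thesis using k c by simp
  next
    case False
    then have IH: "ker (dpow x m) = K" "coker (dpow x m) = K" using Suc by auto
    have e: "dpow x (Suc m) = dmult (dpow x m) x" using dpow_Suc False by simp
    have eq: "coker (dpow x m) = ker x" using IH k by simp
    show ?thesis using ker_coker_dmult[OF dpow_in_dual_sym[OF x] x eq] IH c e False by simp
  qed
qed

lemma isolated_mem_if_ker_coker:
  assumes iso: "isolated n T" and K: "equiv {1..n} K" and e: "idem_of n K \<in> T"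
    and x: "x \<in> dual_sym n" "ker x = K" "coker x = K"
  shows "x \<in> T"
proof -
  obtain m where m: "m \<ge> 2" "dpow x m = idem_of n (ker (dpow x m))" using ex_dpow_eq_idem_of[OF x(1)] by blast
  have "ker (dpow x m) = K" using ker_coker_dpow[OF x, of m] m by simp
  then have "dpow x m = idem_of n K" using m by simp
  then show ?thesis using isolatedD[OF iso x(1), of m] e m by simp
qed

lemma dmult_ker_coker:
  assumes x: "x \<in> dual_sym n" "ker x = K" "coker x = K" and y: "y \<in> dual_sym n" "ker y = K" "coker y = K"
  shows "dmult x y \<in> dual_sym n" "ker (dmult x y) = K" "coker (dmult x y) = K"
  using dmult_in_dual_sym[OF x(1) y(1)] ker_coker_dmult[OF x(1) y(1)] x y by auto

lemma coker_subset_if_left_multiple: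
  "x \<in> dual_sym n \<Longrightarrow> y \<in> insert x {dmult s x | s. s \<in> dual_sym n} \<Longrightarrow> coker x \<subseteq> coker y"
  using coker_dmult_subset by blast

lemma ker_subset_if_right_multiple:
  "x \<in> dual_sym n \<Longrightarrow> y \<in> insert x {dmult x s | s. s \<in> dual_sym n} \<Longrightarrow> ker x \<subseteq> ker y"
  using ker_dmult_subset by blast

lemma left_multiples_eqI:
  assumes x: "x \<in> dual_sym n" and y: "y \<in> dual_sym n" and u: "u \<in> dual_sym n" and v: "v \<in> dual_sym n"
    and xy: "x = dmult u y" and yx: "y = dmult v x"
  shows "insert x {dmult s x | s. s \<in> dual_sym n} = insert y {dmult s y | s. s \<in> dual_sym n}"
proof -
  have sub: "insert a {dmult s a | s. s \<in> dual_sym n} \<subseteq> insert b {dmult s b | s. s \<in> dual_sym n}"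
    if a: "a \<in> dual_sym n" and b: "b \<in> dual_sym n" and w: "w \<in> dual_sym n" and ab: "a = dmult w b"
    for a b w
  proof
    fix z assume "z \<in> insert a {dmult s a | s. s \<in> dual_sym n}"
    then consider "z = a" | s where "s \<in> dual_sym n" "z = dmult s a" by blast
    then show "z \<in> insert b {dmult s b | s. s \<in> dual_sym n}"
    proof cases
      case 2
      then have "z = dmult (dmult s w) b" using ab dmult_assoc[OF 2(1) w b] by simp
      then show ?thesis using dmult_in_dual_sym[OF 2(1) w] by blast
    qed (use ab w in blast)
  qed
  show ?thesis using sub[OF x y u xy] sub[OF y x v yx] by (rule equalityI)
qed

lemma right_multiples_eqI:
  assumes x: "x \<in> dual_sym n" and y: "y \<in> dual_sym n" and u: "u \<in> dual_sym n" and v: "v \<in> dual_sym n"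
    and xy: "x = dmult y u" and yx: "y = dmult x v"
  shows "insert x {dmult x s | s. s \<in> dual_sym n} = insert y {dmult y s | s. s \<in> dual_sym n}"
proof -
  have sub: "insert a {dmult a s | s. s \<in> dual_sym n} \<subseteq> insert b {dmult b s | s. s \<in> dual_sym n}"
    if a: "a \<in> dual_sym n" and b: "b \<in> dual_sym n" and w: "w \<in> dual_sym n" and ab: "a = dmult b w"
    for a b w
  proof
    fix z assume "z \<in> insert a {dmult a s | s. s \<in> dual_sym n}"
    then consider "z = a" | s where "s \<in> dual_sym n" "z = dmult a s" by blast
    then show "z \<in> insert b {dmult b s | s. s \<in> dual_sym n}"
    proof cases
      case 2
      then have "z = dmult b (dmult w s)" using ab dmult_assoc[OF b w 2(1)] by simp
      then show ?thesis using dmult_in_dual_sym[OF w 2(1)] by blast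
    qed (use ab w in blast)
  qed
  show ?thesis using sub[OF x y u xy] sub[OF y x v yx] by (rule equalityI)
qed

lemma H_class_idem_of:
  assumes K: "equiv {1..n} K"
  shows "H_class n (idem_of n K) = {x \<in> dual_sym n. ker x = K \<and> coker x = K}"
proof (intro equalityI subsetI)
  let ?e = "idem_of n K"
  have e: "?e \<in> dual_sym n" by (rule idem_of_in_dual_sym[OF K])
  fix x assume "x \<in> H_class n ?e"
  then have x: "x \<in> dual_sym n"
    and L: "insert x {dmult s x | s. s \<in> dual_sym n} = insert ?e {dmult s ?e | s. s \<in> dual_sym n}"
    and R: "insert x {dmult x s | s. s \<in> dual_sym n} = insert ?e {dmult ?e s | s. s \<in> dual_sym n}"
    unfolding H_class_def by auto
  have "?e \<in> insert x {dmult s x | s. s \<in> dual_sym n}" unfolding L by blast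
  then have c1: "coker x \<subseteq> coker ?e" by (rule coker_subset_if_left_multiple[OF x])
  have "x \<in> insert ?e {dmult s ?e | s. s \<in> dual_sym n}" unfolding L[symmetric] by blast
  then have c2: "coker ?e \<subseteq> coker x" by (rule coker_subset_if_left_multiple[OF e])
  have "?e \<in> insert x {dmult x s | s. s \<in> dual_sym n}" unfolding R by blast
  then have k1: "ker x \<subseteq> ker ?e" by (rule ker_subset_if_right_multiple[OF x])
  have "x \<in> insert ?e {dmult ?e s | s. s \<in> dual_sym n}" unfolding R[symmetric] by blast
  then have k2: "ker ?e \<subseteq> ker x" by (rule ker_subset_if_right_multiple[OF e])
  have "coker x = K" "ker x = K"
    using c1 c2 k1 k2 unfolding ker_idem_of[OF K] coker_idem_of[OF K] by blast+
  with x show "x \<in> {x \<in> dual_sym n. ker x = K \<and> coker x = K}" by blast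
next
  fix x assume "x \<in> {x \<in> dual_sym n. ker x = K \<and> coker x = K}"
  then have x: "x \<in> dual_sym n" and ker: "ker x = K" and coker: "coker x = K" by auto
  note e = idem_of_in_dual_sym[OF K] and x' = dinv_in_dual_sym[OF x]
  have "insert x {dmult s x | s. s \<in> dual_sym n} = insert (idem_of n K) {dmult s (idem_of n K) | s. s \<in> dual_sym n}"
    by (rule left_multiples_eqI[OF x e x x'])
       (use dmult_idem_of_coker[OF x] dinv_dmult[OF x] coker in simp_all)
  moreover have "insert x {dmult x s | s. s \<in> dual_sym n} = insert (idem_of n K) {dmult (idem_of n K) s | s. s \<in> dual_sym n}"
    by (rule right_multiples_eqI[OF x e x x'])
       (use idem_of_ker_dmult[OF x] dmult_dinv[OF x] ker in simp_all)
  ultimately show "x \<in> H_class n (idem_of n K)"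
    unfolding H_class_def using x by blast
qed

lemma uniform_cong:
  assumes "\<And>i. i \<in> {1..n} \<Longrightarrow> \<sigma> i = \<sigma>' i"
  shows "uniform n A \<sigma> = uniform n A \<sigma>'"
proof -
  have "label \<sigma> p = label \<sigma>' p" if "p \<in> pts n" for p
    using that assms by (auto elim: pts_cases)
  then have "fibre_rel n (\<lambda>p. A `` {label \<sigma> p}) = fibre_rel n (\<lambda>p. A `` {label \<sigma>' p})"
    unfolding fibre_rel_def by auto
  then show ?thesis unfolding uniform_def fibres_def by simp
qed

lemma rel_map_involution:
  assumes "R \<subseteq> A \<times> A" "\<And>x. x \<in> A \<Longrightarrow> f (f x) = x"
  shows "rel_map f (rel_map f R) = R"
proof -
  have "rel_map f (rel_map f R) = rel_map id R"
    unfolding rel_map_comp using assms by (intro rel_map_cong[OF assms(1)]) simp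
  then show ?thesis by (simp add: rel_map_id)
qed

lemma involution_image: "(\<And>i. i \<in> {1..n::nat} \<Longrightarrow> \<sigma> (\<sigma> i) = i) \<Longrightarrow> (\<And>i. i \<in> {1..n} \<Longrightarrow> \<sigma> i \<in> {1..n}) \<Longrightarrow> \<sigma> ` {1..n} = {1..n}"
  by (metis image_subsetI subset_antisym imageI subsetI)

lemma equiv_split_class:
  assumes P: "equiv {1..n::nat} P"
  shows "equiv {1..n} {(i, j). (i, j) \<in> P \<and> (i \<in> W1 \<longleftrightarrow> j \<in> W1)}"
proof (rule equivI)
  show "{(i, j). (i, j) \<in> P \<and> (i \<in> W1 \<longleftrightarrow> j \<in> W1)} \<subseteq> {1..n} \<times> {1..n}" using P by (auto simp: equiv_def)
  show "refl_on ({1..n}) {(i, j). (i, j) \<in> P \<and> (i \<in> W1 \<longleftrightarrow> j \<in> W1)}"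
    using P unfolding equiv_def refl_on_def by auto
  show "sym {(i, j). (i, j) \<in> P \<and> (i \<in> W1 \<longleftrightarrow> j \<in> W1)}" using P unfolding equiv_def sym_def by auto
  show "trans {(i, j). (i, j) \<in> P \<and> (i \<in> W1 \<longleftrightarrow> j \<in> W1)}" using P unfolding equiv_def trans_def by blast
qed

lemma equiv_remove_pair:
  assumes P: "equiv {1..n::nat} P" and A: "P `` {a} = {a, b}" and ab: "a \<noteq> b"
  shows "equiv {1..n} (P - {(a, b), (b, a)})"
proof (rule equivI)
  have PN: "P \<subseteq> {1..n} \<times> {1..n}" using P by (simp add: equiv_def)
  have Psym: "(u, v) \<in> P \<Longrightarrow> (v, u) \<in> P" for u v using P unfolding equiv_def sym_def by blast
  have Ptr: "(u, v) \<in> P \<Longrightarrow> (v, w) \<in> P \<Longrightarrow> (u, w) \<in> P" for u v w using P unfolding equiv_def trans_def by blast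
  have clsA: "(u, v) \<in> P \<Longrightarrow> u \<in> {a, b} \<Longrightarrow> v \<in> {a, b}" for u v
  proof -
    assume uv: "(u, v) \<in> P" and u: "u \<in> {a, b}"
    have "(a, u) \<in> P" using u A by auto
    then have "(a, v) \<in> P" using Ptr uv by blast
    then show "v \<in> {a, b}" using A by auto
  qed
  show "P - {(a, b), (b, a)} \<subseteq> {1..n} \<times> {1..n}" using PN by auto
  show "refl_on ({1..n}) (P - {(a, b), (b, a)})" using P ab unfolding equiv_def refl_on_def by auto
  show "sym (P - {(a, b), (b, a)})" using Psym unfolding sym_def by auto
  show "trans (P - {(a, b), (b, a)})"
  proof (rule transI)
    fix u v w assume uv: "(u, v) \<in> P - {(a, b), (b, a)}" and vw: "(v, w) \<in> P - {(a, b), (b, a)}"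
    have uw: "(u, w) \<in> P" using uv vw Ptr by blast
    have "(u, w) \<notin> {(a, b), (b, a)}"
    proof
      assume "(u, w) \<in> {(a, b), (b, a)}"
      then have "u \<in> {a, b}" "w \<in> {a, b}" "u \<noteq> w" using ab by auto
      moreover have "v \<in> {a, b}" using clsA uv \<open>u \<in> {a, b}\<close> by blast
      ultimately show False using uv vw by auto
    qed
    then show "(u, w) \<in> P - {(a, b), (b, a)}" using uw by blast
  qed
qed

text \<open>Both \<open>uniform n R \<sigma>\<close> and \<open>uniform n (rel_map \<sigma> R) \<sigma>\<close> are square roots of
  \<open>idem_of n P\<close>, hence lie in the isolated \<open>T\<close>, and their product is \<open>idem_of n R\<close>.\<close>

lemma idem_of_in_by_involution:
  assumes ss: "subsemigroup n T" and iso: "isolated n T"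
    and P: "equiv {1..n} P" and R: "equiv {1..n} R" and eP: "idem_of n P \<in> T"
    and inv: "\<And>i. i \<in> {1..n} \<Longrightarrow> \<sigma> (\<sigma> i) = i" and sN: "\<And>i. i \<in> {1..n} \<Longrightarrow> \<sigma> i \<in> {1..n}"
    and J: "(R \<union> rel_map \<sigma> R)\<^sup>+ = P"
  shows "idem_of n R \<in> T"
proof -
  have s: "\<sigma> ` {1..n} = {1..n}" by (rule involution_image[OF inv sN])
  define S where "S = rel_map \<sigma> R"
  have S: "equiv {1..n} S" unfolding S_def by (rule equiv_rel_map_involution[OF R sN inv])
  have RN: "R \<subseteq> {1..n} \<times> {1..n}" using R by (simp add: equiv_def)
  have SS: "rel_map \<sigma> S = R" unfolding S_def by (rule rel_map_involution[OF RN inv])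
  have ss_id: "uniform n A (\<sigma> \<circ> \<sigma>) = idem_of n A" for A
    unfolding idem_of_def by (rule uniform_cong) (simp add: inv)
  let ?y = "uniform n R \<sigma>" and ?z = "uniform n S \<sigma>"
  have y: "?y \<in> dual_sym n" by (rule uniform_in_dual_sym[OF R s])
  have z: "?z \<in> dual_sym n" by (rule uniform_in_dual_sym[OF S s])
  have "dmult ?y ?y = idem_of n P" using uniform_dmult[OF R R s s] J ss_id by simp
  then have yT: "?y \<in> T" using isolated_square[OF iso y] eP by simp
  have "(S \<union> rel_map \<sigma> S)\<^sup>+ = P" using J SS unfolding S_def by (simp add: Un_commute)
  then have "dmult ?z ?z = idem_of n P" using uniform_dmult[OF S S s s] ss_id by simp
  then have zT: "?z \<in> T" using isolated_square[OF iso z] eP by simp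
  have "dmult ?y ?z = idem_of n ((R \<union> R)\<^sup>+)" using uniform_dmult[OF R S s s] SS ss_id by simp
  also have "\<dots> = idem_of n R" using equiv_trancl_eq[OF R] by simp
  finally show ?thesis using subsemigroup_dmult[OF ss yT zT] by simp
qed

lemma equiv_class_memD: "equiv N P \<Longrightarrow> w \<in> N \<Longrightarrow> i \<in> P `` {w} \<Longrightarrow> j \<in> P `` {w} \<Longrightarrow> (i, j) \<in> P"
  unfolding equiv_def sym_def trans_def by blast

lemma trancl_eq_equivI:
  assumes P: "equiv A P" and sub: "X \<subseteq> P" and gen: "P \<subseteq> X\<^sup>+"
  shows "X\<^sup>+ = P"
proof
  show "X\<^sup>+ \<subseteq> P" using trancl_mono[of _ X P] sub equiv_trancl_eq[OF P] by blast
qed (rule gen)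

lemma trancl_split_class:
  assumes P: "equiv {1..n::nat} P"
    and w: "w \<in> {1..n}" and W: "W = P `` {w}" and W1: "W1 \<subseteq> W"
    and x: "x \<in> W1" and x': "x' \<in> W1" and xx: "x \<noteq> x'" and y: "y \<in> W" "y \<notin> W1"
  shows "({(i, j). (i, j) \<in> P \<and> (i \<in> W1 \<longleftrightarrow> j \<in> W1)} \<union>
      rel_map (Transposition.transpose x y) {(i, j). (i, j) \<in> P \<and> (i \<in> W1 \<longleftrightarrow> j \<in> W1)})\<^sup>+ = P"
proof -
  define R where "R = {(i, j). (i, j) \<in> P \<and> (i \<in> W1 \<longleftrightarrow> j \<in> W1)}"
  have PN: "P \<subseteq> {1..n} \<times> {1..n}" using P by (simp add: equiv_def)
  have inW: "(i, j) \<in> P" if "i \<in> W" "j \<in> W" for i j using equiv_class_memD[OF P w] that W by simp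
  have cls: "j \<in> W" if "i \<in> W" "(i, j) \<in> P" for i j
    using that W P unfolding equiv_def trans_def by blast
  define \<sigma> where "\<sigma> = Transposition.transpose x y"
  have xy: "x \<noteq> y" "x' \<noteq> y" using x x' y by auto
  have sx: "\<sigma> x = y" "\<sigma> y = x" "\<sigma> x' = x'" using xx xy by (auto simp: \<sigma>_def transpose_def)
  have move: "(u, \<sigma> u) \<in> P" if "u \<in> {1..n}" for u
  proof (cases "u = x \<or> u = y")
    case True then show ?thesis using inW x y W1 sx by auto
  next
    case False
    then have "\<sigma> u = u" by (auto simp: \<sigma>_def transpose_def)
    then show ?thesis using equiv_refl_onD[OF P that] by simp
  qed
  have "R \<union> rel_map \<sigma> R \<subseteq> P"
  proof (intro Un_least subrelI)
    fix u v assume "(u, v) \<in> rel_map \<sigma> R"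
    then obtain u1 u2 where u: "(u1, u2) \<in> P" "u = \<sigma> u1" "v = \<sigma> u2"
      unfolding R_def by (auto elim!: rel_mapE)
    then have "u1 \<in> {1..n}" "u2 \<in> {1..n}" using PN by auto
    then show "(u, v) \<in> P"
      using u move P by (meson equivE symD transD)
  qed (auto simp: R_def)
  moreover have "P \<subseteq> (R \<union> rel_map \<sigma> R)\<^sup>+"
  proof
    fix z assume zP: "z \<in> P"
    obtain i j where z: "z = (i, j)" by force
    show "z \<in> (R \<union> rel_map \<sigma> R)\<^sup>+"
    proof (cases "z \<in> R")
      case True then show ?thesis by (intro r_into_trancl') blast
    next
      case False
      then have ij: "(i, j) \<in> P" "\<not> (i \<in> W1 \<longleftrightarrow> j \<in> W1)" using zP z unfolding R_def by auto
      have iW: "i \<in> W" "j \<in> W"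
      proof -
        have "i \<in> W \<or> j \<in> W" using ij(2) W1 by auto
        then show "i \<in> W" "j \<in> W"
          using cls ij(1) P unfolding equiv_def sym_def by blast+
      qed
      have xxR: "(x', x) \<in> R" "(x, x') \<in> R" using inW x x' W1 unfolding R_def by auto
      have sR1: "(x', y) \<in> rel_map \<sigma> R" using rel_mapI[OF xxR(1), of \<sigma>] sx by simp
      have sR2: "(y, x') \<in> rel_map \<sigma> R" using rel_mapI[OF xxR(2), of \<sigma>] sx by simp
      show ?thesis
      proof (cases "i \<in> W1")
        case True
        then have jn: "j \<notin> W1" using ij(2) by simp
        have 1: "(i, x') \<in> R" using inW True x' W1 unfolding R_def by auto
        have 2: "(y, j) \<in> R" using inW y iW jn unfolding R_def by auto
        have "(i, x') \<in> (R \<union> rel_map \<sigma> R)\<^sup>+" "(x', y) \<in> (R \<union> rel_map \<sigma> R)\<^sup>+" "(y, j) \<in> (R \<union> rel_map \<sigma> R)\<^sup>+"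
          using 1 2 sR1 by (blast intro: r_into_trancl')+
        then show ?thesis using z by (meson trancl_trans)
      next
        case False
        then have jn: "j \<in> W1" using ij(2) by simp
        have 1: "(i, y) \<in> R" using inW y iW False unfolding R_def by auto
        have 2: "(x', j) \<in> R" using inW jn x' W1 unfolding R_def by auto
        have "(i, y) \<in> (R \<union> rel_map \<sigma> R)\<^sup>+" "(y, x') \<in> (R \<union> rel_map \<sigma> R)\<^sup>+" "(x', j) \<in> (R \<union> rel_map \<sigma> R)\<^sup>+"
          using 1 2 sR2 by (blast intro: r_into_trancl')+
        then show ?thesis using z by (meson trancl_trans)
      qed
    qed
  qed
  ultimately show ?thesis
    unfolding R_def[symmetric] \<sigma>_def[symmetric] by (rule trancl_eq_equivI[OF P])
qed

lemma idem_of_split_class: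
  assumes ss: "subsemigroup n T" and iso: "isolated n T"
    and P: "equiv {1..n} P" and eP: "idem_of n P \<in> T"
    and w: "w \<in> {1..n}" and W: "W = P `` {w}" and W1: "W1 \<subseteq> W"
    and x: "x \<in> W1" and x': "x' \<in> W1" and xx: "x \<noteq> x'" and y: "y \<in> W" "y \<notin> W1"
  shows "idem_of n {(i, j). (i, j) \<in> P \<and> (i \<in> W1 \<longleftrightarrow> j \<in> W1)} \<in> T"
proof (rule idem_of_in_by_involution[OF ss iso P equiv_split_class[OF P] eP])
  have "x \<in> {1..n}" "y \<in> {1..n}"
    using x y W1 W equiv_pairD[OF P] by auto
  then show "Transposition.transpose x y (Transposition.transpose x y i) = i"
    "Transposition.transpose x y i \<in> {1..n}" if "i \<in> {1..n}" for i
    using that by (auto simp: transpose_def)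
qed (rule trancl_split_class[OF P w W W1 x x' xx y])

lemma trancl_remove_pair:
  assumes P: "equiv {1..n::nat} P"
    and N: "a \<in> {1..n}" "b \<in> {1..n}" "c \<in> {1..n}" "d \<in> {1..n}"
    and dist: "a \<noteq> b" "a \<noteq> c" "a \<noteq> d" "b \<noteq> c" "b \<noteq> d" "c \<noteq> d"
    and A: "P `` {a} = {a, b}" and B: "P `` {c} = {c, d}"
  shows "((P - {(a, b), (b, a)}) \<union>
      rel_map (Transposition.transpose a c \<circ> Transposition.transpose b d) (P - {(a, b), (b, a)}))\<^sup>+ = P"
proof -
  define R where "R = P - {(a, b), (b, a)}"
  have PN: "P \<subseteq> {1..n} \<times> {1..n}" using P by (simp add: equiv_def)
  have Psym: "(u, v) \<in> P \<Longrightarrow> (v, u) \<in> P" for u v using P unfolding equiv_def sym_def by blast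
  have Ptr: "(u, v) \<in> P \<Longrightarrow> (v, w) \<in> P \<Longrightarrow> (u, w) \<in> P" for u v w using P unfolding equiv_def trans_def by blast
  have clsA: "(u, v) \<in> P \<Longrightarrow> u \<in> {a, b} \<Longrightarrow> v \<in> {a, b}" for u v
  proof -
    assume uv: "(u, v) \<in> P" and u: "u \<in> {a, b}"
    have "(a, u) \<in> P" using u A by auto
    then have "(a, v) \<in> P" using Ptr uv by blast
    then show "v \<in> {a, b}" using A by auto
  qed
  have clsB: "(u, v) \<in> P \<Longrightarrow> u \<in> {c, d} \<Longrightarrow> v \<in> {c, d}" for u v
  proof -
    assume uv: "(u, v) \<in> P" and u: "u \<in> {c, d}"
    have "(c, u) \<in> P" using u B by auto
    then have "(c, v) \<in> P" using Ptr uv by blast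
    then show "v \<in> {c, d}" using B by auto
  qed
  have ab: "(a, b) \<in> P" "(b, a) \<in> P" using A Psym by auto
  have cd: "(c, d) \<in> P" "(d, c) \<in> P" using B Psym by auto
  define \<sigma> where "\<sigma> = Transposition.transpose a c \<circ> Transposition.transpose b d"
  have pres: "(\<sigma> u, \<sigma> v) \<in> P" if uv: "(u, v) \<in> P" for u v
  proof (cases "u \<in> {a, b}")
    case True
    then have "v \<in> {a, b}" using clsA uv by blast
    then have "\<sigma> u \<in> {c, d}" "\<sigma> v \<in> {c, d}" using True dist by (auto simp: \<sigma>_def transpose_def)
    then show ?thesis using cd equiv_refl_onD[OF P] N by auto
  next
    case F1: False
    show ?thesis
    proof (cases "u \<in> {c, d}")
      case True
      then have "v \<in> {c, d}" using clsB uv by blast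
      then have "\<sigma> u \<in> {a, b}" "\<sigma> v \<in> {a, b}" using True dist by (auto simp: \<sigma>_def transpose_def)
      then show ?thesis using ab equiv_refl_onD[OF P] N by auto
    next
      case False
      have "v \<notin> {a, b}" using clsA Psym uv F1 by blast
      moreover have "v \<notin> {c, d}" using clsB Psym uv False by blast
      ultimately have "\<sigma> u = u" "\<sigma> v = v" using F1 False by (auto simp: \<sigma>_def transpose_def)
      then show ?thesis using uv by simp
    qed
  qed
  have "R \<union> rel_map \<sigma> R \<subseteq> P"
    using pres unfolding R_def by (auto elim!: rel_mapE)
  moreover have "P \<subseteq> (R \<union> rel_map \<sigma> R)\<^sup>+"
  proof
    fix z assume zP: "z \<in> P"
    show "z \<in> (R \<union> rel_map \<sigma> R)\<^sup>+"
    proof (cases "z \<in> R")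
      case True then show ?thesis by (intro r_into_trancl') blast
    next
      case False
      then have "z = (a, b) \<or> z = (b, a)" using zP unfolding R_def by auto
      moreover have "(c, d) \<in> R" "(d, c) \<in> R" using cd dist unfolding R_def by auto
      moreover have "\<sigma> c = a" "\<sigma> d = b" using dist by (auto simp: \<sigma>_def transpose_def)
      ultimately have "z \<in> rel_map \<sigma> R" using rel_mapI by metis
      then show ?thesis by (intro r_into_trancl') blast
    qed
  qed
  ultimately show ?thesis
    unfolding R_def[symmetric] \<sigma>_def[symmetric] by (rule trancl_eq_equivI[OF P])
qed

lemma idem_of_split_pair:
  assumes ss: "subsemigroup n T" and iso: "isolated n T"
    and P: "equiv {1..n} P" and eP: "idem_of n P \<in> T"
    and N: "a \<in> {1..n}" "b \<in> {1..n}" "c \<in> {1..n}" "d \<in> {1..n}"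
    and dist: "a \<noteq> b" "a \<noteq> c" "a \<noteq> d" "b \<noteq> c" "b \<noteq> d" "c \<noteq> d"
    and A: "P `` {a} = {a, b}" and B: "P `` {c} = {c, d}"
  shows "idem_of n (P - {(a, b), (b, a)}) \<in> T"
proof (rule idem_of_in_by_involution[OF ss iso P equiv_remove_pair[OF P A dist(1)] eP])
  show "(Transposition.transpose a c \<circ> Transposition.transpose b d)
      ((Transposition.transpose a c \<circ> Transposition.transpose b d) i) = i" for i
    using dist by (auto simp: transpose_def)
  show "(Transposition.transpose a c \<circ> Transposition.transpose b d) i \<in> {1..n}" if "i \<in> {1..n}" for i
    using that N by (auto simp: transpose_def)
qed (rule trancl_remove_pair[OF P N dist A B])

text \<open>The element whose block belonging to an \<open>R\<close>-class \<open>C\<close> is \<open>C\<close> together with the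
  primed copy of the class that the transposition of the classes of \<open>x\<close> and \<open>y\<close> sends to \<open>C\<close>.\<close>

definition class_swap :: "nat \<Rightarrow> (nat \<times> nat) set \<Rightarrow> nat \<Rightarrow> nat \<Rightarrow> dpart" where
  "class_swap n R x y = fibres n (\<lambda>p. if fst p = 0 then R `` {snd p}
      else Transposition.transpose (R `` {x}) (R `` {y}) (R `` {snd p}))"

lemma transpose_class:
  assumes R: "equiv {1..n::nat} R" and x: "x \<in> {1..n}" and y: "y \<in> {1..n}" and i: "i \<in> {1..n}"
  obtains j where "j \<in> {1..n}" "Transposition.transpose (R `` {x}) (R `` {y}) (R `` {i}) = R `` {j}"
proof -
  consider "R `` {i} = R `` {x}" | "R `` {i} = R `` {y}" | "R `` {i} \<noteq> R `` {x}" "R `` {i} \<noteq> R `` {y}"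
    by blast
  then show ?thesis
    by cases (use that x y i in \<open>auto simp: transpose_def\<close>)
qed

lemma
  assumes R: "equiv {1..n} R" and x: "x \<in> {1..n}" and y: "y \<in> {1..n}"
  shows class_swap_in_dual_sym: "class_swap n R x y \<in> dual_sym n"
    and block_rel_class_swap: "block_rel (class_swap n R x y) = fibre_rel n (\<lambda>p. if fst p = 0 then R `` {snd p}
      else Transposition.transpose (R `` {x}) (R `` {y}) (R `` {snd p}))"
proof -
  let ?\<tau> = "Transposition.transpose (R `` {x}) (R `` {y})"
  have top: "\<exists>j\<in>{1..n}. ?\<tau> (R `` {j}) = R `` {i}" if i: "i \<in> {1..n}" for i
  proof -
    obtain j where "j \<in> {1..n}" "?\<tau> (R `` {i}) = R `` {j}" by (rule transpose_class[OF R x y i])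
    moreover from this(2) have "?\<tau> (R `` {j}) = R `` {i}" by (metis transpose_involutory)
    ultimately show ?thesis by blast
  qed
  have bottom: "\<exists>i\<in>{1..n}. R `` {i} = ?\<tau> (R `` {j})" if j: "j \<in> {1..n}" for j
  proof -
    obtain i where "i \<in> {1..n}" "?\<tau> (R `` {j}) = R `` {i}" by (rule transpose_class[OF R x y j])
    then show ?thesis by metis
  qed
  show "class_swap n R x y \<in> dual_sym n"
    unfolding class_swap_def by (rule fibres(1)) (use top bottom in simp_all)
  show "block_rel (class_swap n R x y) = fibre_rel n (\<lambda>p. if fst p = 0 then R `` {snd p} else ?\<tau> (R `` {snd p}))"
    unfolding class_swap_def by (rule fibres(2)) (use top bottom in simp_all)
qed

lemma
  assumes R: "equiv {1..n} R" and x: "x \<in> {1..n}" and y: "y \<in> {1..n}"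
  shows ker_class_swap: "ker (class_swap n R x y) = R"
    and coker_class_swap: "coker (class_swap n R x y) = R"
    and class_swap_link: "i \<in> {1..n} \<Longrightarrow> j \<in> {1..n} \<Longrightarrow>
      R `` {i} = Transposition.transpose (R `` {x}) (R `` {y}) (R `` {j}) \<Longrightarrow>
      ((0, i), (1, j)) \<in> block_rel (class_swap n R x y)"
proof -
  let ?\<tau> = "Transposition.transpose (R `` {x}) (R `` {y})"
  note mem = block_rel_class_swap[OF R x y, unfolded fibre_rel_def, THEN equalityD1, THEN subsetD]
    block_rel_class_swap[OF R x y, unfolded fibre_rel_def, THEN equalityD2, THEN subsetD]
  have row: "((t, i), (t, j)) \<in> block_rel (class_swap n R x y) \<longleftrightarrow> (i, j) \<in> R"
    if t: "t = 0 \<or> t = 1" for t i j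
  proof -
    have "((t, i), (t, j)) \<in> block_rel (class_swap n R x y) \<longleftrightarrow>
        i \<in> {1..n} \<and> j \<in> {1..n} \<and> R `` {i} = R `` {j}"
      using t unfolding block_rel_class_swap[OF R x y] fibre_rel_def
      by (elim disjE) (simp_all add: mem_pts_iff inj_eq[OF inj_transpose])
    also have "\<dots> \<longleftrightarrow> (i, j) \<in> R"
      using eq_equiv_class_iff[OF R, of i j] equiv_pairD[OF R, of i j] by blast
    finally show ?thesis .
  qed
  show "ker (class_swap n R x y) = R" "coker (class_swap n R x y) = R"
    unfolding ker_def coker_def using row by auto
  show "((0, i), (1, j)) \<in> block_rel (class_swap n R x y)"
    if "i \<in> {1..n}" "j \<in> {1..n}" "R `` {i} = ?\<tau> (R `` {j})"
    using that by (intro mem(2)) (simp add: mem_pts_iff)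
qed

text \<open>Multiplying \<open>idem_of n P\<close> by the element of the \<open>H\<close>-class of \<open>idem_of n R\<close> that swaps
  the \<open>R\<close>-classes of \<open>x\<close> and \<open>y\<close> glues the class of \<open>y\<close> to the \<open>P\<close>-class of \<open>x\<close>; the
  idempotent power of the product then has a strictly larger kernel.\<close>

lemma idem_of_merge:
  assumes ss: "subsemigroup n T" and iso: "isolated n T"
    and P: "equiv {1..n} P" and R: "equiv {1..n} R" and eP: "idem_of n P \<in> T" and eR: "idem_of n R \<in> T"
    and RP: "R \<subseteq> P" and N: "x \<in> {1..n}" "x' \<in> {1..n}" "y \<in> {1..n}"
    and xx: "(x, x') \<in> P" "(x, x') \<notin> R" and xy: "(x, y) \<notin> P"
  shows "\<exists>Q. equiv {1..n} Q \<and> idem_of n Q \<in> T \<and> P \<subset> Q"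
proof -
  let ?\<tau> = "Transposition.transpose (R `` {x}) (R `` {y})"
  define h where "h = class_swap n R x y"
  have h: "h \<in> dual_sym n" unfolding h_def by (rule class_swap_in_dual_sym[OF R N(1,3)])
  have hT: "h \<in> T"
    using isolated_mem_if_ker_coker[OF iso R eR h] ker_class_swap[OF R N(1,3)] coker_class_swap[OF R N(1,3)]
    unfolding h_def by simp
  have e: "idem_of n P \<in> dual_sym n" by (rule idem_of_in_dual_sym[OF P])
  define w where "w = dmult (idem_of n P) h"
  have w: "w \<in> dual_sym n" unfolding w_def by (rule dmult_in_dual_sym[OF e h])
  have wT: "w \<in> T" unfolding w_def by (rule subsemigroup_dmult[OF ss eP hT])
  have Pw: "P \<subseteq> ker w" using ker_dmult_subset[OF e h] ker_idem_of[OF P] unfolding w_def by simp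
  have through_h: "((0, i), (1, j)) \<in> block_rel w"
    if "i \<in> {1..n}" "j \<in> {1..n}" "R `` {i} = ?\<tau> (R `` {j})" for i j
  proof -
    have "((0, i), (1, i)) \<in> block_rel (idem_of n P)"
      using that(1) equiv_refl_onD[OF P] by (simp add: block_rel_idem_of[OF P] mem_pts_iff)
    then have "((0, i), (2, i)) \<in> (prod_graph (idem_of n P) h)\<^sup>*"
      using prod_graph_left by fastforce
    moreover have "((2, i), (1, j)) \<in> (prod_graph (idem_of n P) h)\<^sup>*"
      using prod_graph_right[OF class_swap_link[OF R N(1,3) that, folded h_def]] by simp
    ultimately show ?thesis
      unfolding w_def using that by (intro block_rel_dmultI[OF e h]) (auto simp: mem_pts_iff)
  qed
  have x'x: "(x', x) \<in> P" "(x', x) \<notin> R" using xx P R by (meson equivE symD)+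
  have x'y: "(x', y) \<notin> P" using xx(1) xy P by (meson equivE transD)
  have XY: "R `` {x} \<noteq> R `` {y}" and x'X: "R `` {x'} \<noteq> R `` {x}" and x'Y: "R `` {x'} \<noteq> R `` {y}"
    using eq_equiv_class_iff[OF R] N xy x'x(2) x'y RP by blast+
  have F1: "((0, x'), (1, x')) \<in> block_rel w"
    using through_h[OF N(2) N(2)] x'X x'Y by (simp add: transpose_def)
  have F2: "((0, x'), (0, x)) \<in> block_rel w"
    using Pw x'x(1) by (auto simp: ker_def)
  have F3: "((0, y), (1, x)) \<in> block_rel w"
    using through_h[OF N(3) N(1)] XY by simp
  have "((0, x'), (2, x')) \<in> (prod_graph w w)\<^sup>*" "((2, x'), (2, x)) \<in> (prod_graph w w)\<^sup>*"
    "((2, x), (0, y)) \<in> (prod_graph w w)\<^sup>*"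
    using prod_graph_left[OF F1, of w] prod_graph_right[OF F2, of w]
      prod_graph_left[OF block_rel_sym[OF F3], of w] by simp_all
  then have "((0, x'), (0, y)) \<in> block_rel (dmult w w)"
    using N by (intro block_rel_dmultI[OF w w]) (auto simp: mem_pts_iff intro: rtrancl_trans)
  then have x'y_ww: "(x', y) \<in> ker (dpow w 2)" by (simp add: ker_def dpow_2)
  obtain m where m: "m \<ge> 2" "dpow w m = idem_of n (ker (dpow w m))" using ex_dpow_eq_idem_of[OF w] by blast
  define Q where "Q = ker (dpow w m)"
  have Q: "equiv {1..n} Q" unfolding Q_def by (rule equiv_ker[OF dpow_in_dual_sym[OF w]]) (use m in simp)
  have "P \<subseteq> Q" "(x', y) \<in> Q"
    using Pw ker_dpow_mono[OF w, of 1 m] ker_dpow_mono[OF w, of 2 m] x'y_ww m unfolding Q_def by auto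
  moreover note x'y
  moreover have "idem_of n Q \<in> T" using subsemigroup_dpow[OF ss wT, of m] m unfolding Q_def by simp
  ultimately show ?thesis using Q by blast
qed

lemma two_pairs_cases:
  assumes P: "equiv {1..n::nat} P" and bg: "two_pairs P"
  shows "(\<exists>a b c. a \<noteq> b \<and> a \<noteq> c \<and> b \<noteq> c \<and> (a, b) \<in> P \<and> (a, c) \<in> P) \<or>
         (\<exists>a b c d. a \<noteq> b \<and> a \<noteq> c \<and> a \<noteq> d \<and> b \<noteq> c \<and> b \<noteq> d \<and> c \<noteq> d \<and> P `` {a} = {a, b} \<and> P `` {c} = {c, d})"
  (is "?A \<or> ?B")
proof -
  obtain a b c d where abcd: "(a, b) \<in> P" "(c, d) \<in> P" "a \<noteq> b" "c \<noteq> d" "{a, b} \<noteq> {c, d}"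
    using bg unfolding two_pairs_def by blast
  have Psym: "(u, v) \<in> P \<Longrightarrow> (v, u) \<in> P" for u v using P unfolding equiv_def sym_def by blast
  have Ptr: "(u, v) \<in> P \<Longrightarrow> (v, w) \<in> P \<Longrightarrow> (u, w) \<in> P" for u v w using P unfolding equiv_def trans_def by blast
  have Prefl: "(u, v) \<in> P \<Longrightarrow> (u, u) \<in> P" for u v using Psym Ptr by blast
  have tri: "?A" if "u \<noteq> v" "u \<noteq> w" "v \<noteq> w" "(u, v) \<in> P" "(u, w) \<in> P" for u v w
    using that by blast
  show ?thesis
  proof (cases "(a, c) \<in> P")
    case True
    then have ad: "(a, d) \<in> P" using Ptr abcd(2) by blast
    have "c \<notin> {a, b} \<or> d \<notin> {a, b}" using abcd(4,5) by auto
    then show ?thesis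
    proof
      assume "c \<notin> {a, b}" then have "?A" using tri[of a b c] abcd True by simp
      then show ?thesis ..
    next
      assume "d \<notin> {a, b}" then have "?A" using tri[of a b d] abcd ad by simp
      then show ?thesis ..
    qed
  next
    case False
    show ?thesis
    proof (cases "\<exists>e. (a, e) \<in> P \<and> e \<notin> {a, b}")
      case True
      then obtain e where "(a, e) \<in> P" "e \<notin> {a, b}" by blast
      then have "?A" using tri[of a b e] abcd by simp
      then show ?thesis ..
    next
      case nA: False
      show ?thesis
      proof (cases "\<exists>e. (c, e) \<in> P \<and> e \<notin> {c, d}")
        case True
        then obtain e where "(c, e) \<in> P" "e \<notin> {c, d}" by blast
        then have "?A" using tri[of c d e] abcd by simp
        then show ?thesis ..
      next
        case nC: False
        have A: "P `` {a} = {a, b}" using nA abcd(1) Prefl by auto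
        have C: "P `` {c} = {c, d}" using nC abcd(2) Prefl by auto
        have "a \<noteq> c" using False Prefl abcd(1) by blast
        moreover have "a \<noteq> d" using False abcd(2) Psym by blast
        moreover have "b \<noteq> c" using False abcd(1) Ptr by blast
        moreover have "b \<noteq> d" using False abcd(1,2) Ptr Psym by blast
        ultimately have "?B" using abcd(3,4) A C by blast
        then show ?thesis ..
      qed
    qed
  qed
qed

lemma ex_unrelated:
  assumes P: "equiv {1..n::nat} P" and nf: "P \<noteq> {1..n} \<times> {1..n}" and a: "a \<in> {1..n}"
  shows "\<exists>v\<in>{1..n}. (a, v) \<notin> P"
proof (rule ccontr)
  assume "\<not> ?thesis"
  then have all: "\<forall>v\<in>{1..n}. (a, v) \<in> P" by blast
  have "{1..n} \<times> {1..n} \<subseteq> P"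
  proof
    fix z assume "z \<in> {1..n} \<times> {1..n}"
    then obtain i j where "z = (i, j)" "i \<in> {1..n}" "j \<in> {1..n}" by blast
    then show "z \<in> P" using all P unfolding equiv_def sym_def trans_def by blast
  qed
  then show False using nf P by (auto simp: equiv_def)
qed

lemma idem_of_grow:
  assumes ss: "subsemigroup n T" and iso: "isolated n T"
    and P: "equiv {1..n} P" and eP: "idem_of n P \<in> T" and bg: "two_pairs P" and nf: "P \<noteq> {1..n} \<times> {1..n}"
  shows "\<exists>Q. equiv {1..n} Q \<and> idem_of n Q \<in> T \<and> P \<subset> Q"
proof -
  have PN: "P \<subseteq> {1..n} \<times> {1..n}" using P by (simp add: equiv_def)
  have Psym: "(u, v) \<in> P \<Longrightarrow> (v, u) \<in> P" for u v using P unfolding equiv_def sym_def by blast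
  from two_pairs_cases[OF P bg] show ?thesis
  proof
    assume "\<exists>a b c. a \<noteq> b \<and> a \<noteq> c \<and> b \<noteq> c \<and> (a, b) \<in> P \<and> (a, c) \<in> P"
    then obtain a b c where abc: "a \<noteq> b" "a \<noteq> c" "b \<noteq> c" "(a, b) \<in> P" "(a, c) \<in> P" by blast
    have N: "a \<in> {1..n}" "b \<in> {1..n}" "c \<in> {1..n}" using abc PN by auto
    define W where "W = P `` {a}"
    define W1 where "W1 = W - {c}"
    have aW: "a \<in> W" using equiv_refl_onD[OF P N(1)] unfolding W_def by simp
    have Rin: "idem_of n {(i, j). (i, j) \<in> P \<and> (i \<in> W1 \<longleftrightarrow> j \<in> W1)} \<in> T"
      by (rule idem_of_split_class[OF ss iso P eP N(1) W_def, of W1 a b c])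
         (use abc aW in \<open>auto simp: W1_def W_def\<close>)
    define R where "R = {(i, j). (i, j) \<in> P \<and> (i \<in> W1 \<longleftrightarrow> j \<in> W1)}"
    have R: "equiv {1..n} R" unfolding R_def by (rule equiv_split_class[OF P])
    obtain v where v: "v \<in> {1..n}" "(a, v) \<notin> P" using ex_unrelated[OF P nf N(1)] by blast
    have "(c, v) \<notin> P"
    proof
      assume "(c, v) \<in> P"
      then have "(a, v) \<in> P" using abc(5) P unfolding equiv_def trans_def by blast
      then show False using v by simp
    qed
    moreover have "(c, a) \<in> P" using Psym abc(5) .
    moreover have "(c, a) \<notin> R" using aW abc(2) unfolding R_def W1_def by auto
    ultimately show ?thesis
      using idem_of_merge[OF ss iso P R eP _ _ N(3) N(1) v(1)] Rin unfolding R_def by blast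
  next
    assume "\<exists>a b c d. a \<noteq> b \<and> a \<noteq> c \<and> a \<noteq> d \<and> b \<noteq> c \<and> b \<noteq> d \<and> c \<noteq> d \<and> P `` {a} = {a, b} \<and> P `` {c} = {c, d}"
    then obtain a b c d where abcd: "a \<noteq> b" "a \<noteq> c" "a \<noteq> d" "b \<noteq> c" "b \<noteq> d" "c \<noteq> d"
      "P `` {a} = {a, b}" "P `` {c} = {c, d}" by blast
    have ab: "(a, b) \<in> P" "(c, d) \<in> P" using abcd by auto
    have N: "a \<in> {1..n}" "b \<in> {1..n}" "c \<in> {1..n}" "d \<in> {1..n}" using ab PN by auto
    have Rin: "idem_of n (P - {(a, b), (b, a)}) \<in> T"
      by (rule idem_of_split_pair[OF ss iso P eP N abcd])
    have R: "equiv {1..n} (P - {(a, b), (b, a)})" by (rule equiv_remove_pair[OF P abcd(7) abcd(1)])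
    have "(a, c) \<notin> P" using abcd by auto
    then show ?thesis using idem_of_merge[OF ss iso P R eP Rin _ N(1) N(2) N(3) ab(1)] by blast
  qed
qed

lemma idem_of_full:
  assumes ss: "subsemigroup n T" and iso: "isolated n T"
  shows "equiv {1..n} P \<Longrightarrow> idem_of n P \<in> T \<Longrightarrow> two_pairs P \<Longrightarrow> idem_of n ({1..n} \<times> {1..n}) \<in> T"
proof (induction "card ({1..n} \<times> {1..n} - P)" arbitrary: P rule: less_induct)
  case less
  show ?case
  proof (cases "P = {1..n} \<times> {1..n}")
    case True then show ?thesis using less by simp
  next
    case False
    obtain Q where Q: "equiv {1..n} Q" "idem_of n Q \<in> T" "P \<subset> Q" using idem_of_grow[OF ss iso less(2-4) False] by blast
    have QN: "Q \<subseteq> {1..n} \<times> {1..n}" using Q(1) by (simp add: equiv_def)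
    have "{1..n} \<times> {1..n} - Q \<subset> {1..n} \<times> {1..n} - P" using Q(3) QN by blast
    then have "card ({1..n} \<times> {1..n} - Q) < card ({1..n} \<times> {1..n} - P)" by (intro psubset_card_mono) auto
    moreover have "two_pairs Q" using two_pairs_mono[OF less(4)] Q(3) by blast
    ultimately show ?thesis using less(1) Q by blast
  qed
qed

lemma equiv_Un_Times_closed:
  assumes Q: "equiv {1..n::nat} Q" and W: "W \<subseteq> {1..n}" and cl: "\<And>i. i \<in> W \<Longrightarrow> Q `` {i} \<subseteq> W"
  shows "equiv {1..n} (Q \<union> W \<times> W)"
proof (rule equivI)
  have Qsym: "(u, v) \<in> Q \<Longrightarrow> (v, u) \<in> Q" for u v using Q unfolding equiv_def sym_def by blast
  show "Q \<union> W \<times> W \<subseteq> {1..n} \<times> {1..n}" using Q W by (auto simp: equiv_def)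
  show "refl_on ({1..n}) (Q \<union> W \<times> W)" using Q unfolding equiv_def refl_on_def by auto
  show "sym (Q \<union> W \<times> W)" using Qsym unfolding sym_def by auto
  show "trans (Q \<union> W \<times> W)"
  proof (rule transI)
    fix u v w assume uv: "(u, v) \<in> Q \<union> W \<times> W" and vw: "(v, w) \<in> Q \<union> W \<times> W"
    show "(u, w) \<in> Q \<union> W \<times> W"
    proof (cases "(u, v) \<in> Q")
      case True
      show ?thesis
      proof (cases "(v, w) \<in> Q")
        case True then show ?thesis using \<open>(u, v) \<in> Q\<close> Q unfolding equiv_def trans_def by blast
      next
        case False
        then have "v \<in> W" "w \<in> W" using vw by auto
        moreover have "u \<in> W" using cl[OF \<open>v \<in> W\<close>] Qsym[OF True] by blast
        ultimately show ?thesis by blast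
      qed
    next
      case False
      then have "u \<in> W" "v \<in> W" using uv by auto
      show ?thesis
      proof (cases "(v, w) \<in> Q")
        case True
        then have "w \<in> W" using cl[OF \<open>v \<in> W\<close>] by blast
        then show ?thesis using \<open>u \<in> W\<close> by blast
      next
        case False
        then show ?thesis using vw \<open>u \<in> W\<close> by auto
      qed
    qed
  qed
qed

lemma split_Un_Times_closed:
  assumes Q: "equiv A Q" and W: "\<And>j. j \<in> W \<Longrightarrow> Q `` {j} \<subseteq> W" and i: "i \<in> A" "i \<notin> W"
  shows "{(u, v). (u, v) \<in> Q \<union> (W \<union> Q `` {i}) \<times> (W \<union> Q `` {i}) \<and> (u \<in> W \<longleftrightarrow> v \<in> W)} = Q \<union> W \<times> W"
proof (intro equalityI subrelI)
  fix u v assume uv: "(u, v) \<in> {(u, v). (u, v) \<in> Q \<union> (W \<union> Q `` {i}) \<times> (W \<union> Q `` {i}) \<and> (u \<in> W \<longleftrightarrow> v \<in> W)}"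
  show "(u, v) \<in> Q \<union> W \<times> W"
  proof (cases "u \<in> W")
    case False
    with uv have "(u, v) \<in> Q \<or> (u \<in> Q `` {i} \<and> v \<in> Q `` {i})" by auto
    then show ?thesis using Q by (auto elim: equivE dest: symD transD)
  qed (use uv in auto)
next
  fix u v assume uv: "(u, v) \<in> Q \<union> W \<times> W"
  have "u \<in> W \<longleftrightarrow> v \<in> W" if "(u, v) \<in> Q"
  proof -
    have "(v, u) \<in> Q" using that Q by (meson equivE symD)
    then show ?thesis using W that by blast
  qed
  then show "(u, v) \<in> {(u, v). (u, v) \<in> Q \<union> (W \<union> Q `` {i}) \<times> (W \<union> Q `` {i}) \<and> (u \<in> W \<longleftrightarrow> v \<in> W)}"
    using uv by auto
qed

text \<open>Downward induction from the full relation: the class \<open>W \<union> C'\<close>, with \<open>C'\<close> a further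
  \<open>Q\<close>-class, is split into \<open>W\<close> and \<open>C'\<close> by \<open>idem_of_split_class\<close>, using the two points
  \<open>a \<noteq> b\<close> of \<open>W\<close>.\<close>

lemma idem_of_Un_Times_closed:
  assumes ss: "subsemigroup n T" and iso: "isolated n T" and U: "idem_of n ({1..n} \<times> {1..n}) \<in> T"
    and Q: "equiv {1..n} Q" and ab: "(a, b) \<in> Q" "a \<noteq> b"
  shows "Q `` {a} \<subseteq> W \<Longrightarrow> W \<subseteq> {1..n} \<Longrightarrow> (\<And>i. i \<in> W \<Longrightarrow> Q `` {i} \<subseteq> W) \<Longrightarrow>
    idem_of n (Q \<union> W \<times> W) \<in> T"
proof (induction "card ({1..n} - W)" arbitrary: W rule: less_induct)
  have QN: "Q \<subseteq> {1..n} \<times> {1..n}" using Q by (simp add: equiv_def)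
  have Qsym: "(u, v) \<in> Q \<Longrightarrow> (v, u) \<in> Q" for u v using Q unfolding equiv_def sym_def by blast
  have N: "a \<in> {1..n}" "b \<in> {1..n}" using ab QN by auto
  have aC: "a \<in> Q `` {a}" "b \<in> Q `` {a}" using ab equiv_refl_onD[OF Q N(1)] by auto
  case less
  show ?case
  proof (cases "W = {1..n}")
    case True
    then have "Q \<union> W \<times> W = {1..n} \<times> {1..n}" using QN by auto
    then show ?thesis using U by simp
  next
    case False
    then obtain i where i: "i \<in> {1..n}" "i \<notin> W" using less(3) by blast
    define C' where "C' = Q `` {i}"
    define W' where "W' = W \<union> C'"
    have iC': "i \<in> C'" using equiv_refl_onD[OF Q i(1)] unfolding C'_def by simp
    have C'N: "C' \<subseteq> {1..n}" using QN unfolding C'_def by auto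
    have disj: "C' \<inter> W = {}"
    proof (rule ccontr)
      assume "C' \<inter> W \<noteq> {}"
      then obtain j where "j \<in> C'" "j \<in> W" by blast
      then have "(j, i) \<in> Q" using Qsym unfolding C'_def by blast
      then show False using less(4)[OF \<open>j \<in> W\<close>] i(2) by blast
    qed
    have W'N: "W' \<subseteq> {1..n}" using less(3) C'N unfolding W'_def by blast
    have clW': "Q `` {j} \<subseteq> W'" if "j \<in> W'" for j
    proof (cases "j \<in> W")
      case True then show ?thesis using less(4) unfolding W'_def by blast
    next
      case False
      then have "j \<in> C'" using that unfolding W'_def by blast
      then have "Q `` {j} = C'" using equiv_class_eq[OF Q] Qsym unfolding C'_def by blast
      then show ?thesis unfolding W'_def by blast
    qed
    have "{1..n} - W' \<subset> {1..n} - W" using i iC' unfolding W'_def by blast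
    then have "card ({1..n} - W') < card ({1..n} - W)" by (intro psubset_card_mono) auto
    moreover have "Q `` {a} \<subseteq> W'" using less(2) unfolding W'_def by blast
    ultimately have IH: "idem_of n (Q \<union> W' \<times> W') \<in> T" using less(1) W'N clW' by blast
    define P' where "P' = Q \<union> W' \<times> W'"
    have P': "equiv {1..n} P'" unfolding P'_def by (rule equiv_Un_Times_closed[OF Q W'N clW'])
    have aW: "a \<in> W" using aC less(2) by blast
    have cls: "W' = P' `` {a}"
    proof -
      have "Q `` {a} \<subseteq> W'" using clW' aW unfolding W'_def by blast
      moreover have "a \<in> W'" using aW unfolding W'_def by blast
      ultimately show ?thesis unfolding P'_def by blast
    qed
    have sp: "idem_of n {(u, v). (u, v) \<in> P' \<and> (u \<in> W \<longleftrightarrow> v \<in> W)} \<in> T"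
      by (rule idem_of_split_class[OF ss iso P' IH[folded P'_def] N(1) cls, of W a b i])
         (use aC less(2) ab(2) i iC' in \<open>auto simp: W'_def\<close>)
    have "{(u, v). (u, v) \<in> P' \<and> (u \<in> W \<longleftrightarrow> v \<in> W)} = Q \<union> W \<times> W"
      unfolding P'_def W'_def C'_def by (rule split_Un_Times_closed[OF Q less(4) i(1) i(2)])
    then show ?thesis using sp by simp
  qed
qed

lemma idem_of_all:
  assumes ss: "subsemigroup n T" and iso: "isolated n T" and U: "idem_of n ({1..n} \<times> {1..n}) \<in> T"
    and Q: "equiv {1..n} Q" and nd: "Q \<noteq> Id_on {1..n}"
  shows "idem_of n Q \<in> T"
proof -
  obtain a b where ab: "(a, b) \<in> Q" "a \<noteq> b"
  proof -
    obtain z where "z \<in> Q" "z \<notin> Id_on {1..n}" using equiv_not_subset_Id_on[OF Q nd] by blast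
    then show ?thesis using that equiv_type[OF Q] by (cases z) auto
  qed
  have "Q `` {a} \<subseteq> {1..n}" using equiv_type[OF Q] by auto
  moreover have "Q `` {i} \<subseteq> Q `` {a}" if "i \<in> Q `` {a}" for i
    using that equiv_class_eq[OF Q] by blast
  ultimately have "idem_of n (Q \<union> Q `` {a} \<times> Q `` {a}) \<in> T"
    using idem_of_Un_Times_closed[OF ss iso U Q ab] by blast
  moreover have "Q `` {a} \<times> Q `` {a} \<subseteq> Q" using Q unfolding equiv_def sym_def trans_def by blast
  ultimately show ?thesis by (simp add: sup_absorb1)
qed

lemma rel_map_Id_on:
  assumes s: "\<sigma> ` {1..n::nat} = {1..n}"
  shows "rel_map \<sigma> (Id_on {1..n}) = Id_on {1..n}"
proof (intro equalityI subsetI)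
  fix z assume "z \<in> rel_map \<sigma> (Id_on {1..n})"
  then obtain i where "i \<in> {1..n}" "z = (\<sigma> i, \<sigma> i)" by (auto simp: rel_map_def)
  moreover then have "\<sigma> i \<in> {1..n}" using s by blast
  ultimately show "z \<in> Id_on {1..n}" by auto
next
  fix z assume "z \<in> Id_on {1..n}"
  then obtain x where x: "x \<in> {1..n}" "z = (x, x)" by blast
  then have "x \<in> \<sigma> ` {1..n}" using s by simp
  then obtain i where "i \<in> {1..n}" "x = \<sigma> i" by blast
  then have "(i, i) \<in> Id_on {1..n}" "z = (\<sigma> i, \<sigma> i)" using x by auto
  then show "z \<in> rel_map \<sigma> (Id_on {1..n})" using rel_mapI by metis
qed

lemma idem_of_atom_conjugate:
  assumes ss: "subsemigroup n T" and U: "sym_units n \<subseteq> T"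
    and N: "a \<in> {1..n}" "b \<in> {1..n}" "c \<in> {1..n}" and d: "a \<noteq> b" "a \<noteq> c" "b \<noteq> c"
    and e0: "idem_of n (Id_on {1..n} \<union> {(a, b), (b, a)}) \<in> T"
  shows "idem_of n (Id_on {1..n} \<union> {(c, b), (b, c)}) \<in> T"
proof -
  define P0 where "P0 = Id_on {1..n} \<union> {(a, b), (b, a)}"
  define P1 where "P1 = Id_on {1..n} \<union> {(c, b), (b, c)}"
  have P0: "equiv {1..n} P0" unfolding P0_def by (rule equiv_atom) (use N d in \<open>auto simp: atom_def\<close>)
  have P1: "equiv {1..n} P1" unfolding P1_def by (rule equiv_atom) (use N d in \<open>auto simp: atom_def\<close>)
  define \<sigma> where "\<sigma> = Transposition.transpose a c"
  have inv: "\<sigma> (\<sigma> i) = i" for i by (auto simp: \<sigma>_def transpose_def)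
  have sN: "\<sigma> i \<in> {1..n}" if "i \<in> {1..n}" for i using that N by (auto simp: \<sigma>_def transpose_def)
  have s: "\<sigma> ` {1..n} = {1..n}" by (rule involution_image[OF inv sN])
  have i: "id ` {1..n} = {1..n}" by simp
  have Dl: "equiv {1..n} (Id_on {1..n})" by (rule equiv_Id_on)
  let ?u = "uniform n (Id_on {1..n}) \<sigma>"
  have u: "?u \<in> dual_sym n" by (rule uniform_in_dual_sym[OF Dl s])
  have "ker ?u = Id_on {1..n}" by (rule ker_uniform[OF Dl s])
  then have uT: "?u \<in> T" using U sym_units_iff u by blast
  have e0': "idem_of n P0 \<in> T" using e0 unfolding P0_def .
  have "rel_map \<sigma> P0 = P1"
  proof -
    have "rel_map \<sigma> P0 = rel_map \<sigma> (Id_on {1..n}) \<union> rel_map \<sigma> {(a, b), (b, a)}" unfolding P0_def by (rule rel_map_Un)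
    also have "\<dots> = P1" unfolding rel_map_Id_on[OF s] P1_def using d by (auto simp: rel_map_def \<sigma>_def transpose_def)
    finally show ?thesis .
  qed
  moreover have "(Id_on {1..n} \<union> P1)\<^sup>+ = P1" using equiv_trancl_eq[OF P1] Id_on_subset_equiv[OF P1] by (simp add: sup_absorb2)
  ultimately have 1: "dmult ?u (idem_of n P0) = uniform n P1 \<sigma>"
    unfolding idem_of_def using uniform_dmult[OF Dl P0 s i] by simp
  have "(P1 \<union> rel_map \<sigma> (Id_on {1..n}))\<^sup>+ = P1" using equiv_trancl_eq[OF P1] Id_on_subset_equiv[OF P1] rel_map_Id_on[OF s] by (simp add: sup_absorb1)
  moreover have "uniform n P1 (\<sigma> \<circ> \<sigma>) = uniform n P1 id" by (rule uniform_cong) (simp add: inv)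
  ultimately have 2: "dmult (uniform n P1 \<sigma>) ?u = idem_of n P1"
    unfolding idem_of_def using uniform_dmult[OF P1 Dl s s] by simp
  have "uniform n P1 \<sigma> \<in> T" using subsemigroup_dmult[OF ss uT e0'] 1 by simp
  then have "idem_of n P1 \<in> T" using subsemigroup_dmult[OF ss _ uT] 2 by metis
  then show ?thesis unfolding P1_def .
qed

lemma atom_minimal:
  assumes A: "atom n K" and Q: "equiv {1..n} Q" and sub: "Q \<subseteq> K" and nd: "Q \<noteq> Id_on {1..n}"
  shows "Q = K"
proof -
  obtain a b where ab: "a \<in> {1..n}" "b \<in> {1..n}" "a \<noteq> b" "K = Id_on {1..n} \<union> {(a, b), (b, a)}"
    using A unfolding atom_def by blast
  have QN: "Q \<subseteq> {1..n} \<times> {1..n}" using Q by (simp add: equiv_def)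
  obtain z where z: "z \<in> Q" "z \<notin> Id_on {1..n}" using equiv_not_subset_Id_on[OF Q nd] by blast
  then have "z = (a, b) \<or> z = (b, a)" using sub ab(4) by auto
  then have "(a, b) \<in> Q" "(b, a) \<in> Q" using z(1) Q unfolding equiv_def sym_def by blast+
  then show ?thesis using sub ab(4) Id_on_subset_equiv[OF Q] by blast
qed

lemma equiv_full: "equiv {1..n::nat} ({1..n} \<times> {1..n})"
  by (rule equivI) (auto simp: refl_on_def sym_def trans_def)

lemma full_neq_Id_on: "n \<ge> 2 \<Longrightarrow> {1..n::nat} \<times> {1..n} \<noteq> Id_on {1..n}"
proof
  assume n: "n \<ge> 2" and e: "{1..n} \<times> {1..n} = Id_on {1..n}"
  have "(1::nat, 2::nat) \<in> {1..n} \<times> {1..n}" using n by auto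
  then have "(1::nat, 2::nat) \<in> Id_on {1..n}" unfolding e .
  then show False by auto
qed

lemma isolated_subsemigroup_dual_sym: "subsemigroup n (dual_sym n) \<and> isolated n (dual_sym n)"
  unfolding subsemigroup_def isolated_def using idem_of_in_dual_sym[OF equiv_Id_on, of n] dmult_in_dual_sym by blast

lemma isolated_subsemigroup_sym_units: "subsemigroup n (sym_units n) \<and> isolated n (sym_units n)"
proof -
  have "idem_of n (Id_on {1..n}) \<in> sym_units n" using sym_units_iff idem_of_in_dual_sym[OF equiv_Id_on] ker_idem_of[OF equiv_Id_on] by blast
  moreover have "\<forall>a\<in>dual_sym n. \<forall>k\<ge>1. dpow a k \<in> sym_units n \<longrightarrow> a \<in> sym_units n"
    using dpow_nonunit by blast
  ultimately show ?thesis unfolding subsemigroup_def isolated_def using sym_units_subset dmult_sym_units by blast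
qed

lemma isolated_subsemigroup_nonunits: "n \<ge> 2 \<Longrightarrow> subsemigroup n (dual_sym n - sym_units n) \<and> isolated n (dual_sym n - sym_units n)"
proof -
  assume n: "n \<ge> 2"
  have "idem_of n ({1..n} \<times> {1..n}) \<in> dual_sym n - sym_units n"
    using sym_units_iff idem_of_in_dual_sym[OF equiv_full] ker_idem_of[OF equiv_full] full_neq_Id_on[OF n] by blast
  moreover have "\<forall>a\<in>dual_sym n. \<forall>k\<ge>1. dpow a k \<in> dual_sym n - sym_units n \<longrightarrow> a \<in> dual_sym n - sym_units n"
    using dpow_sym_units by blast
  moreover have "\<forall>a\<in>dual_sym n - sym_units n. \<forall>b\<in>dual_sym n - sym_units n. dmult a b \<in> dual_sym n - sym_units n"
    using dmult_nonunit by blast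
  ultimately show ?thesis unfolding subsemigroup_def isolated_def by blast
qed

lemma isolated_subsemigroup_H_class:
  assumes n: "n \<ge> 2" and e: "e \<in> dual_sym n" and ide: "idempotent e" and r: "rank e = n - 1"
  shows "subsemigroup n (H_class n e) \<and> isolated n (H_class n e)"
proof -
  define K where "K = ker e"
  have K: "equiv {1..n} K" unfolding K_def by (rule equiv_ker[OF e])
  have ee: "e = idem_of n K" unfolding K_def by (rule idempotent_eq_idem_of[OF e]) (rule ide)
  have "card ({1..n} // K) = n - 1" using r card_idem_of[OF K] ee by (simp add: rank_def)
  then have A: "atom n K" by (rule atom_if_card_classes[OF K n])
  have H: "H_class n e = {x \<in> dual_sym n. ker x = K \<and> coker x = K}" using H_class_idem_of[OF K] ee by simp
  have ne: "e \<in> H_class n e" unfolding H using e ee ker_idem_of[OF K] coker_idem_of[OF K] by simp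
  have cl: "\<forall>a\<in>H_class n e. \<forall>b\<in>H_class n e. dmult a b \<in> H_class n e"
  proof (intro ballI)
    fix a b assume "a \<in> H_class n e" "b \<in> H_class n e"
    then have ab: "a \<in> dual_sym n" "ker a = K" "coker a = K" "b \<in> dual_sym n" "ker b = K" "coker b = K" unfolding H by auto
    note m = dmult_ker_coker[OF ab(1-3) ab(4-6)]
    show "dmult a b \<in> H_class n e" unfolding H using m by simp
  qed
  have iso: "\<forall>a\<in>dual_sym n. \<forall>k\<ge>1. dpow a k \<in> H_class n e \<longrightarrow> a \<in> H_class n e"
  proof (intro ballI allI impI)
    fix a k assume a: "a \<in> dual_sym n" and k: "1 \<le> k" and ak: "dpow a k \<in> H_class n e"
    have "dpow a k \<in> {x \<in> dual_sym n. ker x = K \<and> coker x = K}" using ak H by simp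
    then have akK: "ker (dpow a k) = K" "coker (dpow a k) = K" by simp_all
    have s1: "ker a \<subseteq> K" using ker_dpow_subset[OF a k] akK by simp
    have s2: "coker a \<subseteq> K" using coker_dpow_subset[OF a k] akK by simp
    have "a \<notin> sym_units n"
    proof
      assume "a \<in> sym_units n"
      then have "dpow a k \<in> sym_units n" using dpow_sym_units k by blast
      then have "K = Id_on {1..n}" using sym_units_iff akK by auto
      then show False using atom_neq_Id_on[OF A] by simp
    qed
    then have nk: "ker a \<noteq> Id_on {1..n}" using sym_units_iff a by blast
    then have nc: "coker a \<noteq> Id_on {1..n}" using ker_eq_Id_if_coker_eq_Id[OF a] by blast
    have "ker a = K" by (rule atom_minimal[OF A equiv_ker[OF a] s1 nk])
    moreover have "coker a = K" by (rule atom_minimal[OF A equiv_coker[OF a] s2 nc])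
    ultimately show "a \<in> H_class n e" unfolding H using a by simp
  qed
  have "H_class n e \<subseteq> dual_sym n" unfolding H by blast
  then show ?thesis unfolding subsemigroup_def isolated_def using ne cl iso by blast
qed

section \<open>Classification\<close>

lemma isolated_subsemigroup_eq_sym_units:
  assumes ss: "subsemigroup n T" and iso: "isolated n T" and sub: "T \<subseteq> sym_units n"
  shows "T = sym_units n"
proof -
  obtain u where "u \<in> T" using ss by (auto simp: subsemigroup_def)
  then show ?thesis using isolated_sym_units_subset[OF ss iso] sub by blast
qed

lemma nonunits_subset_isolated:
  assumes ss: "subsemigroup n T" and iso: "isolated n T" and full: "idem_of n ({1..n} \<times> {1..n}) \<in> T"
  shows "dual_sym n - sym_units n \<subseteq> T"
proof
  fix y assume y: "y \<in> dual_sym n - sym_units n"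
  obtain m where m: "m \<ge> 2" "dpow y m = idem_of n (ker (dpow y m))"
    using ex_dpow_eq_idem_of y by blast
  have ym: "dpow y m \<in> dual_sym n - sym_units n" using dpow_nonunit[OF y] m by simp
  have "idem_of n (ker (dpow y m)) \<in> T"
    using idem_of_all[OF ss iso full equiv_ker] ym sym_units_iff by blast
  then show "y \<in> T" using isolatedD[OF iso, of y m] y m by simp
qed

lemma ex_idem_of_nonunit:
  assumes ss: "subsemigroup n T" and x: "x \<in> T" "x \<notin> sym_units n"
  obtains K where "equiv {1..n} K" "K \<noteq> Id_on {1..n}" "idem_of n K \<in> T"
proof -
  have xD: "x \<in> dual_sym n" using x subsemigroup_subset[OF ss] by blast
  obtain m where m: "m \<ge> 2" "dpow x m = idem_of n (ker (dpow x m))" using ex_dpow_eq_idem_of[OF xD] by blast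
  have xm: "dpow x m \<in> dual_sym n - sym_units n" using dpow_nonunit[of x n m] x xD m by simp
  show ?thesis
  proof (rule that)
    show "equiv {1..n} (ker (dpow x m))" using equiv_ker xm by blast
    show "ker (dpow x m) \<noteq> Id_on {1..n}" using xm sym_units_iff by blast
    show "idem_of n (ker (dpow x m)) \<in> T" using subsemigroup_dpow[OF ss x(1), of m] m by simp
  qed
qed

lemma isolated_subsemigroup_cases_full:
  assumes ss: "subsemigroup n T" and iso: "isolated n T" and full: "idem_of n ({1..n} \<times> {1..n}) \<in> T"
  shows "T = dual_sym n \<or> T = dual_sym n - sym_units n"
proof (cases "T \<inter> sym_units n = {}")
  case False
  then have "sym_units n \<subseteq> T" using isolated_sym_units_subset[OF ss iso] by blast
  then show ?thesis using nonunits_subset_isolated[OF ss iso full] subsemigroup_subset[OF ss] by blast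
qed (use nonunits_subset_isolated[OF ss iso full] subsemigroup_subset[OF ss] in blast)

text \<open>Two different atoms generate an equivalence with two pairs.\<close>

lemma atomic_idem_of_unique:
  assumes ss: "subsemigroup n T"
    and no_pairs: "\<And>P. equiv {1..n} P \<Longrightarrow> idem_of n P \<in> T \<Longrightarrow> \<not> two_pairs P"
    and K: "atom n K" "idem_of n K \<in> T" and Q: "atom n Q" "idem_of n Q \<in> T"
  shows "Q = K"
proof (rule ccontr)
  assume ne: "Q \<noteq> K"
  obtain a b where ab: "a \<noteq> b" "K = Id_on {1..n} \<union> {(a, b), (b, a)}"
    using K(1) unfolding atom_def by blast
  obtain c d where cd: "c \<noteq> d" "Q = Id_on {1..n} \<union> {(c, d), (d, c)}"
    using Q(1) unfolding atom_def by blast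
  have "{a, b} \<noteq> {c, d}" using ab cd ne by (auto simp: doubleton_eq_iff)
  moreover have "(a, b) \<in> (K \<union> Q)\<^sup>+" "(c, d) \<in> (K \<union> Q)\<^sup>+" using ab cd by auto
  ultimately have "two_pairs ((K \<union> Q)\<^sup>+)" unfolding two_pairs_def using ab(1) cd(1) by blast
  moreover have "idem_of n ((K \<union> Q)\<^sup>+) \<in> T"
    using idem_of_dmult_idem_of[OF equiv_atom equiv_atom, OF K(1) Q(1)] subsemigroup_dmult[OF ss K(2) Q(2)]
    by simp
  ultimately show False
    using no_pairs equiv_trancl_join[OF equiv_atom equiv_atom, OF K(1) Q(1)] by blast
qed

lemma atomic_isolated_no_units:
  assumes ss: "subsemigroup n T" and iso: "isolated n T"
    and no_pairs: "\<And>P. equiv {1..n} P \<Longrightarrow> idem_of n P \<in> T \<Longrightarrow> \<not> two_pairs P"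
    and K: "atom n K" "idem_of n K \<in> T" and not_full: "K \<noteq> {1..n} \<times> {1..n}"
  shows "T \<inter> sym_units n = {}"
proof (rule ccontr)
  assume "T \<inter> sym_units n \<noteq> {}"
  then have U: "sym_units n \<subseteq> T" using isolated_sym_units_subset[OF ss iso] by blast
  obtain a b where ab: "a \<in> {1..n}" "b \<in> {1..n}" "a \<noteq> b" "K = Id_on {1..n} \<union> {(a, b), (b, a)}"
    using K(1) unfolding atom_def by blast
  have "\<exists>c. c \<in> {1..n} \<and> c \<noteq> a \<and> c \<noteq> b"
  proof (rule ccontr)
    assume "\<not> (\<exists>c. c \<in> {1..n} \<and> c \<noteq> a \<and> c \<noteq> b)"
    then have "{1..n} \<subseteq> {a, b}" by blast
    then have "K = {1..n} \<times> {1..n}" using ab equiv_atom[OF K(1)] unfolding equiv_def by auto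
    then show False using not_full by simp
  qed
  then obtain c where c: "c \<in> {1..n}" "c \<noteq> a" "c \<noteq> b" by blast
  have atom: "atom n (Id_on {1..n} \<union> {(c, b), (b, c)})"
    using ab c unfolding atom_def by blast
  have "idem_of n (Id_on {1..n} \<union> {(c, b), (b, c)}) \<in> T"
    using idem_of_atom_conjugate[OF ss U ab(1,2) c(1) ab(3) c(2)[symmetric]] c(3) ab(4) K(2) by simp
  then have "Id_on {1..n} \<union> {(c, b), (b, c)} = K"
    using atomic_idem_of_unique[OF ss no_pairs K(1) K(2) atom] by blast
  then show False using ab(4) c by auto
qed

lemma atomic_isolated_eq_H_class:
  assumes ss: "subsemigroup n T" and iso: "isolated n T"
    and no_pairs: "\<And>P. equiv {1..n} P \<Longrightarrow> idem_of n P \<in> T \<Longrightarrow> \<not> two_pairs P"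
    and K: "atom n K" "idem_of n K \<in> T" and no_units: "T \<inter> sym_units n = {}"
  shows "T = H_class n (idem_of n K)"
  unfolding H_class_idem_of[OF equiv_atom[OF K(1)]]
proof (intro equalityI subsetI)
  fix y assume yT: "y \<in> T"
  then have y: "y \<in> dual_sym n - sym_units n" using subsemigroup_subset[OF ss] no_units by blast
  then have yD: "y \<in> dual_sym n" by simp
  obtain m where m: "m \<ge> 2" "dpow y m = idem_of n (ker (dpow y m))"
    using ex_dpow_eq_idem_of[OF yD] by blast
  have ym: "dpow y m \<in> dual_sym n - sym_units n" using dpow_nonunit[OF y] m by simp
  have ymT: "idem_of n (ker (dpow y m)) \<in> T" using subsemigroup_dpow[OF ss yT, of m] m by simp
  have "atom n (ker (dpow y m))"
  proof (rule atom_if_not_two_pairs)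
    show "equiv {1..n} (ker (dpow y m))" using equiv_ker ym by blast
    then show "\<not> two_pairs (ker (dpow y m))" using no_pairs ymT by blast
    show "ker (dpow y m) \<noteq> Id_on {1..n}" using ym sym_units_iff by blast
  qed
  then have Ky: "ker (dpow y m) = K"
    using atomic_idem_of_unique[OF ss no_pairs K(1) K(2)] ymT by blast
  have "coker (dpow y m) = K" using m(2) Ky coker_idem_of[OF equiv_atom[OF K(1)]] by simp
  then have sub: "ker y \<subseteq> K" "coker y \<subseteq> K"
    using ker_dpow_subset[OF yD, of m] coker_dpow_subset[OF yD, of m] Ky m by auto
  have "ker y \<noteq> Id_on {1..n}" using y sym_units_iff by blast
  then have "ker y = K" "coker y = K"
    using atom_minimal[OF K(1) equiv_ker[OF yD] sub(1)] atom_minimal[OF K(1) equiv_coker[OF yD] sub(2)]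
      ker_eq_Id_if_coker_eq_Id[OF yD] by blast+
  then show "y \<in> {y \<in> dual_sym n. ker y = K \<and> coker y = K}" using yD by blast
qed (use isolated_mem_if_ker_coker[OF iso equiv_atom[OF K(1)] K(2)] in blast)

lemma isolated_subsemigroup_cases:
  assumes n: "n \<ge> 2" and ss: "subsemigroup n T" and iso: "isolated n T"
  shows "T = dual_sym n \<or> T = sym_units n \<or> T = dual_sym n - sym_units n \<or>
         (\<exists>e. e \<in> dual_sym n \<and> idempotent e \<and> rank e = n - 1 \<and> T = H_class n e)"
proof (cases "T \<subseteq> sym_units n")
  case True
  then show ?thesis using isolated_subsemigroup_eq_sym_units[OF ss iso] by blast
next
  case False
  then obtain K where K: "equiv {1..n} K" "K \<noteq> Id_on {1..n}" "idem_of n K \<in> T"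
    using ex_idem_of_nonunit[OF ss] by blast
  show ?thesis
  proof (cases "idem_of n ({1..n} \<times> {1..n}) \<in> T \<or> (\<exists>P. equiv {1..n} P \<and> idem_of n P \<in> T \<and> two_pairs P)")
    case True
    then have "idem_of n ({1..n} \<times> {1..n}) \<in> T" using idem_of_full[OF ss iso] by blast
    then show ?thesis using isolated_subsemigroup_cases_full[OF ss iso] by blast
  next
    case False
    then have no_pairs: "\<And>P. equiv {1..n} P \<Longrightarrow> idem_of n P \<in> T \<Longrightarrow> \<not> two_pairs P" by blast
    have atom: "atom n K" using atom_if_not_two_pairs[OF K(1,2)] no_pairs[OF K(1,3)] by blast
    have "K \<noteq> {1..n} \<times> {1..n}" using False K(3) by blast
    then have "T = H_class n (idem_of n K)"
      using atomic_isolated_eq_H_class[OF ss iso no_pairs atom K(3)]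
        atomic_isolated_no_units[OF ss iso no_pairs atom K(3)] by blast
    moreover have "rank (idem_of n K) = n - 1"
      using card_idem_of[OF K(1)] card_classes_atom[OF atom] by (simp add: rank_def)
    ultimately show ?thesis
      using idem_of_in_dual_sym[OF K(1)] idempotent_idem_of[OF K(1)] by blast
  qed
qed

theorem mainTheorem12:
  fixes n :: nat
  assumes "n \<ge> 2"
  shows "{T. subsemigroup n T \<and> isolated n T} =
           {dual_sym n, sym_units n, dual_sym n - sym_units n} \<union>
           {H_class n e | e. e \<in> dual_sym n \<and> idempotent e \<and> rank e = n - 1}"
proof (intro equalityI subsetI)
  fix T assume "T \<in> {T. subsemigroup n T \<and> isolated n T}"
  then show "T \<in> {dual_sym n, sym_units n, dual_sym n - sym_units n} \<union>
      {H_class n e | e. e \<in> dual_sym n \<and> idempotent e \<and> rank e = n - 1}"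
    using isolated_subsemigroup_cases[OF assms] by blast
next
  fix T assume "T \<in> {dual_sym n, sym_units n, dual_sym n - sym_units n} \<union>
      {H_class n e | e. e \<in> dual_sym n \<and> idempotent e \<and> rank e = n - 1}"
  then show "T \<in> {T. subsemigroup n T \<and> isolated n T}"
    using isolated_subsemigroup_dual_sym isolated_subsemigroup_sym_units
      isolated_subsemigroup_nonunits[OF assms] isolated_subsemigroup_H_class[OF assms]
    by blast
qed

end
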